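(* Let $q\ge 1$, let $G$ be a finite subgroup of the unitary group $\mathrm{U}(q)$, and let $\boldsymbol{\lambda}$ be an irreducible complex representation of $G$ with character $\lambda$. Let $f(g)=\operatorname{tr}(g)$ denote the character of the defining representation $\boldsymbol{f}$ of $G\subset \mathrm{U}(q)$. Then the following are equivalent: (a) $G$ is a $\boldsymbol{\lambda}$-twisted unitary $t$-group; (b) $\lVert \lambda f^{t}\rVert = \lVert F^{t}\rVert$; (c) $\langle \lambda^*\lambda, R^{\downarrow}\rangle = 0$ for every irreducible representation $\boldsymbol{R}\in\mathcal{E}_t$ with $\boldsymbol{R}$ not the trivial representation.
   Context: For class functions $\chi,\psi$ on the finite group $G$, $\langle \chi,\psi\rangle := \frac{1}{|G|}\sum_{g\in G}\overline{\chi(g)}\psi(g)$, and $\lVert \chi\rVert := \langle\chi,\chi\rangle$ (no square root). Products of characters are pointwise products; $\lambda^*$ is the complex conjugate of $\lambda$. $\boldsymbol{F}$ denotes the defining (fundamental) representation of $\mathrm{U}(q)$ with character $F(U)=\operatorname{tr}U$, and $\lVert F^t\rVert := \int_{\mathrm{U}(q)} |\operatorname{tr} U|^{2t}\,dU$ with respect to the normalized Haar measure. $\mathcal{E}_t$ is the set of irreducible representations of $\mathrm{U}(q)$ occurring with nonzero multiplicity in $(\boldsymbol{F}\otimes\boldsymbol{F}^* )^{\otimes t}$ (where $\boldsymbol{F}^*$ is the dual/complex-conjugate representation), and for $\boldsymbol{R}\in\mathcal{E}_t$, $R^{\downarrow}$ is the character of the restriction of $\boldsymbol{R}$ to $G$.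 Definition: $G$ is a $\boldsymbol{\lambda}$-twisted unitary $t$-group if $\frac{1}{|G|}\sum_{g\in G}|\lambda(g)|^2 \,(g\otimes \bar g)^{\otimes t} = \int_{\mathrm{U}(q)} (U\otimes \bar U)^{\otimes t}\,dU$, where $\bar g$ is the entrywise complex conjugate and the integral is over normalized Haar measure. *)

theory Defs
  imports "HOL-Probability.Probability" "Jordan_Normal_Form.Matrix"
begin

definition mtrace :: "complex mat \<Rightarrow> complex" where
  "mtrace A = (\<Sum>i<dim_row A. A $$ (i, i))"

definition mconj :: "complex mat \<Rightarrow> complex mat" where
  "mconj A = map_mat cnj A"

definition madj :: "complex mat \<Rightarrow> complex mat" where
  "madj A = transpose_mat (mconj A)"

definition kron :: "complex mat \<Rightarrow> complex mat \<Rightarrow> complex mat" where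
  "kron A B = mat (dim_row A * dim_row B) (dim_col A * dim_col B)
     (\<lambda>(i, j). A $$ (i div dim_row B, j div dim_col B) * B $$ (i mod dim_row B, j mod dim_col B))"

fun tensor_pow :: "complex mat \<Rightarrow> nat \<Rightarrow> complex mat" where
  "tensor_pow A 0 = 1\<^sub>m 1"
| "tensor_pow A (Suc t) = kron (tensor_pow A t) A"

definition FFt :: "nat \<Rightarrow> complex mat \<Rightarrow> complex mat" where
  "FFt t U = tensor_pow (kron U (mconj U)) t"

definition unitary_group :: "nat \<Rightarrow> complex mat set" where
  "unitary_group q = {U \<in> carrier_mat q q. U * madj U = 1\<^sub>m q}"

text \<open>Borel sigma-algebra of \<open>U(q)\<close> as a subspace of \<open>\<complex>^(q\<times>q)\<close>: generated by
  preimages of open sets under the coordinate maps.\<close>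
definition unitary_borel :: "nat \<Rightarrow> complex mat set set" where
  "unitary_borel q = sigma_sets (unitary_group q)
     {{U \<in> unitary_group q. U $$ (i, j) \<in> A} | i j A. i < q \<and> j < q \<and> open A}"

definition haar_measure :: "nat \<Rightarrow> complex mat measure \<Rightarrow> bool" where
  "haar_measure q M \<longleftrightarrow> prob_space M \<and> space M = unitary_group q
     \<and> sets M = unitary_borel q
     \<and> (\<forall>V \<in> unitary_group q. (\<lambda>U. V * U) \<in> M \<rightarrow>\<^sub>M M \<and> distr M M (\<lambda>U. V * U) = M)"

definition mat_integral :: "complex mat measure \<Rightarrow> nat \<Rightarrow> (complex mat \<Rightarrow> complex mat) \<Rightarrow> complex mat" where
  "mat_integral M n T = mat n n (\<lambda>(i, j). LINT U|M. T U $$ (i, j))"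

definition finite_subgroup_unitary :: "nat \<Rightarrow> complex mat set \<Rightarrow> bool" where
  "finite_subgroup_unitary q G \<longleftrightarrow> finite G \<and> G \<subseteq> unitary_group q \<and> 1\<^sub>m q \<in> G
     \<and> (\<forall>g \<in> G. \<forall>h \<in> G. g * h \<in> G) \<and> (\<forall>g \<in> G. madj g \<in> G)"

definition is_rep :: "complex mat set \<Rightarrow> nat \<Rightarrow> (complex mat \<Rightarrow> complex mat) \<Rightarrow> bool" where
  "is_rep H d \<rho> \<longleftrightarrow> (\<forall>g \<in> H. \<rho> g \<in> carrier_mat d d)
     \<and> (\<forall>g \<in> H. \<exists>B \<in> carrier_mat d d. \<rho> g * B = 1\<^sub>m d)
     \<and> (\<forall>g \<in> H. \<forall>h \<in> H. \<rho> (g * h) = \<rho> g * \<rho> h)"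

definition is_subspace :: "nat \<Rightarrow> complex vec set \<Rightarrow> bool" where
  "is_subspace d W \<longleftrightarrow> W \<subseteq> carrier_vec d \<and> 0\<^sub>v d \<in> W
     \<and> (\<forall>v \<in> W. \<forall>w \<in> W. v + w \<in> W) \<and> (\<forall>c. \<forall>v \<in> W. c \<cdot>\<^sub>v v \<in> W)"

definition irreducible_rep :: "complex mat set \<Rightarrow> nat \<Rightarrow> (complex mat \<Rightarrow> complex mat) \<Rightarrow> bool" where
  "irreducible_rep H d \<rho> \<longleftrightarrow> is_rep H d \<rho> \<and> d \<ge> 1
     \<and> (\<forall>W. is_subspace d W \<and> (\<forall>g \<in> H. \<forall>v \<in> W. \<rho> g *\<^sub>v v \<in> W)
            \<longrightarrow> W = {0\<^sub>v d} \<or> W = carrier_vec d)"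

text \<open>\<open>\<rho>\<close> (dimension \<open>d\<close>) occurs with nonzero multiplicity in \<open>\<sigma>\<close> (dimension \<open>n\<close>):
  the space of intertwiners \<open>Hom_H(\<rho>, \<sigma>)\<close> is nonzero.\<close>
definition occurs_in :: "complex mat set \<Rightarrow> nat \<Rightarrow> (complex mat \<Rightarrow> complex mat) \<Rightarrow> nat \<Rightarrow> (complex mat \<Rightarrow> complex mat) \<Rightarrow> bool" where
  "occurs_in H d \<rho> n \<sigma> \<longleftrightarrow> (\<exists>A \<in> carrier_mat n d. A \<noteq> 0\<^sub>m n d \<and> (\<forall>g \<in> H. \<sigma> g * A = A * \<rho> g))"

text \<open>The trivial representation (up to equivalence, for a \<open>d\<close>-dimensional representation).\<close>
definition trivial_rep :: "complex mat set \<Rightarrow> nat \<Rightarrow> (complex mat \<Rightarrow> complex mat) \<Rightarrow> bool" where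
  "trivial_rep H d \<rho> \<longleftrightarrow> d = 1 \<and> (\<forall>g \<in> H. \<rho> g = 1\<^sub>m 1)"

definition in_E :: "nat \<Rightarrow> nat \<Rightarrow> nat \<Rightarrow> (complex mat \<Rightarrow> complex mat) \<Rightarrow> bool" where
  "in_E q t d R \<longleftrightarrow> irreducible_rep (unitary_group q) d R
     \<and> occurs_in (unitary_group q) d R (q ^ (2 * t)) (FFt t)"

definition cinner :: "complex mat set \<Rightarrow> (complex mat \<Rightarrow> complex) \<Rightarrow> (complex mat \<Rightarrow> complex) \<Rightarrow> complex" where
  "cinner G chi psi = (1 / of_nat (card G)) * (\<Sum>g\<in>G. cnj (chi g) * psi g)"

definition cnorm :: "complex mat set \<Rightarrow> (complex mat \<Rightarrow> complex) \<Rightarrow> complex" where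
  "cnorm G chi = cinner G chi chi"

definition twisted_unitary_design :: "nat \<Rightarrow> complex mat measure \<Rightarrow> complex mat set \<Rightarrow> (complex mat \<Rightarrow> complex) \<Rightarrow> nat \<Rightarrow> bool" where
  "twisted_unitary_design q M G lam t \<longleftrightarrow>
     mat (q ^ (2 * t)) (q ^ (2 * t))
       (\<lambda>(i, j). (1 / of_nat (card G)) * (\<Sum>g\<in>G. of_real ((cmod (lam g))\<^sup>2) * FFt t g $$ (i, j)))
     = mat_integral M (q ^ (2 * t)) (FFt t)"

end

theory Submission
  imports Defs "Jordan_Normal_Form.Spectral_Radius"
begin

no_notation vec_nth (infixl \<open>$\<close> 90)

text \<open>
  Write \<open>\<Phi> U = (U \<otimes> conj U)\<^bsup>\<otimes>t\<^esup>\<close>, \<open>P = \<integral> \<Phi> U dU\<close> for its Haar average and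
  \<open>A = |G|\<inverse> \<Sum>\<^sub>g |\<lambda> g|\<^sup>2 \<Phi> g\<close> for its twisted average over \<open>G\<close>, so that (a) says \<open>A = P\<close>.
  \<open>P\<close> is the orthogonal projection onto the \<open>\<Phi>\<close>-invariant vectors and \<open>A P = P A = P\<close>.
  Unitarizing \<open>\<rho>\<close> and expanding \<open>|\<lambda>(h\<^sup>* k)|\<^sup>2\<close> shows that \<open>A\<close> is a Gram matrix, so
  \<open>\<langle>x, (A - P) x\<rangle> = \<langle>x - P x, A (x - P x)\<rangle> \<ge> 0\<close>: \<open>A - P\<close> is positive semidefinite and vanishes iff its
  trace does. As \<open>tr A = \<parallel>\<lambda> f\<^sup>t\<parallel>\<close> and \<open>tr P = \<parallel>F\<^sup>t\<parallel>\<close>, this is (a) \<open>\<longleftrightarrow>\<close> (b).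

  If \<open>J\<close> intertwines an irreducible constituent \<open>R\<close> of \<open>\<Phi>\<close> into \<open>\<Phi>\<close>, then \<open>A J = J B\<close> with
  \<open>B = |G|\<inverse> \<Sum>\<^sub>g |\<lambda> g|\<^sup>2 R g\<close> and \<open>tr B = \<langle>\<lambda>\<^sup>*\<lambda>, R\<down>\<rangle>\<close>. If \<open>A = P\<close>, the range of \<open>B\<close> is fixed by \<open>R\<close>,
  so \<open>B = 0\<close> unless \<open>R\<close> is trivial: (a) \<open>\<longrightarrow>\<close> (c). Conversely, under (c) the trace of \<open>A\<close> vanishes on every
  nontrivial irreducible invariant subspace, so by positivity of \<open>A - P\<close> and \<open>P\<close> the difference \<open>A - P\<close>
  vanishes there; it also vanishes on invariant vectors, and complete reducibility of the unitary
  representation \<open>\<Phi>\<close> gives \<open>A = P\<close>.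
\<close>

lemma row_col_scalar_prod[simp]: "i < dim_row A \<Longrightarrow> j < dim_col B \<Longrightarrow> dim_row B = dim_col A \<Longrightarrow>
   Matrix.row A i \<bullet> col B j = (\<Sum>k<dim_col A. A $$ (i,k) * B $$ (k,j))"
  unfolding scalar_prod_def by (simp add: atLeast0LessThan)

lemma row_vec_scalar_prod[simp]: "i < dim_row A \<Longrightarrow> dim_vec v = dim_col A \<Longrightarrow>
   Matrix.row A i \<bullet> v = (\<Sum>k<dim_col A. A $$ (i,k) * v $ k)"
  unfolding scalar_prod_def by (simp add: atLeast0LessThan)

lemma mult_mat_index_sum:
  assumes "A \<in> carrier_mat n m" "B \<in> carrier_mat m p" "i < n" "j < p"
  shows "(A * B) $$ (i,j) = (\<Sum>k<m. A $$ (i,k) * B $$ (k,j))"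
  using assms by (auto simp: scalar_prod_def atLeast0LessThan intro!: sum.cong)

lemma mult_mat_vec_index_sum:
  assumes "A \<in> carrier_mat n m" "v \<in> carrier_vec m" "i < n"
  shows "(A *\<^sub>v v) $ i = (\<Sum>k<m. A $$ (i,k) * v $ k)"
  using assms by (auto simp: scalar_prod_def atLeast0LessThan intro!: sum.cong)

lemma madj_dims[simp]: "dim_row (madj A) = dim_col A" "dim_col (madj A) = dim_row A"
  by (auto simp: madj_def mconj_def)

lemma madj_index[simp]: "i < dim_col A \<Longrightarrow> j < dim_row A \<Longrightarrow> madj A $$ (i,j) = cnj (A $$ (j,i))"
  unfolding madj_def mconj_def by simp

lemma madj_carrier[simp]: "A \<in> carrier_mat n m \<Longrightarrow> madj A \<in> carrier_mat m n"
  unfolding carrier_mat_def by simp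

lemma mconj_dims[simp]: "dim_row (mconj A) = dim_row A" "dim_col (mconj A) = dim_col A"
  by (auto simp: mconj_def)

lemma mconj_index[simp]: "i < dim_row A \<Longrightarrow> j < dim_col A \<Longrightarrow> mconj A $$ (i,j) = cnj (A $$ (i,j))"
  unfolding mconj_def by simp

lemma mconj_carrier[simp]: "A \<in> carrier_mat n m \<Longrightarrow> mconj A \<in> carrier_mat n m"
  unfolding carrier_mat_def by simp

lemma madj_mult:
  assumes A: "A \<in> carrier_mat n m" and B: "B \<in> carrier_mat m p"
  shows "madj (A * B) = madj B * madj A"
proof (rule eq_matI)
  fix i j assume i: "i < dim_row (madj B * madj A)" and j: "j < dim_col (madj B * madj A)"
  hence i': "i < p" and j': "j < n" using A B by auto
  have "(madj B * madj A) $$ (i,j) = (\<Sum>k<m. madj B $$ (i,k) * madj A $$ (k,j))"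
    by (rule mult_mat_index_sum[OF madj_carrier[OF B] madj_carrier[OF A] i' j'])
  also have "\<dots> = (\<Sum>k<m. cnj (A $$ (j,k) * B $$ (k,i)))"
    using A B i' j' by (intro sum.cong, auto)
  also have "\<dots> = cnj ((A*B) $$ (j,i))" using mult_mat_index_sum[OF A B j' i'] by simp
  also have "\<dots> = madj (A*B) $$ (i,j)" using A B i' j' by simp
  finally show "madj (A * B) $$ (i, j) = (madj B * madj A) $$ (i, j)" by simp
qed (insert A B, auto)

lemma madj_madj[simp]: "madj (madj A) = A"
  by (rule eq_matI, auto)

lemma madj_one[simp]: "madj (1\<^sub>m n) = 1\<^sub>m n"
  by (rule eq_matI, auto)

lemma mtrace_mult_comm:
  assumes A: "A \<in> carrier_mat n m" and B: "B \<in> carrier_mat m n"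
  shows "mtrace (A * B) = mtrace (B * A)"
proof -
  have e1: "\<And>i. i < n \<Longrightarrow> (A*B) $$ (i,i) = (\<Sum>k<m. A $$ (i,k) * B $$ (k,i))"
    using mult_mat_index_sum[OF A B] by blast
  have e2: "\<And>i. i < m \<Longrightarrow> (B*A) $$ (i,i) = (\<Sum>k<n. B $$ (i,k) * A $$ (k,i))"
    using mult_mat_index_sum[OF B A] by blast
  have "mtrace (A * B) = (\<Sum>i<n. \<Sum>k<m. A $$ (i,k) * B $$ (k,i))"
    unfolding mtrace_def using A B e1 by (auto intro!: sum.cong)
  also have "\<dots> = (\<Sum>k<m. \<Sum>i<n. B $$ (k,i) * A $$ (i,k))"
    by (subst sum.swap, simp add: mult.commute)
  also have "\<dots> = mtrace (B * A)"
    unfolding mtrace_def using A B e2 by (auto intro!: sum.cong)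
  finally show ?thesis .
qed

lemma mtrace_one[simp]: "mtrace (1\<^sub>m n) = of_nat n"
  unfolding mtrace_def by simp

lemma mtrace_madj: "A \<in> carrier_mat n n \<Longrightarrow> mtrace (madj A) = cnj (mtrace A)"
  unfolding mtrace_def by auto

lemma mult_unit_vec_index: 
  assumes C: "(C :: complex mat) \<in> carrier_mat n m" and i: "i < n" and j: "j < m"
  shows "(C *\<^sub>v unit_vec m j) $ i = C $$ (i,j)"
proof -
  have "(C *\<^sub>v unit_vec m j) $ i = (\<Sum>k<m. C $$ (i,k) * unit_vec m j $ k)"
    using C i by simp
  also have "\<dots> = (\<Sum>k<m. if k = j then C $$ (i,k) else 0)"
    by (rule sum.cong, auto simp: j)
  also have "\<dots> = C $$ (i,j)" using j by simp
  finally show ?thesis .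
qed

lemma mat_eq_by_mult_vec:
  fixes A B :: "complex mat"
  assumes A: "A \<in> carrier_mat n m" and B: "B \<in> carrier_mat n m"
    and h: "\<And>x. x \<in> carrier_vec m \<Longrightarrow> A *\<^sub>v x = B *\<^sub>v x"
  shows "A = B"
proof (rule eq_matI)
  fix i j assume "i < dim_row B" "j < dim_col B"
  hence i: "i < n" and j: "j < m" using B by auto
  have "(A *\<^sub>v unit_vec m j) $ i = (B *\<^sub>v unit_vec m j) $ i" using h[of "unit_vec m j"] j by auto
  thus "A $$ (i,j) = B $$ (i,j)" using mult_unit_vec_index[OF A i j] mult_unit_vec_index[OF B i j] by simp
qed (insert A B, auto)

lemma col_carrier: "J \<in> carrier_mat n e \<Longrightarrow> col J a \<in> carrier_vec n"
  using col_dim[of J a] by auto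

lemma mat_eq_0_by_col:
  assumes X: "(X :: complex mat) \<in> carrier_mat n m" and h: "\<And>a. a < m \<Longrightarrow> col X a = 0\<^sub>v n"
  shows "X = 0\<^sub>m n m"
proof (rule eq_matI)
  fix i j assume "i < dim_row (0\<^sub>m n m :: complex mat)" "j < dim_col (0\<^sub>m n m :: complex mat)"
  hence i: "i < n" and j: "j < m" by auto
  have "col X j $ i = 0" using h[OF j] i by simp
  thus "X $$ (i,j) = (0\<^sub>m n m :: complex mat) $$ (i,j)" using X i j by simp
qed (insert X, auto)

lemma mult_mat_vec_zero: "(X :: complex mat) \<in> carrier_mat n m \<Longrightarrow> X *\<^sub>v 0\<^sub>v m = 0\<^sub>v n"
  by (intro eq_vecI, auto simp: scalar_prod_def)

lemma zero_mult_mat_vec: "(x :: complex vec) \<in> carrier_vec m \<Longrightarrow> 0\<^sub>m n m *\<^sub>v x = 0\<^sub>v n"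
  by (intro eq_vecI, auto simp: scalar_prod_def)

lemma smult_mult_mat_vec: assumes F: "F \<in> carrier_mat n m" and x: "x \<in> carrier_vec m"
  shows "(c \<cdot>\<^sub>m F) *\<^sub>v x = c \<cdot>\<^sub>v (F *\<^sub>v x)"
  using F x by (intro eq_vecI, auto simp: scalar_prod_def sum_distrib_left mult.assoc)

lemma mtrace_smult: "(X :: complex mat) \<in> carrier_mat n n \<Longrightarrow> mtrace (c \<cdot>\<^sub>m X) = c * mtrace X"
  unfolding mtrace_def by (simp add: sum_distrib_left)

lemma mult_carrier_mat_square[simp]: "A \<in> carrier_mat n n \<Longrightarrow> B \<in> carrier_mat n n \<Longrightarrow> A * B \<in> carrier_mat n n"
  by (rule mult_carrier_mat)

lemma madj_carrier_square[simp]: "A \<in> carrier_mat n n \<Longrightarrow> madj A \<in> carrier_mat n n"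
  by simp

lemma mat_eq_by_unit_vec: assumes A: "(A :: complex mat) \<in> carrier_mat n m" and B: "B \<in> carrier_mat n m"
  and h: "\<And>j. j < m \<Longrightarrow> A *\<^sub>v unit_vec m j = B *\<^sub>v unit_vec m j"
  shows "A = B"
proof (rule eq_matI)
  fix i j assume "i < dim_row B" "j < dim_col B" hence i: "i < n" and j: "j < m" using B by auto
  show "A $$ (i,j) = B $$ (i,j)" using h[OF j] mult_unit_vec_index[OF A i j] mult_unit_vec_index[OF B i j] by simp
qed (insert A B, auto)

lemma minus_vec_eq_0_iff:
  assumes "(a :: complex vec) \<in> carrier_vec n" "b \<in> carrier_vec n" shows "a - b = 0\<^sub>v n \<longleftrightarrow> a = b"
proof
  assume "a - b = 0\<^sub>v n"
  hence "(a - b) $ i = 0" if "i < n" for i using that by simp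
  thus "a = b" using assms by (intro eq_vecI) auto
qed (use assms in simp)

lemma minus_mat_eq_0_iff:
  assumes "(A :: complex mat) \<in> carrier_mat n m" "B \<in> carrier_mat n m" shows "A - B = 0\<^sub>m n m \<longleftrightarrow> A = B"
proof
  assume "A - B = 0\<^sub>m n m"
  hence "(A - B) $$ (i,j) = 0" if "i < n" "j < m" for i j using that by simp
  thus "A = B" using assms by (intro eq_matI) auto
qed (use assms in simp)

lemma minus_mult_eq_0_if_cols:
  assumes A: "(A :: complex mat) \<in> carrier_mat n n" and B: "B \<in> carrier_mat n n" and J: "J \<in> carrier_mat n e"
    and cols: "\<And>a. a < e \<Longrightarrow> A *\<^sub>v col J a = B *\<^sub>v col J a"
  shows "(A - B) * J = 0\<^sub>m n e"
proof (rule mat_eq_0_by_col[OF mult_carrier_mat[OF minus_carrier_mat[OF B] J]])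
  fix a assume a: "a < e"
  have "col ((A - B) * J) a = A *\<^sub>v col J a - B *\<^sub>v col J a"
    using col_mult2[OF minus_carrier_mat[OF B] J a] minus_mult_distrib_mat_vec[OF A B] J a by simp
  moreover have "col J a \<in> carrier_vec n" by (rule col_carrier[OF J])
  ultimately show "col ((A - B) * J) a = 0\<^sub>v n"
    unfolding cols[OF a] using minus_cancel_vec[OF mult_mat_vec_carrier[OF B]] by simp
qed

lemma mult_eq_0_by_split:
  assumes X: "(X :: complex mat) \<in> carrier_mat m e" and J1: "J1 \<in> carrier_mat e e1" and J2: "J2 \<in> carrier_mat e e2"
    and XJ1: "X * J1 = 0\<^sub>m m e1" and XJ2: "X * J2 = 0\<^sub>m m e2"
    and split: "\<And>v. v \<in> carrier_vec e \<Longrightarrow> \<exists>a\<in>carrier_vec e1. \<exists>b\<in>carrier_vec e2. v = J1 *\<^sub>v a + J2 *\<^sub>v b"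
  shows "X = 0\<^sub>m m e"
proof (rule mat_eq_by_mult_vec[OF X])
  fix v :: "complex vec" assume v: "v \<in> carrier_vec e"
  then obtain a b where a: "a \<in> carrier_vec e1" and b: "b \<in> carrier_vec e2" and "v = J1 *\<^sub>v a + J2 *\<^sub>v b"
    using split by blast
  hence "X *\<^sub>v v = (X * J1) *\<^sub>v a + (X * J2) *\<^sub>v b"
    using mult_add_distrib_mat_vec[OF X mult_mat_vec_carrier[OF J1 a] mult_mat_vec_carrier[OF J2 b]]
      assoc_mult_mat_vec[OF X J1 a] assoc_mult_mat_vec[OF X J2 b] by simp
  thus "X *\<^sub>v v = 0\<^sub>m m e *\<^sub>v v" unfolding XJ1 XJ2 using a b v by (simp add: zero_mult_mat_vec)
qed simp

lemma mult_matrix_unit_mult_index: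
  fixes A B :: "complex mat"
  assumes A: "A \<in> carrier_mat d d" and B: "B \<in> carrier_mat d d" and a: "a < d" and b: "b < d" and r: "r < d" and s: "s < d"
  shows "(A * mat d d (\<lambda>(i,j). if i = a \<and> j = b then 1 else 0) * B) $$ (r,s) = A $$ (r,a) * B $$ (b,s)"
proof -
  let ?E = "mat d d (\<lambda>(i,j). if i = a \<and> j = b then (1::complex) else 0)"
  have E: "?E \<in> carrier_mat d d" by simp
  have AE: "(A * ?E) $$ (r,k) = (if k = b then A $$ (r,a) else 0)" if k: "k < d" for k
  proof -
    have "(A * ?E) $$ (r,k) = (\<Sum>l<d. A $$ (r,l) * ?E $$ (l,k))" by (rule mult_mat_index_sum[OF A E r k])
    also have "\<dots> = (\<Sum>l<d. if l = a then (if k = b then A $$ (r,a) else 0) else 0)"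
      using k by (intro sum.cong refl, auto)
    also have "\<dots> = (if k = b then A $$ (r,a) else 0)" using a by simp
    finally show ?thesis .
  qed
  have "(A * ?E * B) $$ (r,s) = (\<Sum>k<d. (A * ?E) $$ (r,k) * B $$ (k,s))"
    by (rule mult_mat_index_sum[OF mult_carrier_mat[OF A E] B r s])
  also have "\<dots> = (\<Sum>k<d. if k = b then A $$ (r,a) * B $$ (k,s) else 0)"
    by (intro sum.cong refl, auto simp: AE)
  also have "\<dots> = A $$ (r,a) * B $$ (b,s)" using b by simp
  finally show ?thesis .
qed

definition vinner :: "complex vec \<Rightarrow> complex vec \<Rightarrow> complex" where
  "vinner x y = (\<Sum>i<dim_vec x. cnj (x $ i) * y $ i)"

lemma vinner_swap: "dim_vec x = dim_vec y \<Longrightarrow> vinner y x = cnj (vinner x y)"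
  unfolding vinner_def by (auto simp: mult.commute)

lemma cnj_self_mult: "cnj z * z = complex_of_real ((cmod z)^2)"
  using complex_norm_square[of z] by (simp add: mult.commute)

lemma vinner_self: "vinner x x = of_real (\<Sum>i<dim_vec x. (cmod (x $ i))^2)"
  unfolding vinner_def of_real_sum cnj_self_mult ..

lemma vinner_self_nonneg: "Im (vinner x x) = 0" "Re (vinner x x) \<ge> 0"
  unfolding vinner_self by (auto intro: sum_nonneg)

lemma vinner_self_eq_0: "x \<in> carrier_vec n \<Longrightarrow> vinner x x = 0 \<Longrightarrow> x = 0\<^sub>v n"
proof -
  assume x: "x \<in> carrier_vec n" and z: "vinner x x = 0"
  have s: "(\<Sum>i<dim_vec x. (cmod (x $ i))^2) = 0" using z unfolding vinner_self of_real_eq_0_iff .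
  have "\<forall>i\<in>{..<dim_vec x}. (cmod (x $ i))^2 = 0"
    using s by (subst sum_nonneg_eq_0_iff[symmetric], auto)
  thus ?thesis using x by (intro eq_vecI, auto)
qed

lemma vinner_mult_mat_vec:
  assumes A: "A \<in> carrier_mat n m" and x: "x \<in> carrier_vec n" and y: "y \<in> carrier_vec m"
  shows "vinner x (A *\<^sub>v y) = vinner (madj A *\<^sub>v x) y"
proof -
  have "vinner x (A *\<^sub>v y) = (\<Sum>i<n. cnj (x $ i) * (\<Sum>k<m. A $$ (i,k) * y $ k))"
    unfolding vinner_def using x y A by (intro sum.cong, auto)
  also have "\<dots> = (\<Sum>i<n. \<Sum>k<m. cnj (x $ i) * A $$ (i,k) * y $ k)"
    by (simp add: sum_distrib_left mult.assoc)
  also have "\<dots> = (\<Sum>k<m. \<Sum>i<n. cnj (x $ i) * A $$ (i,k) * y $ k)"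
    by (rule sum.swap)
  also have "\<dots> = (\<Sum>k<m. cnj (\<Sum>i<n. madj A $$ (k,i) * x $ i) * y $ k)"
  proof (rule sum.cong[OF refl])
    fix k assume "k \<in> {..<m}"
    hence k: "k < m" by auto
    have "(\<Sum>i<n. cnj (x $ i) * A $$ (i,k) * y $ k) = (\<Sum>i<n. cnj (x $ i) * A $$ (i,k)) * y $ k"
      by (simp add: sum_distrib_right)
    also have "(\<Sum>i<n. cnj (x $ i) * A $$ (i,k)) = cnj (\<Sum>i<n. madj A $$ (k,i) * x $ i)"
      using A k by (simp add: mult.commute)
    finally show "(\<Sum>i<n. cnj (x $ i) * A $$ (i,k) * y $ k) = cnj (\<Sum>i<n. madj A $$ (k,i) * x $ i) * y $ k" .
  qed
  also have "\<dots> = vinner (madj A *\<^sub>v x) y"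
    unfolding vinner_def using A x by (intro sum.cong, auto)
  finally show ?thesis .
qed

lemma vinner_unit_vec: "x \<in> carrier_vec n \<Longrightarrow> i < n \<Longrightarrow> vinner (unit_vec n i) x = x $ i"
proof -
  assume x: "x \<in> carrier_vec n" and i: "i < n"
  have "vinner (unit_vec n i) x = (\<Sum>k<n. if k = i then x $ k else 0)"
    unfolding vinner_def by (intro sum.cong, auto simp: i)
  also have "\<dots> = x $ i" using i by simp
  finally show ?thesis .
qed

lemma vec_eq_by_vinner:
  assumes x: "x \<in> carrier_vec n" and y: "y \<in> carrier_vec n"
    and h: "\<And>z. z \<in> carrier_vec n \<Longrightarrow> vinner z x = vinner z y"
  shows "x = y"
proof (rule eq_vecI)
  fix i assume "i < dim_vec y"
  hence i: "i < n" using y by auto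
  show "x $ i = y $ i" using h[of "unit_vec n i"] vinner_unit_vec[OF x i] vinner_unit_vec[OF y i] by auto
qed (insert x y, auto)

lemma vinner_add_right: "dim_vec y = dim_vec x \<Longrightarrow> dim_vec z = dim_vec x \<Longrightarrow> vinner x (y + z) = vinner x y + vinner x z"
  unfolding vinner_def by (simp add: algebra_simps sum.distrib)

lemma vinner_minus_right: "dim_vec y = dim_vec x \<Longrightarrow> dim_vec z = dim_vec x \<Longrightarrow> vinner x (y - z) = vinner x y - vinner x z"
  unfolding vinner_def by (simp add: algebra_simps sum_subtractf)

lemma vinner_minus_left: "dim_vec y = dim_vec x \<Longrightarrow> vinner (x - y) z = vinner x z - vinner y z"
  unfolding vinner_def by (simp add: algebra_simps sum_subtractf)

lemma vinner_smult_right: "dim_vec y = dim_vec x \<Longrightarrow> vinner x (c \<cdot>\<^sub>v y) = c * vinner x y"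
  unfolding vinner_def by (simp add: algebra_simps sum_distrib_left)

lemma vinner_smult_left: "vinner (c \<cdot>\<^sub>v x) y = cnj c * vinner x y"
  unfolding vinner_def by (simp add: algebra_simps sum_distrib_left)

lemma madj_mult_vec_index:
  assumes J: "J \<in> carrier_mat n e" and v: "v \<in> carrier_vec n" and a: "a < e"
  shows "(madj J *\<^sub>v v) $ a = vinner (col J a) v"
proof -
  have "(madj J *\<^sub>v v) $ a = (\<Sum>k<n. madj J $$ (a,k) * v $ k)"
    by (rule mult_mat_vec_index_sum[OF madj_carrier[OF J] v a])
  also have "\<dots> = (\<Sum>k<n. cnj (col J a $ k) * v $ k)"
    using J a by (intro sum.cong, auto)
  also have "\<dots> = vinner (col J a) v" unfolding vinner_def using J by simp
  finally show ?thesis .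
qed

lemma madj_mult_mult_index:
  assumes X: "X \<in> carrier_mat n e" and H: "H \<in> carrier_mat n n" and Y: "Y \<in> carrier_mat n f"
    and a: "a < e" and b: "b < f"
  shows "(madj X * H * Y) $$ (a,b) = vinner (col X a) (H *\<^sub>v col Y b)"
proof -
  have "(madj X * H * Y) $$ (a,b) = (madj X * (H * Y)) $$ (a,b)"
    using X H Y by (subst assoc_mult_mat[of _ e n _ n _ f], auto)
  also have "\<dots> = Matrix.row (madj X) a \<bullet> col (H * Y) b" using X H Y a b by (simp del: row_col_scalar_prod)
  also have "col (H * Y) b = H *\<^sub>v col Y b" using H Y b by (simp add: col_mult2)
  also have "Matrix.row (madj X) a \<bullet> (H *\<^sub>v col Y b) = (madj X *\<^sub>v (H *\<^sub>v col Y b)) $ a"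
    using X a by simp
  also have "\<dots> = vinner (col X a) (H *\<^sub>v col Y b)"
    by (rule madj_mult_vec_index[OF X _ a], insert H Y b, auto)
  finally show ?thesis .
qed

lemma mtrace_eq_sum_vinner: assumes X: "X \<in> carrier_mat n n"
  shows "mtrace X = (\<Sum>i<n. vinner (unit_vec n i) (X *\<^sub>v unit_vec n i))"
  unfolding mtrace_def using X
  by (intro sum.cong, auto simp: vinner_unit_vec[of _ n] mult_unit_vec_index[OF X])

lemma sum_cnj_mult_self:
  assumes fin: "finite \<Gamma>"
  shows "Im (\<Sum>c\<in>\<Gamma>. cnj (b c) * b c) = 0" "Re (\<Sum>c\<in>\<Gamma>. cnj (b c) * b c) \<ge> 0"
    "(\<Sum>c\<in>\<Gamma>. cnj (b c) * b c) = 0 \<Longrightarrow> \<forall>c\<in>\<Gamma>. b c = 0"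
proof -
  have e: "(\<Sum>c\<in>\<Gamma>. cnj (b c) * b c) = complex_of_real (\<Sum>c\<in>\<Gamma>. (cmod (b c))^2)"
    unfolding of_real_sum cnj_self_mult ..
  show "Im (\<Sum>c\<in>\<Gamma>. cnj (b c) * b c) = 0" unfolding e by simp
  show "Re (\<Sum>c\<in>\<Gamma>. cnj (b c) * b c) \<ge> 0" unfolding e by (simp add: sum_nonneg)
  assume "(\<Sum>c\<in>\<Gamma>. cnj (b c) * b c) = 0"
  hence "(\<Sum>c\<in>\<Gamma>. (cmod (b c))^2) = 0" unfolding e of_real_eq_0_iff .
  hence "\<forall>c\<in>\<Gamma>. (cmod (b c))^2 = 0" using fin by (subst sum_nonneg_eq_0_iff[symmetric], auto)
  thus "\<forall>c\<in>\<Gamma>. b c = 0" by simp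
qed

lemma sum_nonneg_complex_eq_0:
  assumes fin: "finite S" and nn: "\<And>i. i \<in> S \<Longrightarrow> Im (f i) = 0 \<and> Re (f i) \<ge> 0" and z: "sum f S = 0"
  shows "\<forall>i\<in>S. f i = 0"
proof -
  have "(\<Sum>i\<in>S. Re (f i)) = 0" using z by (simp add: Re_sum[symmetric])
  hence "\<forall>i\<in>S. Re (f i) = 0" using fin nn by (subst sum_nonneg_eq_0_iff[symmetric], auto)
  thus ?thesis using nn by (auto simp: complex_eq_iff)
qed

text \<open>\<open>complex mat\<close> has no zero (dimensions are part of the value), so \<open>sum\<close> does not apply to matrices.\<close>
definition msum :: "'b set \<Rightarrow> ('b \<Rightarrow> complex mat) \<Rightarrow> nat \<Rightarrow> nat \<Rightarrow> complex mat" where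
  "msum S F n m = mat n m (\<lambda>(i,j). \<Sum>x\<in>S. F x $$ (i,j))"

lemma msum_carrier[simp]: "msum S F n m \<in> carrier_mat n m"
  unfolding msum_def by simp

lemma msum_dims[simp]: "dim_row (msum S F n m) = n" "dim_col (msum S F n m) = m"
  unfolding msum_def by simp_all

lemma msum_index: "i < n \<Longrightarrow> j < m \<Longrightarrow> msum S F n m $$ (i,j) = (\<Sum>x\<in>S. F x $$ (i,j))"
  unfolding msum_def by simp

lemma msum_cong: "(\<And>x. x \<in> S \<Longrightarrow> F x = F' x) \<Longrightarrow> msum S F n m = msum S F' n m"
  unfolding msum_def by (intro eq_matI, auto)

lemma msum_mult_left:
  assumes X: "X \<in> carrier_mat k n" and F: "\<And>x. x \<in> S \<Longrightarrow> F x \<in> carrier_mat n m"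
  shows "X * msum S F n m = msum S (\<lambda>x. X * F x) k m"
proof (rule eq_matI)
  fix i j assume "i < dim_row (msum S (\<lambda>x. X * F x) k m)" "j < dim_col (msum S (\<lambda>x. X * F x) k m)"
  hence i: "i < k" and j: "j < m" by auto
  have "(X * msum S F n m) $$ (i,j) = (\<Sum>l<n. X $$ (i,l) * (\<Sum>x\<in>S. F x $$ (l,j)))"
    using mult_mat_index_sum[OF X msum_carrier i j] j by (simp add: msum_index)
  also have "\<dots> = (\<Sum>x\<in>S. \<Sum>l<n. X $$ (i,l) * F x $$ (l,j))"
    by (simp add: sum_distrib_left, rule sum.swap)
  also have "\<dots> = (\<Sum>x\<in>S. (X * F x) $$ (i,j))"
    by (intro sum.cong refl, rule mult_mat_index_sum[symmetric, OF X F i j])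
  also have "\<dots> = msum S (\<lambda>x. X * F x) k m $$ (i,j)" using i j by (simp add: msum_index)
  finally show "(X * msum S F n m) $$ (i,j) = msum S (\<lambda>x. X * F x) k m $$ (i,j)" .
qed (insert X, auto)

lemma msum_mult_right:
  assumes F: "\<And>x. x \<in> S \<Longrightarrow> F x \<in> carrier_mat n m" and Y: "Y \<in> carrier_mat m p"
  shows "msum S F n m * Y = msum S (\<lambda>x. F x * Y) n p"
proof (rule eq_matI)
  fix i j assume "i < dim_row (msum S (\<lambda>x. F x * Y) n p)" "j < dim_col (msum S (\<lambda>x. F x * Y) n p)"
  hence i: "i < n" and j: "j < p" by auto
  have "(msum S F n m * Y) $$ (i,j) = (\<Sum>l<m. (\<Sum>x\<in>S. F x $$ (i,l)) * Y $$ (l,j))"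
    using mult_mat_index_sum[OF msum_carrier Y i j] i by (simp add: msum_index)
  also have "\<dots> = (\<Sum>x\<in>S. \<Sum>l<m. F x $$ (i,l) * Y $$ (l,j))"
    by (simp add: sum_distrib_right, rule sum.swap)
  also have "\<dots> = (\<Sum>x\<in>S. (F x * Y) $$ (i,j))"
    by (intro sum.cong refl, rule mult_mat_index_sum[symmetric, OF F Y i j])
  also have "\<dots> = msum S (\<lambda>x. F x * Y) n p $$ (i,j)" using i j by (simp add: msum_index)
  finally show "(msum S F n m * Y) $$ (i,j) = msum S (\<lambda>x. F x * Y) n p $$ (i,j)" .
qed (insert Y, auto)

lemma mtrace_msum: assumes F: "\<And>x. x \<in> S \<Longrightarrow> F x \<in> carrier_mat n n"
  shows "mtrace (msum S F n n) = (\<Sum>x\<in>S. mtrace (F x))"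
proof -
  have "mtrace (msum S F n n) = (\<Sum>i<n. \<Sum>x\<in>S. F x $$ (i,i))"
    unfolding mtrace_def by (simp add: msum_index)
  also have "\<dots> = (\<Sum>x\<in>S. \<Sum>i<n. F x $$ (i,i))" by (rule sum.swap)
  also have "\<dots> = (\<Sum>x\<in>S. mtrace (F x))" unfolding mtrace_def using F by (intro sum.cong refl, auto)
  finally show ?thesis .
qed

lemma msum_mv: assumes F: "\<And>x. x \<in> S \<Longrightarrow> F x \<in> carrier_mat n m" and v: "v \<in> carrier_vec m" and i: "i < n"
  shows "(msum S F n m *\<^sub>v v) $ i = (\<Sum>x\<in>S. (F x *\<^sub>v v) $ i)"
proof -
  have "(msum S F n m *\<^sub>v v) $ i = (\<Sum>k<m. (\<Sum>x\<in>S. F x $$ (i,k)) * v $ k)"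
    using mult_mat_vec_index_sum[OF msum_carrier v i] i by (simp add: msum_index)
  also have "\<dots> = (\<Sum>x\<in>S. \<Sum>k<m. F x $$ (i,k) * v $ k)"
    by (simp add: sum_distrib_right, rule sum.swap)
  also have "\<dots> = (\<Sum>x\<in>S. (F x *\<^sub>v v) $ i)"
    by (intro sum.cong refl, rule mult_mat_vec_index_sum[symmetric, OF F v i])
  finally show ?thesis .
qed

lemma vinner_msum: assumes F: "\<And>x. x \<in> S \<Longrightarrow> F x \<in> carrier_mat n m" and v: "v \<in> carrier_vec m" and y: "y \<in> carrier_vec n"
  shows "vinner y (msum S F n m *\<^sub>v v) = (\<Sum>x\<in>S. vinner y (F x *\<^sub>v v))"
proof -
  have e: "cnj (y $ i) * (msum S F n m *\<^sub>v v) $ i = cnj (y $ i) * (\<Sum>x\<in>S. (F x *\<^sub>v v) $ i)"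
    if i: "i \<in> {..<n}" for i
    by (subst msum_mv[OF F v], insert i, auto)
  have dy: "dim_vec y = n" using y by simp
  have "vinner y (msum S F n m *\<^sub>v v) = (\<Sum>i<n. cnj (y $ i) * (\<Sum>x\<in>S. (F x *\<^sub>v v) $ i))"
    unfolding vinner_def dy by (rule sum.cong[OF refl e])
  also have "\<dots> = (\<Sum>x\<in>S. \<Sum>i<n. cnj (y $ i) * (F x *\<^sub>v v) $ i)"
    by (simp add: sum_distrib_left, rule sum.swap)
  also have "\<dots> = (\<Sum>x\<in>S. vinner y (F x *\<^sub>v v))" unfolding vinner_def using y by simp
  finally show ?thesis .
qed

lemma madj_msum: assumes F: "\<And>x. x \<in> S \<Longrightarrow> F x \<in> carrier_mat n m"
  shows "madj (msum S F n m) = msum S (\<lambda>x. madj (F x)) m n"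
proof (rule eq_matI)
  fix i j assume "i < dim_row (msum S (\<lambda>x. madj (F x)) m n)" "j < dim_col (msum S (\<lambda>x. madj (F x)) m n)"
  hence i: "i < m" and j: "j < n" by auto
  have "madj (F x) $$ (i,j) = cnj (F x $$ (j,i))" if x: "x \<in> S" for x
    using F[OF x] i j by simp
  thus "madj (msum S F n m) $$ (i,j) = msum S (\<lambda>x. madj (F x)) m n $$ (i,j)"
    using i j by (simp add: msum_index)
qed auto

lemma sum_lessThan_mult_split: fixes k l :: nat and f :: "nat \<Rightarrow> 'a::comm_monoid_add"
  shows "(\<Sum>m<k*l. f m) = (\<Sum>a<k. \<Sum>b<l. f (a*l + b))"
proof -
  have "(\<Sum>m<k*l. f m) = (\<Sum>a<k. sum f {a*l..<a*l+l})" by (rule sum.nat_group[symmetric])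
  also have "\<dots> = (\<Sum>a<k. \<Sum>b<l. f (a*l + b))"
  proof (rule sum.cong[OF refl])
    fix a
    have "sum f {a*l..<a*l+l} = sum f {0 + a*l..<l + a*l}" by (simp add: add.commute)
    also have "\<dots> = (\<Sum>b=0..<l. f (b + a*l))" by (rule sum.shift_bounds_nat_ivl)
    also have "\<dots> = (\<Sum>b<l. f (a*l + b))" by (simp add: atLeast0LessThan add.commute)
    finally show "sum f {a*l..<a*l+l} = (\<Sum>b<l. f (a*l + b))" .
  qed
  finally show ?thesis .
qed

lemma mult_add_less: fixes x y a b :: nat assumes "x < a" "y < b" shows "x * b + y < a * b"
proof -
  have "x * b + y < (x + 1) * b" using assms(2) by simp
  also have "\<dots> \<le> a * b" using assms(1) by (intro mult_right_mono) auto
  finally show ?thesis .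
qed

lemma div_mod_less: fixes i a b :: nat assumes "i < a * b" shows "i div b < a" "i mod b < b"
proof -
  from assms have b: "b > 0" by (cases b, auto)
  show "i div b < a" using assms by (simp add: less_mult_imp_div_less)
  show "i mod b < b" using b by simp
qed

lemma kron_dims[simp]: "dim_row (kron A B) = dim_row A * dim_row B" "dim_col (kron A B) = dim_col A * dim_col B"
  unfolding kron_def by simp_all

lemma kron_carrier[simp]: "A \<in> carrier_mat a1 a2 \<Longrightarrow> B \<in> carrier_mat b1 b2 \<Longrightarrow> kron A B \<in> carrier_mat (a1*b1) (a2*b2)"
  unfolding carrier_mat_def by simp

lemma kron_index: "i < dim_row A * dim_row B \<Longrightarrow> j < dim_col A * dim_col B \<Longrightarrow>
  kron A B $$ (i,j) = A $$ (i div dim_row B, j div dim_col B) * B $$ (i mod dim_row B, j mod dim_col B)"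
  unfolding kron_def by simp

lemma kron_mult:
  assumes A: "A \<in> carrier_mat a1 a2" and C: "C \<in> carrier_mat a2 a3"
    and B: "B \<in> carrier_mat b1 b2" and D: "D \<in> carrier_mat b2 b3"
  shows "kron A B * kron C D = kron (A * C) (B * D)"
proof (rule eq_matI)
  fix i j assume "i < dim_row (kron (A * C) (B * D))" "j < dim_col (kron (A * C) (B * D))"
  hence i: "i < a1 * b1" and j: "j < a3 * b3" using A B C D by auto
  note ij = div_mod_less[OF i] div_mod_less[OF j]
  have "(kron A B * kron C D) $$ (i,j) = (\<Sum>m<a2*b2. kron A B $$ (i,m) * kron C D $$ (m,j))"
    by (rule mult_mat_index_sum[OF kron_carrier[OF A B] kron_carrier[OF C D] i j])
  also have "\<dots> = (\<Sum>x<a2. \<Sum>y<b2. kron A B $$ (i,x*b2+y) * kron C D $$ (x*b2+y,j))"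
    by (rule sum_lessThan_mult_split)
  also have "\<dots> = (\<Sum>x<a2. \<Sum>y<b2. (A $$ (i div b1, x) * C $$ (x, j div b3)) * (B $$ (i mod b1, y) * D $$ (y, j mod b3)))"
  proof (intro sum.cong refl)
    fix x y assume x: "x \<in> {..<a2}" and y: "y \<in> {..<b2}"
    have xy: "x * b2 + y < a2 * b2" using x y by (simp add: mult_add_less)
    have d: "(x*b2+y) div b2 = x" "(x*b2+y) mod b2 = y" using y by auto
    have ymod: "y mod b2 = y" using y by auto
    show "kron A B $$ (i,x*b2+y) * kron C D $$ (x*b2+y,j) = (A $$ (i div b1, x) * C $$ (x, j div b3)) * (B $$ (i mod b1, y) * D $$ (y, j mod b3))"
      using A B C D i j xy by (simp add: kron_index d ymod)
  qed
  also have "\<dots> = (\<Sum>x<a2. A $$ (i div b1, x) * C $$ (x, j div b3)) * (\<Sum>y<b2. B $$ (i mod b1, y) * D $$ (y, j mod b3))"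
    by (simp add: sum_product)
  also have "\<dots> = (A * C) $$ (i div b1, j div b3) * (B * D) $$ (i mod b1, j mod b3)"
    using mult_mat_index_sum[OF A C ij(1) ij(3)] mult_mat_index_sum[OF B D ij(2) ij(4)] by simp
  also have "\<dots> = kron (A * C) (B * D) $$ (i,j)"
    using A B C D i j by (simp add: kron_index)
  finally show "(kron A B * kron C D) $$ (i, j) = kron (A * C) (B * D) $$ (i, j)" .
qed (insert A B C D, auto)

lemma kron_one: "kron (1\<^sub>m a) (1\<^sub>m b) = 1\<^sub>m (a * b)"
proof (rule eq_matI)
  fix i j assume "i < dim_row (1\<^sub>m (a * b) :: complex mat)" "j < dim_col (1\<^sub>m (a * b) :: complex mat)"
  hence i: "i < a * b" and j: "j < a * b" by auto
  note ij = div_mod_less[OF i] div_mod_less[OF j]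
  have "(i div b = j div b \<and> i mod b = j mod b) = (i = j)"
    by (metis div_mult_mod_eq)
  thus "kron (1\<^sub>m a) (1\<^sub>m b) $$ (i, j) = (1\<^sub>m (a * b) :: complex mat) $$ (i, j)"
    using i j ij by (auto simp: kron_index)
qed auto

lemma madj_kron: "madj (kron A B) = kron (madj A) (madj B)"
proof (rule eq_matI)
  fix i j assume "i < dim_row (kron (madj A) (madj B))" "j < dim_col (kron (madj A) (madj B))"
  hence i: "i < dim_col A * dim_col B" and j: "j < dim_row A * dim_row B" by auto
  note ij = div_mod_less[OF i] div_mod_less[OF j]
  show "madj (kron A B) $$ (i, j) = kron (madj A) (madj B) $$ (i, j)"
    using i j ij by (simp add: kron_index)
qed auto

lemma mtrace_kron:
  assumes A: "A \<in> carrier_mat a a" and B: "B \<in> carrier_mat b b"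
  shows "mtrace (kron A B) = mtrace A * mtrace B"
proof -
  have "mtrace (kron A B) = (\<Sum>m<a*b. kron A B $$ (m,m))" unfolding mtrace_def using A B by simp
  also have "\<dots> = (\<Sum>x<a. \<Sum>y<b. kron A B $$ (x*b+y,x*b+y))" by (rule sum_lessThan_mult_split)
  also have "\<dots> = (\<Sum>x<a. \<Sum>y<b. A $$ (x,x) * B $$ (y,y))"
  proof (intro sum.cong refl)
    fix x y assume x: "x \<in> {..<a}" and y: "y \<in> {..<b}"
    have xy: "x * b + y < a * b" using x y by (simp add: mult_add_less)
    have d: "(x*b+y) div b = x" "(x*b+y) mod b = y" using y by auto
    have ymod: "y mod b = y" using y by auto
    show "kron A B $$ (x*b+y,x*b+y) = A $$ (x,x) * B $$ (y,y)"
      using A B xy by (simp add: kron_index d ymod)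
  qed
  also have "\<dots> = mtrace A * mtrace B" unfolding mtrace_def using A B by (simp add: sum_product)
  finally show ?thesis .
qed

lemma mconj_mult: "A \<in> carrier_mat n m \<Longrightarrow> B \<in> carrier_mat m p \<Longrightarrow> mconj (A * B) = mconj A * mconj B"
  by (rule eq_matI, auto simp: mult_mat_index_sum)

lemma mconj_one[simp]: "mconj (1\<^sub>m n) = 1\<^sub>m n"
  by (rule eq_matI, auto)

lemma madj_mconj: "madj (mconj A) = mconj (madj A)"
  by (rule eq_matI, auto)

lemma mtrace_mconj: "A \<in> carrier_mat n n \<Longrightarrow> mtrace (mconj A) = cnj (mtrace A)"
  unfolding mtrace_def by simp

lemma tensor_pow_carrier[simp]: "X \<in> carrier_mat n n \<Longrightarrow> tensor_pow X t \<in> carrier_mat (n^t) (n^t)"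
proof (induct t)
  case (Suc t)
  have "kron (tensor_pow X t) X \<in> carrier_mat (n^t*n) (n^t*n)" using Suc by simp
  thus ?case by (simp add: mult.commute)
qed simp

lemma tensor_pow_mult:
  assumes X: "X \<in> carrier_mat n n" and Y: "Y \<in> carrier_mat n n"
  shows "tensor_pow (X * Y) t = tensor_pow X t * tensor_pow Y t"
proof (induct t)
  case 0 show ?case by simp
next
  case (Suc t)
  have "tensor_pow X (Suc t) * tensor_pow Y (Suc t) = kron (tensor_pow X t * tensor_pow Y t) (X * Y)"
    by (simp, rule kron_mult[OF tensor_pow_carrier[OF X] tensor_pow_carrier[OF Y] X Y])
  thus ?case using Suc by simp
qed

lemma tensor_pow_one: "tensor_pow (1\<^sub>m n) t = 1\<^sub>m (n^t)"
proof (induct t)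
  case (Suc t)
  have "tensor_pow (1\<^sub>m n) (Suc t) = 1\<^sub>m (n^t*n)" using Suc by (simp add: kron_one)
  thus ?case by (simp add: mult.commute)
qed simp

lemma tensor_pow_madj: "tensor_pow (madj X) t = madj (tensor_pow X t)"
  by (induct t, auto simp: madj_kron)

lemma tensor_pow_trace: "X \<in> carrier_mat n n \<Longrightarrow> mtrace (tensor_pow X t) = mtrace X ^ t"
proof (induct t)
  case 0 thus ?case by simp
next
  case (Suc t)
  thus ?case by (simp add: mtrace_kron[OF tensor_pow_carrier[OF Suc(2)] Suc(2)])
qed

lemma FFt_carrier[simp]: "U \<in> carrier_mat q q \<Longrightarrow> FFt t U \<in> carrier_mat (q^(2*t)) (q^(2*t))"
proof -
  assume U: "U \<in> carrier_mat q q"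
  have "kron U (mconj U) \<in> carrier_mat (q*q) (q*q)" using U by simp
  from tensor_pow_carrier[OF this, of t] show ?thesis
    unfolding FFt_def by (simp add: power_mult power2_eq_square)
qed

lemma FFt_dims: "U \<in> carrier_mat q q \<Longrightarrow> dim_row (FFt t U) = q^(2*t) \<and> dim_col (FFt t U) = q^(2*t)"
  using carrier_matD[OF FFt_carrier] by blast

lemma FFt_mult:
  assumes U: "U \<in> carrier_mat q q" and V: "V \<in> carrier_mat q q"
  shows "FFt t (U * V) = FFt t U * FFt t V"
proof -
  have "kron (U * V) (mconj (U * V)) = kron U (mconj U) * kron V (mconj V)"
    using U V by (simp add: mconj_mult[OF U V] kron_mult[OF U V mconj_carrier[OF U] mconj_carrier[OF V]])
  thus ?thesis unfolding FFt_def
    using tensor_pow_mult[of "kron U (mconj U)" "q*q" "kron V (mconj V)" t] U V by simp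
qed

lemma FFt_one: "FFt t (1\<^sub>m q) = 1\<^sub>m (q^(2*t))"
  unfolding FFt_def by (simp add: kron_one tensor_pow_one power_mult power2_eq_square)

lemma FFt_madj: "FFt t (madj U) = madj (FFt t U)"
  unfolding FFt_def tensor_pow_madj[symmetric] madj_kron madj_mconj ..

lemma FFt_trace:
  assumes U: "U \<in> carrier_mat q q"
  shows "mtrace (FFt t U) = complex_of_real ((cmod (mtrace U)) ^ (2*t))"
proof -
  have "mtrace (FFt t U) = mtrace (kron U (mconj U)) ^ t"
    unfolding FFt_def by (rule tensor_pow_trace[of _ "q*q"], insert U, simp)
  also have "mtrace (kron U (mconj U)) = mtrace U * cnj (mtrace U)"
    using U by (simp add: mtrace_kron[OF U mconj_carrier[OF U]] mtrace_mconj)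
  also have "\<dots> = complex_of_real ((cmod (mtrace U))^2)" by (rule complex_norm_square[symmetric])
  finally show ?thesis by (simp add: power_mult)
qed

lemma unitary_carrier: "U \<in> unitary_group q \<Longrightarrow> U \<in> carrier_mat q q"
  unfolding unitary_group_def by simp

lemma unitary_mult_madj: "U \<in> unitary_group q \<Longrightarrow> U * madj U = 1\<^sub>m q"
  unfolding unitary_group_def by simp

lemma unitary_madj_mult: "U \<in> unitary_group q \<Longrightarrow> madj U * U = 1\<^sub>m q"
  using mat_mult_left_right_inverse[of U q "madj U"] unfolding unitary_group_def by auto

lemma unitary_madj: "U \<in> unitary_group q \<Longrightarrow> madj U \<in> unitary_group q"
  using unitary_madj_mult[of U q] unfolding unitary_group_def by simp

lemma FFt_mult_madj: "U \<in> unitary_group q \<Longrightarrow> FFt t U * madj (FFt t U) = 1\<^sub>m (q^(2*t))"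
  using FFt_mult[of U q "madj U" t] unitary_carrier[of U q] unitary_mult_madj[of U q]
  by (simp add: FFt_madj[symmetric] FFt_one)

lemma unitary_entry_bound:
  assumes X: "X \<in> carrier_mat n n" and XX: "X * madj X = 1\<^sub>m n" and i: "i < n" and j: "j < n"
  shows "cmod (X $$ (i,j)) \<le> 1"
proof -
  have "(X * madj X) $$ (i,i) = (\<Sum>k<n. X $$ (i,k) * madj X $$ (k,i))"
    by (rule mult_mat_index_sum[OF X madj_carrier[OF X] i i])
  also have "\<dots> = (\<Sum>k<n. X $$ (i,k) * cnj (X $$ (i,k)))"
    using X i by (intro sum.cong refl, simp)
  also have "\<dots> = complex_of_real (\<Sum>k<n. (cmod (X $$ (i,k)))^2)"
    unfolding of_real_sum complex_norm_square ..
  finally have "complex_of_real (\<Sum>k<n. (cmod (X $$ (i,k)))^2) = 1" using XX i by simp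
  hence "(\<Sum>k<n. (cmod (X $$ (i,k)))^2) = 1" by (simp only: of_real_eq_1_iff)
  moreover have "(cmod (X $$ (i,j)))^2 \<le> (\<Sum>k<n. (cmod (X $$ (i,k)))^2)"
    using j by (intro member_le_sum, auto)
  ultimately have "(cmod (X $$ (i,j)))^2 \<le> 1" by simp
  thus ?thesis by (simp add: power_le_one_iff abs_square_le_1)
qed

section \<open>Orthonormal frames of subspaces\<close>

text \<open>Padding \<open>A\<close> and \<open>B\<close> with zeros to square matrices keeps \<open>A' B' = 1\<close>, hence \<open>B' A' = 1\<close>,
  which fails in the last diagonal entry if \<open>d < e\<close>.\<close>
lemma dim_le_if_mult_eq_one:
  fixes A B :: "complex mat"
  assumes A: "A \<in> carrier_mat e d" and B: "B \<in> carrier_mat d e" and AB: "A * B = 1\<^sub>m e"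
  shows "e \<le> d"
proof (rule ccontr)
  assume "\<not> e \<le> d" hence de: "d < e" by simp
  define A' where "A' = mat e e (\<lambda>(i,j). if j < d then A $$ (i,j) else 0)"
  define B' where "B' = mat e e (\<lambda>(i,j). if i < d then B $$ (i,j) else 0)"
  have A'c: "A' \<in> carrier_mat e e" and B'c: "B' \<in> carrier_mat e e" unfolding A'_def B'_def by auto
  have "A' * B' = 1\<^sub>m e"
  proof (rule eq_matI)
    fix i j assume "i < dim_row (1\<^sub>m e :: complex mat)" "j < dim_col (1\<^sub>m e :: complex mat)"
    hence i: "i < e" and j: "j < e" by auto
    have "(A' * B') $$ (i,j) = (\<Sum>k<e. A' $$ (i,k) * B' $$ (k,j))" by (rule mult_mat_index_sum[OF A'c B'c i j])
    also have "\<dots> = (\<Sum>k<e. if k < d then A $$ (i,k) * B $$ (k,j) else 0)"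
      unfolding A'_def B'_def using i j by (intro sum.cong refl, auto)
    also have "\<dots> = sum (\<lambda>k. A $$ (i,k) * B $$ (k,j)) {k \<in> {..<e}. k < d}"
      by (rule sum.inter_filter[symmetric], simp)
    also have "{k \<in> {..<e}. k < d} = {..<d}" using de by auto
    also have "sum (\<lambda>k. A $$ (i,k) * B $$ (k,j)) {..<d} = (A * B) $$ (i,j)"
      using mult_mat_index_sum[OF A B i j] by simp
    finally show "(A' * B') $$ (i,j) = (1\<^sub>m e :: complex mat) $$ (i,j)" using AB by simp
  qed (insert A'c B'c, auto)
  hence BA: "B' * A' = 1\<^sub>m e" by (rule mat_mult_left_right_inverse[OF A'c B'c])
  have e1: "e - 1 < e" and e2: "\<not> e - 1 < d" using de by auto
  have "(B' * A') $$ (e-1,e-1) = (\<Sum>k<e. B' $$ (e-1,k) * A' $$ (k,e-1))" by (rule mult_mat_index_sum[OF B'c A'c e1 e1])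
  also have "\<dots> = 0" unfolding B'_def using e1 e2 by (intro sum.neutral, auto)
  finally show False using BA e1 by simp
qed

lemma subspace_carrier: "is_subspace n W \<Longrightarrow> w \<in> W \<Longrightarrow> w \<in> carrier_vec n"
  unfolding is_subspace_def by auto

lemma subspace_zero: "is_subspace n W \<Longrightarrow> 0\<^sub>v n \<in> W"
  unfolding is_subspace_def by auto

lemma subspace_add: "is_subspace n W \<Longrightarrow> v \<in> W \<Longrightarrow> w \<in> W \<Longrightarrow> v + w \<in> W"
  unfolding is_subspace_def by auto

lemma subspace_smult: "is_subspace n W \<Longrightarrow> v \<in> W \<Longrightarrow> c \<cdot>\<^sub>v v \<in> W"
  unfolding is_subspace_def by auto

lemma subspace_minus: assumes W: "is_subspace n W" and v: "v \<in> W" and w: "w \<in> W" shows "v - w \<in> W"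
proof -
  have vc: "v \<in> carrier_vec n" and wc: "w \<in> carrier_vec n" using subspace_carrier[OF W] v w by auto
  have "v - w = v + (-1) \<cdot>\<^sub>v w" using vc wc by (intro eq_vecI, auto)
  thus ?thesis using subspace_add[OF W v subspace_smult[OF W w]] by simp
qed

definition orth_compl :: "nat \<Rightarrow> complex vec set \<Rightarrow> complex vec set" where
  "orth_compl n W = {x \<in> carrier_vec n. \<forall>w\<in>W. vinner w x = 0}"

lemma is_subspace_orth_compl: assumes W: "is_subspace n W" shows "is_subspace n (orth_compl n W)"
  unfolding is_subspace_def orth_compl_def
proof (intro conjI ballI allI)
  fix v w assume v: "v \<in> {x \<in> carrier_vec n. \<forall>w\<in>W. vinner w x = 0}" and w: "w \<in> {x \<in> carrier_vec n. \<forall>w\<in>W. vinner w x = 0}"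
  have "vinner w' (v + w) = vinner w' v + vinner w' w" if "w' \<in> W" for w'
    using v w subspace_carrier[OF W that] by (intro vinner_add_right) auto
  thus "v + w \<in> {x \<in> carrier_vec n. \<forall>w\<in>W. vinner w x = 0}" using v w by auto
next
  fix c :: complex and v assume v: "v \<in> {x \<in> carrier_vec n. \<forall>w\<in>W. vinner w x = 0}"
  have "vinner w' (c \<cdot>\<^sub>v v) = c * vinner w' v" if "w' \<in> W" for w'
    using v subspace_carrier[OF W that] by (intro vinner_smult_right) auto
  thus "c \<cdot>\<^sub>v v \<in> {x \<in> carrier_vec n. \<forall>w\<in>W. vinner w x = 0}" using v by auto
qed (auto simp: vinner_def dest: subspace_carrier[OF W])

lemma is_subspace_kernel: assumes A: "A \<in> carrier_mat m n"
  shows "is_subspace n {v \<in> carrier_vec n. A *\<^sub>v v = 0\<^sub>v m}"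
  unfolding is_subspace_def
proof (intro conjI ballI allI)
  fix v w assume "v \<in> {v \<in> carrier_vec n. A *\<^sub>v v = 0\<^sub>v m}" "w \<in> {v \<in> carrier_vec n. A *\<^sub>v v = 0\<^sub>v m}"
  thus "v + w \<in> {v \<in> carrier_vec n. A *\<^sub>v v = 0\<^sub>v m}" using mult_add_distrib_mat_vec[OF A, of v w] by auto
next
  fix c :: complex and v assume "v \<in> {v \<in> carrier_vec n. A *\<^sub>v v = 0\<^sub>v m}"
  thus "c \<cdot>\<^sub>v v \<in> {v \<in> carrier_vec n. A *\<^sub>v v = 0\<^sub>v m}" using mult_mat_vec[OF A, of v c] by auto
qed (auto simp: mult_mat_vec_zero[OF A])

lemma is_subspace_range: assumes B: "B \<in> carrier_mat n m"
  shows "is_subspace n {B *\<^sub>v x | x. x \<in> carrier_vec m}"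
  unfolding is_subspace_def
proof (intro conjI ballI allI)
  have "0\<^sub>v n = B *\<^sub>v 0\<^sub>v m" by (rule mult_mat_vec_zero[OF B, symmetric])
  thus "0\<^sub>v n \<in> {B *\<^sub>v x | x. x \<in> carrier_vec m}" by (auto intro!: exI[of _ "0\<^sub>v m"])
  fix v w assume "v \<in> {B *\<^sub>v x | x. x \<in> carrier_vec m}" "w \<in> {B *\<^sub>v x | x. x \<in> carrier_vec m}"
  then obtain x y where xy: "x \<in> carrier_vec m" "y \<in> carrier_vec m" and "v = B *\<^sub>v x" "w = B *\<^sub>v y" by auto
  hence "v + w = B *\<^sub>v (x + y)" using mult_add_distrib_mat_vec[OF B xy] by simp
  thus "v + w \<in> {B *\<^sub>v x | x. x \<in> carrier_vec m}" using xy by (auto intro!: exI[of _ "x + y"])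
next
  fix c :: complex and v assume "v \<in> {B *\<^sub>v x | x. x \<in> carrier_vec m}"
  then obtain x where x: "x \<in> carrier_vec m" and "v = B *\<^sub>v x" by auto
  hence "c \<cdot>\<^sub>v v = B *\<^sub>v (c \<cdot>\<^sub>v x)" using mult_mat_vec[OF B x] by simp
  thus "c \<cdot>\<^sub>v v \<in> {B *\<^sub>v x | x. x \<in> carrier_vec m}" using x by (auto intro!: exI[of _ "c \<cdot>\<^sub>v x"])
qed (use B in auto)

definition pos_def_herm :: "complex mat \<Rightarrow> nat \<Rightarrow> bool" where
  "pos_def_herm H n \<longleftrightarrow> H \<in> carrier_mat n n \<and> madj H = H
     \<and> (\<forall>x\<in>carrier_vec n. x \<noteq> 0\<^sub>v n \<longrightarrow> Re (vinner x (H *\<^sub>v x)) > 0)"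

lemma pos_def_herm_one: "pos_def_herm (1\<^sub>m n) n"
  unfolding pos_def_herm_def
proof (intro conjI ballI impI)
  fix x :: "complex vec" assume x: "x \<in> carrier_vec n" and x0: "x \<noteq> 0\<^sub>v n"
  have "vinner x x \<noteq> 0" using vinner_self_eq_0[OF x] x0 by auto
  moreover have "Im (vinner x x) = 0" "Re (vinner x x) \<ge> 0" by (rule vinner_self_nonneg)+
  ultimately have "Re (vinner x x) > 0" using complex_eqI[of "vinner x x" 0] by force
  thus "Re (vinner x (1\<^sub>m n *\<^sub>v x)) > 0" using x by simp
qed auto

lemma herm_vinner_swap: assumes H: "H \<in> carrier_mat n n" and Hh: "madj H = H" and x: "x \<in> carrier_vec n" and y: "y \<in> carrier_vec n"
  shows "vinner x (H *\<^sub>v y) = cnj (vinner y (H *\<^sub>v x))"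
proof -
  have "vinner x (H *\<^sub>v y) = vinner (H *\<^sub>v x) y" using vinner_mult_mat_vec[OF H x y] Hh by simp
  also have "\<dots> = cnj (vinner y (H *\<^sub>v x))" by (rule vinner_swap, insert H x y, simp)
  finally show ?thesis .
qed

definition append_col :: "complex mat \<Rightarrow> complex vec \<Rightarrow> complex mat" where
  "append_col J u = mat (dim_row J) (Suc (dim_col J)) (\<lambda>(i,j). if j < dim_col J then J $$ (i,j) else u $ i)"

lemma append_col_carrier: "J \<in> carrier_mat n e \<Longrightarrow> append_col J u \<in> carrier_mat n (Suc e)"
  unfolding append_col_def by auto

lemma append_col_mult_vec:
  assumes J: "J \<in> carrier_mat n e" and u: "u \<in> carrier_vec n" and a: "a \<in> carrier_vec (Suc e)"
  shows "append_col J u *\<^sub>v a = J *\<^sub>v vec e (\<lambda>j. a $ j) + a $ e \<cdot>\<^sub>v u"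
proof (rule eq_vecI)
  fix i assume "i < dim_vec (J *\<^sub>v vec e (\<lambda>j. a $ j) + a $ e \<cdot>\<^sub>v u)"
  hence i: "i < n" using J u by simp
  have "(append_col J u *\<^sub>v a) $ i = (\<Sum>k<Suc e. append_col J u $$ (i,k) * a $ k)"
    by (rule mult_mat_vec_index_sum[OF append_col_carrier[OF J] a i])
  also have "\<dots> = (\<Sum>k<e. J $$ (i,k) * vec e (\<lambda>j. a $ j) $ k) + u $ i * a $ e"
    unfolding append_col_def using i J by (simp add: lessThan_Suc_atMost[symmetric])
  also have "\<dots> = (J *\<^sub>v vec e (\<lambda>j. a $ j) + a $ e \<cdot>\<^sub>v u) $ i"
    using mult_mat_vec_index_sum[OF J _ i, of "vec e (\<lambda>j. a $ j)"] i J u by simp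
  finally show "(append_col J u *\<^sub>v a) $ i = (J *\<^sub>v vec e (\<lambda>j. a $ j) + a $ e \<cdot>\<^sub>v u) $ i" .
qed (use J u append_col_carrier[OF J] in auto)

lemma append_col_orthonormal:
  assumes H: "H \<in> carrier_mat n n" "madj H = H" and J: "J \<in> carrier_mat n e"
    and JJ: "madj J * H * J = 1\<^sub>m e" and u: "u \<in> carrier_vec n"
    and Ju: "madj J *\<^sub>v (H *\<^sub>v u) = 0\<^sub>v e" and uu: "vinner u (H *\<^sub>v u) = 1"
  shows "madj (append_col J u) * H * append_col J u = 1\<^sub>m (Suc e)"
proof (rule eq_matI)
  let ?J = "append_col J u"
  have J'c: "?J \<in> carrier_mat n (Suc e)" by (rule append_col_carrier[OF J])
  have colJ: "col ?J a = col J a" if "a < e" for a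
    unfolding append_col_def using J that by (intro eq_vecI, auto)
  have colu: "col ?J e = u"
    unfolding append_col_def using J u by (intro eq_vecI, auto)
  have Ju_a: "vinner (col J a) (H *\<^sub>v u) = 0" if a: "a < e" for a
    using madj_mult_vec_index[OF J _ a, of "H *\<^sub>v u"] Ju H u a by simp
  fix a b assume "a < dim_row (1\<^sub>m (Suc e) :: complex mat)" "b < dim_col (1\<^sub>m (Suc e) :: complex mat)"
  hence a: "a < Suc e" and b: "b < Suc e" by auto
  have "(madj ?J * H * ?J) $$ (a,b) = vinner (col ?J a) (H *\<^sub>v col ?J b)"
    by (rule madj_mult_mult_index[OF J'c H(1) J'c a b])
  also have "\<dots> = (1\<^sub>m (Suc e) :: complex mat) $$ (a,b)"
  proof (cases "a < e"; cases "b < e")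
    assume "a < e" "b < e"
    thus ?thesis using madj_mult_mult_index[OF J H(1) J, of a b] JJ by (simp add: colJ)
  next
    assume "a < e" "\<not> b < e"
    moreover from this b have "b = e" by simp
    ultimately show ?thesis using Ju_a by (simp add: colJ colu)
  next
    assume "\<not> a < e" "b < e"
    moreover from this a have "a = e" by simp
    ultimately show ?thesis using herm_vinner_swap[OF H u col_carrier[OF J], of b] Ju_a by (simp add: colJ colu)
  next
    assume "\<not> a < e" "\<not> b < e"
    with a b have "a = e" "b = e" by simp_all
    thus ?thesis using uu by (simp add: colu)
  qed
  finally show "(madj ?J * H * ?J) $$ (a,b) = (1\<^sub>m (Suc e) :: complex mat) $$ (a,b)" .
qed (use J append_col_carrier[OF J] H in auto)

lemma frame_residual_H_orth:
  assumes H: "H \<in> carrier_mat n n" and J: "J \<in> carrier_mat n e" and JJ: "madj J * H * J = 1\<^sub>m e"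
    and w: "w \<in> carrier_vec n"
  shows "madj J *\<^sub>v (H *\<^sub>v (w - J *\<^sub>v (madj J *\<^sub>v (H *\<^sub>v w)))) = 0\<^sub>v e"
proof -
  have aJ: "madj J \<in> carrier_mat e n" using J by simp
  define a where "a = madj J *\<^sub>v (H *\<^sub>v w)"
  have a: "a \<in> carrier_vec e" unfolding a_def using aJ H w by simp
  have "madj J *\<^sub>v (H *\<^sub>v (J *\<^sub>v a)) = (madj J * (H * J)) *\<^sub>v a"
    using assoc_mult_mat_vec[OF H J a] assoc_mult_mat_vec[OF aJ mult_carrier_mat[OF H J] a] by simp
  also have "\<dots> = (madj J * H * J) *\<^sub>v a" using assoc_mult_mat[OF aJ H J] by simp
  also have "\<dots> = a" using JJ a by simp
  moreover have "madj J *\<^sub>v (H *\<^sub>v (w - J *\<^sub>v a)) = madj J *\<^sub>v (H *\<^sub>v w) - madj J *\<^sub>v (H *\<^sub>v (J *\<^sub>v a))"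
    using mult_minus_distrib_mat_vec[OF H w mult_mat_vec_carrier[OF J a]]
      mult_minus_distrib_mat_vec[OF aJ mult_mat_vec_carrier[OF H w] mult_mat_vec_carrier[OF H mult_mat_vec_carrier[OF J a]]]
    by simp
  ultimately show ?thesis using a unfolding a_def by simp
qed

lemma pos_def_herm_normalize:
  assumes H: "pos_def_herm H n" and r: "r \<in> carrier_vec n" and r0: "r \<noteq> 0\<^sub>v n"
  shows "\<exists>c. vinner (c \<cdot>\<^sub>v r) (H *\<^sub>v (c \<cdot>\<^sub>v r)) = 1"
proof -
  have Hc: "H \<in> carrier_mat n n" and Hh: "madj H = H" using H unfolding pos_def_herm_def by auto
  define p where "p = Re (vinner r (H *\<^sub>v r))"
  have p: "p > 0" using H r r0 unfolding p_def pos_def_herm_def by blast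
  have "vinner r (H *\<^sub>v r) = cnj (vinner r (H *\<^sub>v r))" by (rule herm_vinner_swap[OF Hc Hh r r])
  hence "Im (vinner r (H *\<^sub>v r)) = 0" by (metis cnj.sel(2) neg_equal_zero)
  hence real: "vinner r (H *\<^sub>v r) = complex_of_real p" unfolding p_def by (simp add: complex_eq_iff)
  define c where "c = complex_of_real (1 / sqrt p)"
  have "vinner (c \<cdot>\<^sub>v r) (H *\<^sub>v (c \<cdot>\<^sub>v r)) = cnj c * (c * vinner r (H *\<^sub>v r))"
    unfolding mult_mat_vec[OF Hc r] vinner_smult_left using Hc r by (subst vinner_smult_right) auto
  also have "\<dots> = 1" unfolding real c_def using p by (simp flip: of_real_mult)
  finally show ?thesis by blast
qed

lemma frame_extend:
  assumes H: "pos_def_herm H n" and W: "is_subspace n W" and J: "J \<in> carrier_mat n e"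
    and JJ: "madj J * H * J = 1\<^sub>m e" and JW: "\<forall>a\<in>carrier_vec e. J *\<^sub>v a \<in> W"
    and w: "w \<in> W" and ne: "J *\<^sub>v (madj J *\<^sub>v (H *\<^sub>v w)) \<noteq> w"
  shows "\<exists>J'. J' \<in> carrier_mat n (Suc e) \<and> madj J' * H * J' = 1\<^sub>m (Suc e)
           \<and> (\<forall>a\<in>carrier_vec (Suc e). J' *\<^sub>v a \<in> W)"
proof -
  have Hc: "H \<in> carrier_mat n n" and Hh: "madj H = H" using H unfolding pos_def_herm_def by auto
  have aJ: "madj J \<in> carrier_mat e n" using J by simp
  have wc: "w \<in> carrier_vec n" using subspace_carrier[OF W w] .
  define r where "r = w - J *\<^sub>v (madj J *\<^sub>v (H *\<^sub>v w))"
  have coeff: "madj J *\<^sub>v (H *\<^sub>v w) \<in> carrier_vec e" using mult_mat_vec_carrier[OF aJ mult_mat_vec_carrier[OF Hc wc]] .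
  have Jw: "J *\<^sub>v (madj J *\<^sub>v (H *\<^sub>v w)) \<in> W" "J *\<^sub>v (madj J *\<^sub>v (H *\<^sub>v w)) \<in> carrier_vec n"
    using JW coeff mult_mat_vec_carrier[OF J coeff] by auto
  have rW: "r \<in> W" unfolding r_def by (rule subspace_minus[OF W w Jw(1)])
  have rc: "r \<in> carrier_vec n" unfolding r_def using wc Jw by simp
  have "r \<noteq> 0\<^sub>v n" unfolding r_def using minus_vec_eq_0_iff[OF wc Jw(2)] ne by auto
  then obtain c where uu: "vinner (c \<cdot>\<^sub>v r) (H *\<^sub>v (c \<cdot>\<^sub>v r)) = 1"
    using pos_def_herm_normalize[OF H rc] by blast
  have Ju: "madj J *\<^sub>v (H *\<^sub>v (c \<cdot>\<^sub>v r)) = 0\<^sub>v e"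
    using frame_residual_H_orth[OF Hc J JJ wc] mult_mat_vec[OF Hc rc] mult_mat_vec[OF aJ mult_mat_vec_carrier[OF Hc rc]]
    unfolding r_def[symmetric] by (auto intro!: eq_vecI)
  have uc: "c \<cdot>\<^sub>v r \<in> carrier_vec n" using rc by simp
  have "append_col J (c \<cdot>\<^sub>v r) *\<^sub>v a \<in> W" if a: "a \<in> carrier_vec (Suc e)" for a
    unfolding append_col_mult_vec[OF J uc a]
    using JW a rW by (intro subspace_add[OF W] subspace_smult[OF W]) auto
  thus ?thesis
    using append_col_carrier[OF J] append_col_orthonormal[OF Hc Hh J JJ uc Ju uu] by blast
qed

text \<open>\<open>J J\<^sup>* H\<close> is the \<open>H\<close>-orthogonal projection onto \<open>W\<close>.\<close>

lemma orthonormal_frame_exists: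
  assumes H: "pos_def_herm H n" and W: "is_subspace n W"
  obtains e J where "J \<in> carrier_mat n e" "madj J * H * J = 1\<^sub>m e" "\<forall>a\<in>carrier_vec e. J *\<^sub>v a \<in> W"
    "\<forall>w\<in>W. J *\<^sub>v (madj J *\<^sub>v (H *\<^sub>v w)) = w"
proof -
  have Hc: "H \<in> carrier_mat n n" using H unfolding pos_def_herm_def by auto
  define S where "S = {e. \<exists>J. J \<in> carrier_mat n e \<and> madj J * H * J = 1\<^sub>m e \<and> (\<forall>a\<in>carrier_vec e. J *\<^sub>v a \<in> W)}"
  have bnd: "e \<le> n" if eS: "e \<in> S" for e
  proof -
    obtain J where J: "J \<in> carrier_mat n e" and JJ: "madj J * H * J = 1\<^sub>m e" using eS unfolding S_def by auto
    show ?thesis by (rule dim_le_if_mult_eq_one[OF mult_carrier_mat[OF madj_carrier[OF J] Hc] J JJ])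
  qed
  have finS: "finite S" using bnd by (intro finite_subset[of S "{..n}"], auto)
  have "0 \<in> S" unfolding S_def
    by (intro CollectI exI[of _ "0\<^sub>m n 0"] conjI ballI, auto simp: zero_mult_mat_vec subspace_zero[OF W])
  hence neS: "S \<noteq> {}" by auto
  define e where "e = Max S"
  have "e \<in> S" unfolding e_def using finS neS by (rule Max_in)
  then obtain J where J: "J \<in> carrier_mat n e" and JJ: "madj J * H * J = 1\<^sub>m e"
    and JW: "\<forall>a\<in>carrier_vec e. J *\<^sub>v a \<in> W" unfolding S_def by auto
  have "J *\<^sub>v (madj J *\<^sub>v (H *\<^sub>v w)) = w" if w: "w \<in> W" for w
  proof (rule ccontr)
    assume "J *\<^sub>v (madj J *\<^sub>v (H *\<^sub>v w)) \<noteq> w"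
    hence "Suc e \<in> S" unfolding S_def using frame_extend[OF H W J JJ JW w] by blast
    thus False using Max_ge[OF finS] unfolding e_def by fastforce
  qed
  with J JJ JW show ?thesis using that by blast
qed

lemma frame_proj_carrier: "J \<in> carrier_mat n e \<Longrightarrow> v \<in> carrier_vec n \<Longrightarrow> J *\<^sub>v (madj J *\<^sub>v v) \<in> carrier_vec n"
  using mult_mat_vec_carrier[OF _ mult_mat_vec_carrier[OF madj_carrier]] by blast

lemma isometry_square_surj:
  assumes J: "J \<in> carrier_mat n n" and JJ: "madj J * J = 1\<^sub>m n" and v: "v \<in> carrier_vec n"
  shows "J *\<^sub>v (madj J *\<^sub>v v) = v"
proof -
  have "J * madj J = 1\<^sub>m n" using mat_mult_left_right_inverse[OF madj_carrier[OF J] J JJ] .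
  thus ?thesis using assoc_mult_mat_vec[OF J madj_carrier[OF J] v, symmetric] v by simp
qed

lemma frame_residual_in_orth_compl:
  assumes W: "is_subspace n W" and J: "J \<in> carrier_mat n e"
    and Jspan: "\<forall>w\<in>W. J *\<^sub>v (madj J *\<^sub>v w) = w" and v: "v \<in> carrier_vec n"
  shows "v - J *\<^sub>v (madj J *\<^sub>v v) \<in> orth_compl n W"
proof -
  have Jv: "J *\<^sub>v (madj J *\<^sub>v v) \<in> carrier_vec n" using frame_proj_carrier[OF J v] .
  have "vinner w (v - J *\<^sub>v (madj J *\<^sub>v v)) = 0" if w: "w \<in> W" for w
  proof -
    have wc: "w \<in> carrier_vec n" by (rule subspace_carrier[OF W w])
    have "vinner w (J *\<^sub>v (madj J *\<^sub>v v)) = vinner (J *\<^sub>v (madj J *\<^sub>v w)) v"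
      using vinner_mult_mat_vec[OF J wc mult_mat_vec_carrier[OF madj_carrier[OF J] v]]
        vinner_mult_mat_vec[OF madj_carrier[OF J] mult_mat_vec_carrier[OF madj_carrier[OF J] wc] v] by simp
    also have "\<dots> = vinner w v" using Jspan w by simp
    finally show ?thesis using vinner_minus_right[of v w "J *\<^sub>v (madj J *\<^sub>v v)"] wc v Jv J by simp
  qed
  thus ?thesis unfolding orth_compl_def using v Jv by simp
qed

lemma frame_dim_less:
  assumes W: "is_subspace n W" and WC: "W \<noteq> carrier_vec n" and J: "J \<in> carrier_mat n e"
    and JJ: "madj J * J = 1\<^sub>m e" and JW: "\<forall>a\<in>carrier_vec e. J *\<^sub>v a \<in> W"
  shows "e < n"
proof -
  have "e \<le> n" by (rule dim_le_if_mult_eq_one[OF madj_carrier[OF J] J JJ])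
  moreover have "e \<noteq> n"
  proof
    assume "e = n"
    hence "v \<in> W" if "v \<in> carrier_vec n" for v
      using isometry_square_surj[of J n v] J JJ JW that by (metis mult_mat_vec_carrier madj_carrier)
    thus False using WC subspace_carrier[OF W] by blast
  qed
  ultimately show ?thesis by simp
qed

lemma orth_compl_proper:
  assumes W: "is_subspace n W" and W0: "W \<noteq> {0\<^sub>v n}" shows "orth_compl n W \<noteq> carrier_vec n"
proof
  assume all: "orth_compl n W = carrier_vec n"
  have "w = 0\<^sub>v n" if w: "w \<in> W" for w
    using all subspace_carrier[OF W w] w vinner_self_eq_0[OF subspace_carrier[OF W w]]
    unfolding orth_compl_def by auto
  thus False using W0 subspace_zero[OF W] by blast
qed

lemma unitary_conj_of_invariant_form:
  assumes H: "H \<in> carrier_mat d d" and J: "J \<in> carrier_mat d d" and K: "K \<in> carrier_mat d d"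
    and JK: "J * K = 1\<^sub>m d" and JHJ: "madj J * H * J = 1\<^sub>m d" and aK: "madj K = H * J"
    and R: "R \<in> carrier_mat d d" and RHR: "madj R * H * R = H"
  shows "madj (K * R * J) * (K * R * J) = 1\<^sub>m d"
proof -
  have aR: "madj R \<in> carrier_mat d d" and aJ: "madj J \<in> carrier_mat d d" using R J by auto
  have "madj (K * R * J) = madj J * (madj R * madj K)"
    using madj_mult[OF mult_carrier_mat[OF K R] J] madj_mult[OF K R] by simp
  hence "madj (K * R * J) * (K * R * J) = madj J * (madj R * (H * J)) * (K * R * J)" unfolding aK by simp
  also have "\<dots> = madj J * (madj R * (H * ((J * K) * (R * J))))"
    using aJ aR H J K R by (simp add: assoc_mult_mat[of _ d d _ d _ d])
  also have "\<dots> = madj J * ((madj R * H * R) * J)"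
    using aJ aR H J K R JK by (simp add: assoc_mult_mat[of _ d d _ d _ d])
  also have "\<dots> = 1\<^sub>m d" using RHR JHJ aJ H J by (simp add: assoc_mult_mat[of _ d d _ d _ d])
  finally show ?thesis .
qed

section \<open>Complete reducibility of unitary representations\<close>

locale unitary_rep =
  fixes H :: "complex mat set" and n :: nat and \<Phi> :: "complex mat \<Rightarrow> complex mat"
  assumes rep_carrier: "U \<in> H \<Longrightarrow> \<Phi> U \<in> carrier_mat n n"
    and rep_mult: "U \<in> H \<Longrightarrow> V \<in> H \<Longrightarrow> \<Phi> (U * V) = \<Phi> U * \<Phi> V"
    and madj_closed: "U \<in> H \<Longrightarrow> madj U \<in> H"
    and rep_madj: "U \<in> H \<Longrightarrow> \<Phi> (madj U) = madj (\<Phi> U)"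
    and rep_unitary: "U \<in> H \<Longrightarrow> \<Phi> U * madj (\<Phi> U) = 1\<^sub>m n"
begin

lemma is_rep: "is_rep H n \<Phi>"
  unfolding is_rep_def using rep_carrier rep_mult rep_unitary madj_carrier by blast

text \<open>An isometry \<open>J\<close> whose range is \<open>\<Phi>\<close>-invariant; \<open>compress J\<close> is the subrepresentation
  on that range, written in the orthonormal basis given by the columns of \<open>J\<close>.\<close>

definition invariant_frame :: "complex mat \<Rightarrow> nat \<Rightarrow> bool" where
  "invariant_frame J e \<longleftrightarrow> J \<in> carrier_mat n e \<and> madj J * J = 1\<^sub>m e
     \<and> (\<forall>U\<in>H. \<Phi> U * J = J * (madj J * \<Phi> U * J))"

definition compress :: "complex mat \<Rightarrow> complex mat \<Rightarrow> complex mat" where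
  "compress J U = madj J * \<Phi> U * J"

lemma invariant_frame_one: "invariant_frame (1\<^sub>m n) n"
  unfolding invariant_frame_def by (auto dest: rep_carrier)

lemma unitary_rep_compress:
  assumes "invariant_frame J e" shows "unitary_rep H e (compress J)"
proof -
  have J: "J \<in> carrier_mat n e" and JJ: "madj J * J = 1\<^sub>m e"
    and inv: "\<And>U. U \<in> H \<Longrightarrow> \<Phi> U * J = J * compress J U"
    using assms unfolding invariant_frame_def compress_def by auto
  have aJ: "madj J \<in> carrier_mat e n" using J by simp
  have C: "compress J U \<in> carrier_mat e e" if "U \<in> H" for U
    unfolding compress_def using aJ rep_carrier[OF that] J by (intro mult_carrier_mat)
  have mult: "compress J U * compress J V = madj J * (\<Phi> U * \<Phi> V) * J" if U: "U \<in> H" and V: "V \<in> H" for U V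
  proof -
    have "compress J U * compress J V = madj J * \<Phi> U * (J * compress J V)"
      unfolding compress_def[of J U] using aJ rep_carrier[OF U] J C[OF V]
      by (simp add: assoc_mult_mat[of _ e n _ n _ e] assoc_mult_mat[of _ e n _ e _ e])
    also have "\<dots> = madj J * (\<Phi> U * \<Phi> V) * J"
      unfolding inv[OF V, symmetric] using aJ rep_carrier[OF U] rep_carrier[OF V] J
      by (simp add: assoc_mult_mat[of _ e n _ n _ e] assoc_mult_mat[of _ e n _ n _ n])
    finally show ?thesis .
  qed
  show ?thesis
  proof
    fix U assume U: "U \<in> H"
    show "compress J U \<in> carrier_mat e e" by (rule C[OF U])
    show "madj U \<in> H" by (rule madj_closed[OF U])
    have F: "\<Phi> U \<in> carrier_mat n n" by (rule rep_carrier[OF U])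
    have "madj (compress J U) = madj J * madj (madj J * \<Phi> U)"
      unfolding compress_def by (rule madj_mult[OF mult_carrier_mat[OF aJ F] J])
    also have "madj (madj J * \<Phi> U) = madj (\<Phi> U) * J" using madj_mult[OF aJ F] by simp
    also have "madj J * (madj (\<Phi> U) * J) = madj J * madj (\<Phi> U) * J"
      using assoc_mult_mat[OF aJ madj_carrier[OF F] J] by simp
    finally have adjC: "madj (compress J U) = madj J * madj (\<Phi> U) * J" .
    thus cadj: "compress J (madj U) = madj (compress J U)" unfolding compress_def rep_madj[OF U] by simp
    have "compress J U * madj (compress J U) = madj J * (\<Phi> U * \<Phi> (madj U)) * J"
      unfolding cadj[symmetric] by (rule mult[OF U madj_closed[OF U]])
    thus "compress J U * madj (compress J U) = 1\<^sub>m e"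
      unfolding rep_madj[OF U] rep_unitary[OF U] using JJ right_mult_one_mat[OF aJ] by simp
  next
    fix U V assume U: "U \<in> H" and V: "V \<in> H"
    show "compress J (U * V) = compress J U * compress J V"
      using mult[OF U V] unfolding compress_def rep_mult[OF U V] by simp
  qed
qed

lemma invariant_frame_mult:
  assumes J: "invariant_frame J e" and J': "unitary_rep.invariant_frame H e (compress J) J' e'"
  shows "invariant_frame (J * J') e'"
proof -
  interpret C: unitary_rep H e "compress J" by (rule unitary_rep_compress[OF J])
  have Jc: "J \<in> carrier_mat n e" and JJ: "madj J * J = 1\<^sub>m e"
    and Jinv: "\<And>U. U \<in> H \<Longrightarrow> \<Phi> U * J = J * compress J U"
    using J unfolding invariant_frame_def compress_def by auto
  have J'c: "J' \<in> carrier_mat e e'" and J'J': "madj J' * J' = 1\<^sub>m e'"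
    and J'inv: "\<And>U. U \<in> H \<Longrightarrow> compress J U * J' = J' * C.compress J' U"
    using J' unfolding C.invariant_frame_def C.compress_def by auto
  have aJ: "madj J \<in> carrier_mat e n" and aJ': "madj J' \<in> carrier_mat e' e" using Jc J'c by auto
  have adj: "madj (J * J') = madj J' * madj J" by (rule madj_mult[OF Jc J'c])
  have "madj (J * J') * (J * J') = madj J' * ((madj J * J) * J')"
    unfolding adj using assoc_mult_mat[OF aJ' aJ mult_carrier_mat[OF Jc J'c]] assoc_mult_mat[OF aJ Jc J'c] by simp
  hence isom: "madj (J * J') * (J * J') = 1\<^sub>m e'" using JJ J'J' J'c by simp
  have "\<Phi> U * (J * J') = J * J' * (madj (J * J') * \<Phi> U * (J * J'))" if U: "U \<in> H" for U
  proof -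
    have F: "\<Phi> U \<in> carrier_mat n n" by (rule rep_carrier[OF U])
    have CU: "compress J U \<in> carrier_mat e e" by (rule C.rep_carrier[OF U])
    have CCU: "C.compress J' U \<in> carrier_mat e' e'" by (rule unitary_rep.rep_carrier[OF C.unitary_rep_compress[OF J'] U])
    have "\<Phi> U * (J * J') = J * (J' * C.compress J' U)"
      using assoc_mult_mat[OF F Jc J'c, symmetric] Jinv[OF U] assoc_mult_mat[OF Jc CU J'c] J'inv[OF U] by simp
    also have "C.compress J' U = madj (J * J') * \<Phi> U * (J * J')"
    proof -
      have "madj (J * J') * \<Phi> U * (J * J') = madj J' * ((madj J * \<Phi> U) * (J * J'))"
        unfolding adj using assoc_mult_mat[OF aJ' aJ F]
          assoc_mult_mat[OF aJ' mult_carrier_mat[OF aJ F] mult_carrier_mat[OF Jc J'c]] by simp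
      also have "(madj J * \<Phi> U) * (J * J') = compress J U * J'"
        unfolding compress_def using assoc_mult_mat[OF mult_carrier_mat[OF aJ F] Jc J'c] by simp
      finally show ?thesis unfolding C.compress_def using assoc_mult_mat[OF aJ' CU J'c] by simp
    qed
    moreover have "madj (J * J') * \<Phi> U * (J * J') \<in> carrier_mat e' e'"
      using mult_carrier_mat[OF mult_carrier_mat[OF madj_carrier F] mult_carrier_mat[OF Jc J'c]]
        mult_carrier_mat[OF Jc J'c] by blast
    ultimately show ?thesis using assoc_mult_mat[OF Jc J'c] by simp
  qed
  thus ?thesis unfolding invariant_frame_def using Jc J'c isom by auto
qed

lemma invariant_frame_of_subspace:
  assumes W: "is_subspace n W" and Winv: "\<forall>U\<in>H. \<forall>v\<in>W. \<Phi> U *\<^sub>v v \<in> W"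
    and J: "J \<in> carrier_mat n e" and JJ: "madj J * J = 1\<^sub>m e"
    and JW: "\<forall>a\<in>carrier_vec e. J *\<^sub>v a \<in> W" and Jspan: "\<forall>w\<in>W. J *\<^sub>v (madj J *\<^sub>v w) = w"
  shows "invariant_frame J e"
proof -
  have aJ: "madj J \<in> carrier_mat e n" using J by simp
  have "\<Phi> U * J = J * (madj J * \<Phi> U * J)" if U: "U \<in> H" for U
  proof -
    have F: "\<Phi> U \<in> carrier_mat n n" by (rule rep_carrier[OF U])
    have S: "madj J * \<Phi> U * J \<in> carrier_mat e e" using aJ F J by (intro mult_carrier_mat)
    show ?thesis
    proof (rule mat_eq_by_mult_vec[OF mult_carrier_mat[OF F J] mult_carrier_mat[OF J S]])
      fix x :: "complex vec" assume x: "x \<in> carrier_vec e"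
      have y: "\<Phi> U *\<^sub>v (J *\<^sub>v x) \<in> W" using Winv U JW x by auto
      have "(J * (madj J * \<Phi> U * J)) *\<^sub>v x = J *\<^sub>v (madj J *\<^sub>v (\<Phi> U *\<^sub>v (J *\<^sub>v x)))"
        using assoc_mult_mat_vec[OF J S x] assoc_mult_mat_vec[OF mult_carrier_mat[OF aJ F] J x]
          assoc_mult_mat_vec[OF aJ F, of "J *\<^sub>v x"] J x by simp
      also have "\<dots> = \<Phi> U *\<^sub>v (J *\<^sub>v x)" using Jspan y by simp
      also have "\<dots> = (\<Phi> U * J) *\<^sub>v x" using assoc_mult_mat_vec[OF F J x] by simp
      finally show "(\<Phi> U * J) *\<^sub>v x = (J * (madj J * \<Phi> U * J)) *\<^sub>v x" by simp
    qed
  qed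
  thus ?thesis unfolding invariant_frame_def using J JJ by simp
qed

lemma orth_compl_invariant:
  assumes W: "is_subspace n W" and Winv: "\<forall>U\<in>H. \<forall>v\<in>W. \<Phi> U *\<^sub>v v \<in> W"
  shows "\<forall>U\<in>H. \<forall>v\<in>orth_compl n W. \<Phi> U *\<^sub>v v \<in> orth_compl n W"
proof (intro ballI)
  fix U v assume U: "U \<in> H" and v: "v \<in> orth_compl n W"
  have vc: "v \<in> carrier_vec n" using v unfolding orth_compl_def by simp
  have "vinner w (\<Phi> U *\<^sub>v v) = 0" if w: "w \<in> W" for w
  proof -
    have "vinner w (\<Phi> U *\<^sub>v v) = vinner (\<Phi> (madj U) *\<^sub>v w) v"
      unfolding rep_madj[OF U] by (rule vinner_mult_mat_vec[OF rep_carrier[OF U] subspace_carrier[OF W w] vc])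
    also have "\<dots> = 0" using v Winv madj_closed[OF U] w unfolding orth_compl_def by auto
    finally show ?thesis .
  qed
  thus "\<Phi> U *\<^sub>v v \<in> orth_compl n W" unfolding orth_compl_def using rep_carrier[OF U] vc by auto
qed

lemma orthonormal_invariant_frame:
  assumes W: "is_subspace n W" and Winv: "\<forall>U\<in>H. \<forall>v\<in>W. \<Phi> U *\<^sub>v v \<in> W"
  obtains e J where "invariant_frame J e" "\<forall>a\<in>carrier_vec e. J *\<^sub>v a \<in> W"
    "\<forall>w\<in>W. J *\<^sub>v (madj J *\<^sub>v w) = w"
proof -
  obtain e J where J: "J \<in> carrier_mat n e" and JJ: "madj J * 1\<^sub>m n * J = 1\<^sub>m e"
    and JW: "\<forall>a\<in>carrier_vec e. J *\<^sub>v a \<in> W" and Jspan: "\<forall>w\<in>W. J *\<^sub>v (madj J *\<^sub>v (1\<^sub>m n *\<^sub>v w)) = w"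
    by (rule orthonormal_frame_exists[OF pos_def_herm_one W])
  have JJ': "madj J * J = 1\<^sub>m e" using JJ J by simp
  have Jspan': "\<forall>w\<in>W. J *\<^sub>v (madj J *\<^sub>v w) = w" using Jspan subspace_carrier[OF W] by simp
  show ?thesis
    by (rule that[OF invariant_frame_of_subspace[OF W Winv J JJ' JW Jspan'] JW Jspan'])
qed

lemma reducible_split:
  assumes red: "\<not> irreducible_rep H n \<Phi>" and n: "n > 0"
  obtains e1 J1 e2 J2 where "invariant_frame J1 e1" "invariant_frame J2 e2" "e1 < n" "e2 < n"
    "\<And>v. v \<in> carrier_vec n \<Longrightarrow> \<exists>a\<in>carrier_vec e1. \<exists>b\<in>carrier_vec e2. v = J1 *\<^sub>v a + J2 *\<^sub>v b"
proof -
  obtain W where W: "is_subspace n W" and Winv: "\<forall>U\<in>H. \<forall>v\<in>W. \<Phi> U *\<^sub>v v \<in> W"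
    and W0: "W \<noteq> {0\<^sub>v n}" and WC: "W \<noteq> carrier_vec n"
    using red is_rep n unfolding irreducible_rep_def by auto
  define W' where "W' = orth_compl n W"
  have W': "is_subspace n W'" unfolding W'_def by (rule is_subspace_orth_compl[OF W])
  have W'inv: "\<forall>U\<in>H. \<forall>v\<in>W'. \<Phi> U *\<^sub>v v \<in> W'" unfolding W'_def by (rule orth_compl_invariant[OF W Winv])
  obtain e1 J1 where J1: "invariant_frame J1 e1" and J1W: "\<forall>a\<in>carrier_vec e1. J1 *\<^sub>v a \<in> W"
    and J1span: "\<forall>w\<in>W. J1 *\<^sub>v (madj J1 *\<^sub>v w) = w" by (rule orthonormal_invariant_frame[OF W Winv])
  obtain e2 J2 where J2: "invariant_frame J2 e2" and J2W: "\<forall>a\<in>carrier_vec e2. J2 *\<^sub>v a \<in> W'"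
    and J2span: "\<forall>w\<in>W'. J2 *\<^sub>v (madj J2 *\<^sub>v w) = w" by (rule orthonormal_invariant_frame[OF W' W'inv])
  have J1c: "J1 \<in> carrier_mat n e1" and J1J1: "madj J1 * J1 = 1\<^sub>m e1"
    and J2c: "J2 \<in> carrier_mat n e2" and J2J2: "madj J2 * J2 = 1\<^sub>m e2"
    using J1 J2 unfolding invariant_frame_def by auto
  have "e1 < n" by (rule frame_dim_less[OF W WC J1c J1J1 J1W])
  moreover have "e2 < n"
    using frame_dim_less[OF W' _ J2c J2J2 J2W] orth_compl_proper[OF W W0] unfolding W'_def by blast
  moreover have "\<exists>a\<in>carrier_vec e1. \<exists>b\<in>carrier_vec e2. v = J1 *\<^sub>v a + J2 *\<^sub>v b"
    if v: "v \<in> carrier_vec n" for v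
  proof (intro bexI)
    have r: "v - J1 *\<^sub>v (madj J1 *\<^sub>v v) \<in> W'"
      unfolding W'_def by (rule frame_residual_in_orth_compl[OF W J1c J1span v])
    have "J1 *\<^sub>v (madj J1 *\<^sub>v v) \<in> carrier_vec n" using frame_proj_carrier[OF J1c v] .
    thus "v = J1 *\<^sub>v (madj J1 *\<^sub>v v) + J2 *\<^sub>v (madj J2 *\<^sub>v (v - J1 *\<^sub>v (madj J1 *\<^sub>v v)))"
      unfolding J2span[rule_format, OF r] using v J1c by (intro eq_vecI) auto
    show "madj J1 *\<^sub>v v \<in> carrier_vec e1" using mult_mat_vec_carrier[OF madj_carrier[OF J1c] v] .
    show "madj J2 *\<^sub>v (v - J1 *\<^sub>v (madj J1 *\<^sub>v v)) \<in> carrier_vec e2"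
      using mult_mat_vec_carrier[OF madj_carrier[OF J2c]] r subspace_carrier[OF W'] by blast
  qed
  ultimately show ?thesis using that J1 J2 by blast
qed

end

text \<open>Complete reducibility: induction on the dimension of invariant frames, splitting a reducible
  one into an invariant subspace and its orthogonal complement.\<close>

lemma (in unitary_rep) zero_if_zero_on_irreducible_frames:
  assumes A: "A \<in> carrier_mat m n"
    and irr: "\<And>e J. invariant_frame J e \<Longrightarrow> irreducible_rep H e (compress J) \<Longrightarrow> A * J = 0\<^sub>m m e"
  shows "A = 0\<^sub>m m n"
proof -
  have "A * J = 0\<^sub>m m e" if "invariant_frame J e" for e J
    using that
  proof (induction e arbitrary: J rule: less_induct)
    case (less e J)
    have J: "J \<in> carrier_mat n e" using less.prems unfolding invariant_frame_def by simp
    interpret C: unitary_rep H e "compress J" by (rule unitary_rep_compress[OF less.prems])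
    consider "irreducible_rep H e (compress J)" | "e = 0" | "\<not> irreducible_rep H e (compress J)" "e > 0"
      by blast
    thus ?case
    proof cases
      case 1
      thus ?thesis by (rule irr[OF less.prems])
    next
      case 2
      thus ?thesis using A J by (intro eq_matI) auto
    next
      case 3
      then obtain e1 J1 e2 J2 where J1: "C.invariant_frame J1 e1" and J2: "C.invariant_frame J2 e2"
        and e1: "e1 < e" and e2: "e2 < e"
        and split: "\<And>v. v \<in> carrier_vec e \<Longrightarrow> \<exists>a\<in>carrier_vec e1. \<exists>b\<in>carrier_vec e2. v = J1 *\<^sub>v a + J2 *\<^sub>v b"
        by (rule C.reducible_split) blast
      have J1c: "J1 \<in> carrier_mat e e1" and J2c: "J2 \<in> carrier_mat e e2"
        using J1 J2 unfolding C.invariant_frame_def by auto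
      have "A * (J * J1) = 0\<^sub>m m e1" by (rule less.IH[OF e1 invariant_frame_mult[OF less.prems J1]])
      moreover have "A * (J * J2) = 0\<^sub>m m e2" by (rule less.IH[OF e2 invariant_frame_mult[OF less.prems J2]])
      ultimately show ?thesis using assoc_mult_mat[OF A J J1c] assoc_mult_mat[OF A J J2c]
        by (intro mult_eq_0_by_split[OF mult_carrier_mat[OF A J] J1c J2c _ _ split]) simp_all
    qed
  qed
  from this[OF invariant_frame_one] show ?thesis using A by simp
qed

lemma irreducible_rep_carrier: "irreducible_rep H e R \<Longrightarrow> U \<in> H \<Longrightarrow> R U \<in> carrier_mat e e"
  unfolding irreducible_rep_def is_rep_def by auto

lemma irreducible_rep_invariant:
  "irreducible_rep H e R \<Longrightarrow> is_subspace e W \<Longrightarrow> \<forall>U\<in>H. \<forall>v\<in>W. R U *\<^sub>v v \<in> W \<Longrightarrow> W = {0\<^sub>v e} \<or> W = carrier_vec e"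
  unfolding irreducible_rep_def by auto

lemma intertwiner_injective:
  assumes irr: "irreducible_rep H e R" and J: "J \<in> carrier_mat N e" and J0: "J \<noteq> 0\<^sub>m N e"
    and \<Phi>: "\<And>U. U \<in> H \<Longrightarrow> \<Phi> U \<in> carrier_mat N N" and JR: "\<And>U. U \<in> H \<Longrightarrow> \<Phi> U * J = J * R U"
    and v: "v \<in> carrier_vec e" and Jv: "J *\<^sub>v v = 0\<^sub>v N"
  shows "v = 0\<^sub>v e"
proof -
  define K where "K = {v \<in> carrier_vec e. J *\<^sub>v v = 0\<^sub>v N}"
  have "\<forall>U\<in>H. \<forall>x\<in>K. R U *\<^sub>v x \<in> K"
  proof (intro ballI)
    fix U x assume U: "U \<in> H" and x: "x \<in> K"
    have xc: "x \<in> carrier_vec e" and Jx: "J *\<^sub>v x = 0\<^sub>v N" using x unfolding K_def by auto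
    have R: "R U \<in> carrier_mat e e" by (rule irreducible_rep_carrier[OF irr U])
    have "J *\<^sub>v (R U *\<^sub>v x) = (\<Phi> U * J) *\<^sub>v x" using assoc_mult_mat_vec[OF J R xc] JR[OF U] by simp
    also have "\<dots> = 0\<^sub>v N" using assoc_mult_mat_vec[OF \<Phi>[OF U] J xc] Jx mult_mat_vec_zero[OF \<Phi>[OF U]] by simp
    finally show "R U *\<^sub>v x \<in> K" unfolding K_def using R xc by simp
  qed
  moreover have "K \<noteq> carrier_vec e"
  proof
    assume "K = carrier_vec e"
    hence "J = 0\<^sub>m N e" unfolding K_def by (intro mat_eq_by_mult_vec[OF J]) (auto simp: zero_mult_mat_vec)
    thus False using J0 by simp
  qed
  ultimately have "K = {0\<^sub>v e}"
    using irreducible_rep_invariant[OF irr] is_subspace_kernel[OF J] unfolding K_def by blast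
  thus ?thesis using v Jv unfolding K_def by auto
qed

lemma irreducible_rep_identity_trivial:
  assumes irr: "irreducible_rep H e R" and id: "\<And>U. U \<in> H \<Longrightarrow> R U = 1\<^sub>m e"
  shows "trivial_rep H e R"
proof -
  have e1: "e \<ge> 1" using irr unfolding irreducible_rep_def by simp
  have "e = 1"
  proof (rule ccontr)
    assume "e \<noteq> 1"
    hence e2: "e \<ge> 2" using e1 by simp
    define W where "W = {v \<in> carrier_vec e. v $ 0 = (0 :: complex)}"
    have "is_subspace e W" unfolding W_def is_subspace_def using e1 by auto
    moreover have "\<forall>U\<in>H. \<forall>v\<in>W. R U *\<^sub>v v \<in> W" unfolding W_def using id by auto
    moreover have "unit_vec e 1 \<in> W" "unit_vec e 1 \<noteq> (0\<^sub>v e :: complex vec)"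
      unfolding W_def using e2 by (auto dest: arg_cong[where f = "\<lambda>v. v $ 1"])
    moreover have "unit_vec e 0 \<notin> W" unfolding W_def using e1 by simp
    ultimately show False using irreducible_rep_invariant[OF irr] by (metis singletonD unit_vec_carrier)
  qed
  thus ?thesis unfolding trivial_rep_def using id by simp
qed

lemma irreducible_fixed_image_zero:
  assumes irr: "irreducible_rep H e R" and nt: "\<not> trivial_rep H e R"
    and B: "B \<in> carrier_mat e e" and RB: "\<And>U. U \<in> H \<Longrightarrow> R U * B = B"
  shows "B = 0\<^sub>m e e"
proof (rule ccontr)
  assume B0: "B \<noteq> 0\<^sub>m e e"
  define C where "C = {B *\<^sub>v x | x. x \<in> carrier_vec e}"
  have RBx: "R U *\<^sub>v (B *\<^sub>v x) = B *\<^sub>v x" if "U \<in> H" "x \<in> carrier_vec e" for U x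
    using assoc_mult_mat_vec[OF irreducible_rep_carrier[OF irr that(1)] B that(2)] RB[OF that(1)] by simp
  have "\<forall>U\<in>H. \<forall>v\<in>C. R U *\<^sub>v v \<in> C" unfolding C_def using RBx by blast
  moreover have "C \<noteq> {0\<^sub>v e}"
  proof
    assume "C = {0\<^sub>v e}"
    hence "B = 0\<^sub>m e e" unfolding C_def by (intro mat_eq_by_mult_vec[OF B]) (auto simp: zero_mult_mat_vec)
    thus False using B0 by simp
  qed
  ultimately have C: "C = carrier_vec e"
    using irreducible_rep_invariant[OF irr is_subspace_range[OF B]] unfolding C_def by blast
  have "R U = 1\<^sub>m e" if U: "U \<in> H" for U
  proof (rule mat_eq_by_mult_vec[OF irreducible_rep_carrier[OF irr U]])
    fix x :: "complex vec" assume "x \<in> carrier_vec e"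
    then obtain y where "y \<in> carrier_vec e" "x = B *\<^sub>v y" using C unfolding C_def by blast
    thus "R U *\<^sub>v x = 1\<^sub>m e *\<^sub>v x" using RBx[OF U] B by simp
  qed simp
  thus False using nt irreducible_rep_identity_trivial[OF irr] by blast
qed

section \<open>The Haar average of \<open>(U \<otimes> conj U)\<^bsup>\<otimes>t\<^esup>\<close>\<close>

lemma unitary_rep_FFt: "unitary_rep (unitary_group q) (q^(2*t)) (FFt t)"
proof
  fix U V assume "U \<in> unitary_group q" "V \<in> unitary_group q"
  thus "FFt t (U * V) = FFt t U * FFt t V" by (intro FFt_mult unitary_carrier)
qed (auto simp: FFt_madj FFt_mult_madj unitary_carrier unitary_madj)

locale haar_unitary =
  fixes q :: nat and M :: "complex mat measure"
  assumes haar: "haar_measure q M"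
begin

lemma prob_space_M: "prob_space M" using haar unfolding haar_measure_def by simp

lemma space_M: "space M = unitary_group q" using haar unfolding haar_measure_def by simp

lemma sets_M: "sets M = unitary_borel q" using haar unfolding haar_measure_def by simp

lemma haar_left_invariant: "V \<in> unitary_group q \<Longrightarrow> (\<lambda>U. V * U) \<in> M \<rightarrow>\<^sub>M M \<and> distr M M (\<lambda>U. V * U) = M"
  using haar unfolding haar_measure_def by simp

lemma entry_measurable: assumes i: "i < q" and j: "j < q" shows "(\<lambda>U. U $$ (i,j)) \<in> borel_measurable M"
proof (rule borel_measurableI)
  fix S :: "complex set" assume S: "open S"
  have "(\<lambda>U. U $$ (i,j)) -` S \<inter> space M = {U \<in> unitary_group q. U $$ (i, j) \<in> S}"
    unfolding space_M by auto
  also have "\<dots> \<in> sets M" unfolding sets_M unitary_borel_def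
    by (rule sigma_sets.Basic, insert i j S, blast)
  finally show "(\<lambda>U. U $$ (i,j)) -` S \<inter> space M \<in> sets M" .
qed

lemma borel_measurable_cnj: "f \<in> borel_measurable M \<Longrightarrow> (\<lambda>x. cnj (f x)) \<in> borel_measurable M"
  by (rule borel_measurable_continuous_on[OF linear_continuous_on[OF bounded_linear_cnj]])

lemma FFt_entry_measurable: "i < q^(2*t) \<Longrightarrow> j < q^(2*t) \<Longrightarrow> (\<lambda>U. FFt t U $$ (i,j)) \<in> borel_measurable M"
proof (induct t arbitrary: i j)
  case 0
  thus ?case unfolding FFt_def by simp
next
  case (Suc t i j)
  let ?Q = "q*q"
  have N: "q^(2*Suc t) = q^(2*t) * ?Q"
  proof -
    have "2 * Suc t = 2 * t + 2" by simp
    hence "q^(2*Suc t) = q^(2*t) * q^2" by (simp only: power_add)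
    thus ?thesis by (simp only: power2_eq_square)
  qed
  have i: "i < q^(2*t) * ?Q" using Suc(2) unfolding N .
  have j: "j < q^(2*t) * ?Q" using Suc(3) unfolding N .
  note ij = div_mod_less[OF i] div_mod_less[OF j]
  note ij2 = div_mod_less[OF ij(2)] div_mod_less[OF ij(4)]
  have eq: "FFt (Suc t) U $$ (i,j) = FFt t U $$ (i div ?Q, j div ?Q) *
     (U $$ (i mod ?Q div q, j mod ?Q div q) * cnj (U $$ (i mod ?Q mod q, j mod ?Q mod q)))"
    if U: "U \<in> space M" for U
  proof -
    have U': "U \<in> carrier_mat q q" using U unitary_carrier unfolding space_M by auto
    have F: "FFt t U \<in> carrier_mat (q^(2*t)) (q^(2*t))" using U' by simp
    have d: "dim_row (FFt t U) = q^(2*t)" "dim_col (FFt t U) = q^(2*t)" "dim_row U = q" "dim_col U = q"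
      using carrier_matD[OF F] carrier_matD[OF U'] by auto
    have "FFt (Suc t) U = kron (FFt t U) (kron U (mconj U))" unfolding FFt_def by simp
    thus ?thesis using i j ij ij2 by (simp add: kron_index d)
  qed
  show ?case
    apply (subst measurable_cong[OF eq], assumption)
    apply (intro borel_measurable_times borel_measurable_cnj entry_measurable Suc(1) ij ij2)
    done
qed

lemma FFt_entry_bound: "U \<in> space M \<Longrightarrow> i < q^(2*t) \<Longrightarrow> j < q^(2*t) \<Longrightarrow> cmod (FFt t U $$ (i,j)) \<le> 1"
  unfolding space_M
  by (rule unitary_entry_bound[OF FFt_carrier[OF unitary_carrier] FFt_mult_madj], auto)

lemma FFt_entry_integrable: "i < q^(2*t) \<Longrightarrow> j < q^(2*t) \<Longrightarrow> integrable M (\<lambda>U. FFt t U $$ (i,j))"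
proof -
  assume i: "i < q^(2*t)" and j: "j < q^(2*t)"
  interpret prob_space M by (rule prob_space_M)
  show ?thesis
    by (rule integrable_const_bound[where B=1], insert FFt_entry_bound[OF _ i j] FFt_entry_measurable[OF i j], auto)
qed

definition haar_avg :: "nat \<Rightarrow> complex mat" where "haar_avg t = mat_integral M (q^(2*t)) (FFt t)"

lemma haar_avg_carrier[simp]: "haar_avg t \<in> carrier_mat (q^(2*t)) (q^(2*t))"
  unfolding haar_avg_def mat_integral_def by simp

lemma haar_avg_dims[simp]: "dim_row (haar_avg t) = q^(2*t)" "dim_col (haar_avg t) = q^(2*t)"
  unfolding haar_avg_def mat_integral_def by simp_all

lemma haar_avg_index: "i < q^(2*t) \<Longrightarrow> j < q^(2*t) \<Longrightarrow> haar_avg t $$ (i,j) = (LINT U|M. FFt t U $$ (i,j))"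
  unfolding haar_avg_def mat_integral_def by simp

lemma FFt_mult_haar_avg: assumes V: "V \<in> unitary_group q" shows "FFt t V * haar_avg t = haar_avg t"
proof -
  have V': "V \<in> carrier_mat q q" by (rule unitary_carrier[OF V])
  show ?thesis
proof (rule eq_matI)
  let ?N = "q^(2*t)"
  fix i j assume "i < dim_row (haar_avg t)" "j < dim_col (haar_avg t)"
  hence i: "i < ?N" and j: "j < ?N" by auto
  have "(FFt t V * haar_avg t) $$ (i,j) = (\<Sum>k<?N. FFt t V $$ (i,k) * haar_avg t $$ (k,j))"
    by (rule mult_mat_index_sum[OF FFt_carrier[OF V'] haar_avg_carrier i j])
  also have "\<dots> = (\<Sum>k<?N. LINT U|M. FFt t V $$ (i,k) * FFt t U $$ (k,j))"
    using j by (intro sum.cong refl, simp add: haar_avg_index)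
  also have "\<dots> = (LINT U|M. (\<Sum>k<?N. FFt t V $$ (i,k) * FFt t U $$ (k,j)))"
    apply (subst Bochner_Integration.integral_sum)
    apply (auto intro!: integrable_mult_right FFt_entry_integrable j)
    done
  also have "\<dots> = (LINT U|M. FFt t (V * U) $$ (i,j))"
  proof (rule Bochner_Integration.integral_cong[OF refl])
    fix U assume U: "U \<in> space M"
    have U': "U \<in> carrier_mat q q" using U unitary_carrier unfolding space_M by auto
    show "(\<Sum>k<?N. FFt t V $$ (i,k) * FFt t U $$ (k,j)) = FFt t (V * U) $$ (i,j)"
      using mult_mat_index_sum[OF FFt_carrier[OF V'] FFt_carrier[OF U'] i j] FFt_mult[OF V' U'] by simp
  qed
  also have "\<dots> = (LINT U|distr M M (\<lambda>U. V * U). FFt t U $$ (i,j))"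
    by (rule integral_distr[symmetric], insert haar_left_invariant[OF V] FFt_entry_measurable[OF i j], auto)
  also have "\<dots> = haar_avg t $$ (i,j)" using haar_left_invariant[OF V] i j by (simp add: haar_avg_index)
  finally show "(FFt t V * haar_avg t) $$ (i,j) = haar_avg t $$ (i,j)" .
qed (insert FFt_dims[OF V', of t], auto)
qed

lemma haar_avg_mult_vec_index: assumes x: "x \<in> carrier_vec (q^(2*t))" and i: "i < q^(2*t)"
  shows "(haar_avg t *\<^sub>v x) $ i = (LINT U|M. (FFt t U *\<^sub>v x) $ i)"
proof -
  let ?N = "q^(2*t)"
  have "(haar_avg t *\<^sub>v x) $ i = (\<Sum>k<?N. haar_avg t $$ (i,k) * x $ k)" by (rule mult_mat_vec_index_sum[OF haar_avg_carrier x i])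
  also have "\<dots> = (\<Sum>k<?N. LINT U|M. FFt t U $$ (i,k) * x $ k)"
    using i by (intro sum.cong refl, simp add: haar_avg_index)
  also have "\<dots> = (LINT U|M. (\<Sum>k<?N. FFt t U $$ (i,k) * x $ k))"
    by (subst Bochner_Integration.integral_sum, auto intro!: integrable_mult_left FFt_entry_integrable i)
  also have "\<dots> = (LINT U|M. (FFt t U *\<^sub>v x) $ i)"
  proof (rule Bochner_Integration.integral_cong[OF refl])
    fix U assume U: "U \<in> space M"
    have U': "U \<in> carrier_mat q q" using U unitary_carrier unfolding space_M by auto
    show "(\<Sum>k<?N. FFt t U $$ (i,k) * x $ k) = (FFt t U *\<^sub>v x) $ i"
      using mult_mat_vec_index_sum[OF FFt_carrier[OF U'] x i] by simp
  qed
  finally show ?thesis .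
qed

lemma FFt_mult_vec_integrable: assumes x: "x \<in> carrier_vec (q^(2*t))" and i: "i < q^(2*t)"
  shows "integrable M (\<lambda>U. (FFt t U *\<^sub>v x) $ i)"
proof -
  let ?N = "q^(2*t)"
  have "integrable M (\<lambda>U. \<Sum>k<?N. FFt t U $$ (i,k) * x $ k)"
    by (rule Bochner_Integration.integrable_sum, rule integrable_mult_left, rule FFt_entry_integrable[OF i], auto)
  moreover have "integrable M (\<lambda>U. \<Sum>k<?N. FFt t U $$ (i,k) * x $ k) = integrable M (\<lambda>U. (FFt t U *\<^sub>v x) $ i)"
    by (rule Bochner_Integration.integrable_cong[OF refl], insert mult_mat_vec_index_sum[OF FFt_carrier[OF unitary_carrier] x i], 
       unfold space_M, auto)
  ultimately show ?thesis by simp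
qed

lemma vinner_haar_avg_invariant: assumes y: "y \<in> carrier_vec (q^(2*t))" and x: "x \<in> carrier_vec (q^(2*t))"
  and inv: "\<And>V. V \<in> unitary_group q \<Longrightarrow> FFt t V *\<^sub>v y = y"
  shows "vinner y (haar_avg t *\<^sub>v x) = vinner y x"
proof -
  let ?N = "q^(2*t)"
  interpret prob_space M by (rule prob_space_M)
  have "vinner y (haar_avg t *\<^sub>v x) = (\<Sum>i<?N. cnj (y $ i) * (LINT U|M. (FFt t U *\<^sub>v x) $ i))"
    unfolding vinner_def using y x haar_avg_mult_vec_index[OF x] by (intro sum.cong refl, auto)
  also have "\<dots> = (\<Sum>i<?N. LINT U|M. cnj (y $ i) * (FFt t U *\<^sub>v x) $ i)" by simp
  also have "\<dots> = (LINT U|M. (\<Sum>i<?N. cnj (y $ i) * (FFt t U *\<^sub>v x) $ i))"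
    by (subst Bochner_Integration.integral_sum, auto intro!: integrable_mult_right FFt_mult_vec_integrable x)
  also have "\<dots> = (LINT U|M. vinner y x)"
  proof (rule Bochner_Integration.integral_cong[OF refl])
    fix U assume U: "U \<in> space M"
    hence U1: "U \<in> unitary_group q" unfolding space_M .
    have U': "U \<in> carrier_mat q q" using U1 unitary_carrier by auto
    have "(\<Sum>i<?N. cnj (y $ i) * (FFt t U *\<^sub>v x) $ i) = vinner y (FFt t U *\<^sub>v x)"
      unfolding vinner_def using y by simp
    also have "\<dots> = vinner (madj (FFt t U) *\<^sub>v y) x" by (rule vinner_mult_mat_vec[OF FFt_carrier[OF U'] y x])
    also have "madj (FFt t U) *\<^sub>v y = y" using inv[OF unitary_madj[OF U1]] by (simp add: FFt_madj)
    finally show "(\<Sum>i<?N. cnj (y $ i) * (FFt t U *\<^sub>v x) $ i) = vinner y x" .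
  qed
  also have "\<dots> = vinner y x" using prob_space by simp
  finally show ?thesis .
qed

lemma mtrace_haar_avg: "mtrace (haar_avg t) = complex_of_real (LINT U|M. (cmod (mtrace U)) ^ (2*t))"
proof -
  let ?N = "q^(2*t)"
  have "mtrace (haar_avg t) = (\<Sum>i<?N. LINT U|M. FFt t U $$ (i,i))"
    unfolding mtrace_def by (intro sum.cong, auto simp: haar_avg_index)
  also have "\<dots> = (LINT U|M. (\<Sum>i<?N. FFt t U $$ (i,i)))"
    by (subst Bochner_Integration.integral_sum, auto intro!: FFt_entry_integrable)
  also have "\<dots> = (LINT U|M. complex_of_real ((cmod (mtrace U)) ^ (2*t)))"
  proof (rule Bochner_Integration.integral_cong[OF refl])
    fix U assume U: "U \<in> space M"
    have U': "U \<in> carrier_mat q q" using U unitary_carrier unfolding space_M by auto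
    show "(\<Sum>i<?N. FFt t U $$ (i,i)) = complex_of_real ((cmod (mtrace U)) ^ (2*t))"
      using FFt_trace[OF U', of t] FFt_carrier[OF U', of t] unfolding mtrace_def by simp
  qed
  also have "\<dots> = complex_of_real (LINT U|M. (cmod (mtrace U)) ^ (2*t))" by (rule integral_complex_of_real)
  finally show ?thesis .
qed

lemma FFt_mult_haar_avg_vec: assumes V: "V \<in> unitary_group q" and x: "x \<in> carrier_vec (q^(2*t))"
  shows "FFt t V *\<^sub>v (haar_avg t *\<^sub>v x) = haar_avg t *\<^sub>v x"
proof -
  have V': "V \<in> carrier_mat q q" by (rule unitary_carrier[OF V])
  have "FFt t V *\<^sub>v (haar_avg t *\<^sub>v x) = (FFt t V * haar_avg t) *\<^sub>v x"
    by (rule assoc_mult_mat_vec[symmetric, OF FFt_carrier[OF V'] haar_avg_carrier x])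
  thus ?thesis using FFt_mult_haar_avg[OF V] by simp
qed

lemma haar_avg_mult_vec_carrier[simp]: "x \<in> carrier_vec (q^(2*t)) \<Longrightarrow> haar_avg t *\<^sub>v x \<in> carrier_vec (q^(2*t))"
  using mult_mat_vec_carrier[OF haar_avg_carrier] by blast

lemma haar_avg_herm: "madj (haar_avg t) = haar_avg t"
proof -
  let ?N = "q^(2*t)" and ?P = "haar_avg t"
  have "madj ?P *\<^sub>v x = ?P *\<^sub>v x" if x: "x \<in> carrier_vec ?N" for x
  proof (rule vec_eq_by_vinner[of _ ?N])
    fix y :: "complex vec" assume y: "y \<in> carrier_vec ?N"
    have Py: "?P *\<^sub>v y \<in> carrier_vec ?N" and Px: "?P *\<^sub>v x \<in> carrier_vec ?N" using x y by auto
    have "vinner y (madj ?P *\<^sub>v x) = vinner (?P *\<^sub>v y) x"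
      using vinner_mult_mat_vec[OF madj_carrier[OF haar_avg_carrier] y x] by simp
    also have "\<dots> = vinner (?P *\<^sub>v y) (?P *\<^sub>v x)"
      by (rule vinner_haar_avg_invariant[symmetric, OF Py x], rule FFt_mult_haar_avg_vec[OF _ y])
    also have "\<dots> = cnj (vinner (?P *\<^sub>v x) (?P *\<^sub>v y))" by (rule vinner_swap, insert Px Py, simp)
    also have "vinner (?P *\<^sub>v x) (?P *\<^sub>v y) = vinner (?P *\<^sub>v x) y"
      by (rule vinner_haar_avg_invariant[OF Px y], rule FFt_mult_haar_avg_vec[OF _ x])
    also have "cnj \<dots> = vinner y (?P *\<^sub>v x)" by (rule vinner_swap[symmetric], insert Px y, simp)
    finally show "vinner y (madj ?P *\<^sub>v x) = vinner y (?P *\<^sub>v x)" .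
  qed (insert x mult_mat_vec_carrier[OF madj_carrier[OF haar_avg_carrier] x], auto)
  thus ?thesis by (intro mat_eq_by_mult_vec[of _ ?N ?N], auto)
qed

lemma vinner_haar_avg_swap: "x \<in> carrier_vec (q^(2*t)) \<Longrightarrow> y \<in> carrier_vec (q^(2*t)) \<Longrightarrow> vinner (haar_avg t *\<^sub>v y) x = vinner y (haar_avg t *\<^sub>v x)"
  using vinner_mult_mat_vec[OF haar_avg_carrier, of y t x] haar_avg_herm[of t] by simp

lemma haar_avg_idem: "haar_avg t * haar_avg t = haar_avg t"
proof -
  let ?N = "q^(2*t)" and ?P = "haar_avg t"
  have "(?P * ?P) *\<^sub>v x = ?P *\<^sub>v x" if x: "x \<in> carrier_vec ?N" for x
  proof -
    have "(?P * ?P) *\<^sub>v x = ?P *\<^sub>v (?P *\<^sub>v x)" by (rule assoc_mult_mat_vec[OF haar_avg_carrier haar_avg_carrier x])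
    also have "\<dots> = ?P *\<^sub>v x"
    proof (rule vec_eq_by_vinner[of _ ?N])
      fix y :: "complex vec" assume y: "y \<in> carrier_vec ?N"
      have Py: "?P *\<^sub>v y \<in> carrier_vec ?N" and Px: "?P *\<^sub>v x \<in> carrier_vec ?N" using x y by auto
      have "vinner y (?P *\<^sub>v (?P *\<^sub>v x)) = vinner (?P *\<^sub>v y) (?P *\<^sub>v x)" using vinner_haar_avg_swap[OF Px y] by simp
      also have "\<dots> = vinner (?P *\<^sub>v y) x"
        by (rule vinner_haar_avg_invariant[OF Py x], rule FFt_mult_haar_avg_vec[OF _ y])
      also have "\<dots> = vinner y (?P *\<^sub>v x)" by (rule vinner_haar_avg_swap[OF x y])
      finally show "vinner y (?P *\<^sub>v (?P *\<^sub>v x)) = vinner y (?P *\<^sub>v x)" .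
    qed (insert x, auto)
    finally show ?thesis .
  qed
  thus ?thesis by (intro mat_eq_by_mult_vec[of _ ?N ?N], auto)
qed

lemma haar_avg_mult_FFt: assumes V: "V \<in> unitary_group q" shows "haar_avg t * FFt t V = haar_avg t"
proof -
  have V': "V \<in> carrier_mat q q" by (rule unitary_carrier[OF V])
  have "madj (haar_avg t * FFt t V) = madj (FFt t V) * madj (haar_avg t)"
    by (rule madj_mult[OF haar_avg_carrier FFt_carrier[OF V']])
  also have "\<dots> = FFt t (madj V) * haar_avg t" by (simp add: FFt_madj haar_avg_herm)
  also have "\<dots> = haar_avg t" by (rule FFt_mult_haar_avg[OF unitary_madj[OF V]])
  finally have "madj (haar_avg t * FFt t V) = madj (haar_avg t)" by (simp add: haar_avg_herm)
  thus ?thesis by (metis madj_madj)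
qed

lemma haar_avg_invariant_vec: assumes y: "y \<in> carrier_vec (q^(2*t))" and inv: "\<And>V. V \<in> unitary_group q \<Longrightarrow> FFt t V *\<^sub>v y = y"
  shows "haar_avg t *\<^sub>v y = y"
proof (rule vec_eq_by_vinner[of _ "q^(2*t)"])
  fix z :: "complex vec" assume z: "z \<in> carrier_vec (q^(2*t))"
  have "vinner z (haar_avg t *\<^sub>v y) = vinner (haar_avg t *\<^sub>v z) y" by (rule vinner_haar_avg_swap[symmetric, OF y z])
  also have "\<dots> = cnj (vinner y (haar_avg t *\<^sub>v z))" by (rule vinner_swap, insert y z, simp)
  also have "vinner y (haar_avg t *\<^sub>v z) = vinner y z" by (rule vinner_haar_avg_invariant[OF y z inv])
  also have "cnj (vinner y z) = vinner z y" by (rule vinner_swap[symmetric], insert y z, simp)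
  finally show "vinner z (haar_avg t *\<^sub>v y) = vinner z y" .
qed (insert y, auto)

end

locale finite_irrep =
  fixes q :: nat and G :: "complex mat set" and d :: nat and \<rho> :: "complex mat \<Rightarrow> complex mat"
  assumes G_subgroup: "finite_subgroup_unitary q G" and rho_irrep: "irreducible_rep G d \<rho>"
begin

lemma finite_G: "finite G" using G_subgroup unfolding finite_subgroup_unitary_def by simp

lemma G_unitary: "g \<in> G \<Longrightarrow> g \<in> unitary_group q" using G_subgroup unfolding finite_subgroup_unitary_def by auto

lemma one_G: "1\<^sub>m q \<in> G" using G_subgroup unfolding finite_subgroup_unitary_def by simp

lemma mult_G: "g \<in> G \<Longrightarrow> h \<in> G \<Longrightarrow> g * h \<in> G" using G_subgroup unfolding finite_subgroup_unitary_def by simp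

lemma madj_G: "g \<in> G \<Longrightarrow> madj g \<in> G" using G_subgroup unfolding finite_subgroup_unitary_def by simp

lemma G_carrier: "g \<in> G \<Longrightarrow> g \<in> carrier_mat q q" using G_unitary unitary_carrier by blast

lemma madj_mult_G: "g \<in> G \<Longrightarrow> madj g * g = 1\<^sub>m q" using G_unitary unitary_madj_mult by blast

lemma mult_madj_G: "g \<in> G \<Longrightarrow> g * madj g = 1\<^sub>m q" using G_unitary unitary_mult_madj by blast

lemma card_G_pos: "card G > 0" using finite_G one_G card_gt_0_iff by blast

lemma d_pos: "d \<ge> 1" using rho_irrep unfolding irreducible_rep_def by simp

lemma rho_carrier: "g \<in> G \<Longrightarrow> \<rho> g \<in> carrier_mat d d"
  using rho_irrep unfolding irreducible_rep_def is_rep_def by simp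

lemma rho_mult: "g \<in> G \<Longrightarrow> h \<in> G \<Longrightarrow> \<rho> (g * h) = \<rho> g * \<rho> h"
  using rho_irrep unfolding irreducible_rep_def is_rep_def by simp

lemma rho_invertible: "g \<in> G \<Longrightarrow> \<exists>B\<in>carrier_mat d d. \<rho> g * B = 1\<^sub>m d"
  using rho_irrep unfolding irreducible_rep_def is_rep_def by simp

lemma rho_irreducible: "is_subspace d W \<Longrightarrow> (\<forall>g\<in>G. \<forall>v\<in>W. \<rho> g *\<^sub>v v \<in> W) \<Longrightarrow> W = {0\<^sub>v d} \<or> W = carrier_vec d"
  using rho_irrep unfolding irreducible_rep_def by simp

lemma rho_one: "\<rho> (1\<^sub>m q) = 1\<^sub>m d"
proof -
  let ?R = "\<rho> (1\<^sub>m q)"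
  have R: "?R \<in> carrier_mat d d" by (rule rho_carrier[OF one_G])
  obtain B where B: "B \<in> carrier_mat d d" and RB: "?R * B = 1\<^sub>m d" using rho_invertible[OF one_G] by auto
  have RR: "?R * ?R = ?R" using rho_mult[OF one_G one_G] by simp
  have "?R = ?R * (?R * B)" using RB R by simp
  also have "\<dots> = (?R * ?R) * B" using assoc_mult_mat[OF R R B] by simp
  also have "\<dots> = 1\<^sub>m d" using RR RB by simp
  finally show ?thesis .
qed

lemma rho_madj_mult: "g \<in> G \<Longrightarrow> \<rho> (madj g) * \<rho> g = 1\<^sub>m d"
  using rho_mult[OF madj_G, of g g] madj_mult_G rho_one by simp

lemma sum_left_translate: assumes h: "h \<in> G" shows "(\<Sum>g\<in>G. f (h * g)) = (\<Sum>g\<in>G. f g)"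
proof (rule sum.reindex_bij_witness[where i = "\<lambda>g. madj h * g" and j = "\<lambda>g. h * g"])
  fix g assume g: "g \<in> G"
  show "madj h * (h * g) = g"
    using assoc_mult_mat[OF madj_carrier[OF G_carrier[OF h]] G_carrier[OF h] G_carrier[OF g]] madj_mult_G[OF h] G_carrier[OF g] by simp
  show "h * g \<in> G" by (rule mult_G[OF h g])
  show "h * (madj h * g) = g"
    using assoc_mult_mat[OF G_carrier[OF h] madj_carrier[OF G_carrier[OF h]] G_carrier[OF g]] mult_madj_G[OF h] G_carrier[OF g] by simp
  show "madj h * g \<in> G" by (rule mult_G[OF madj_G[OF h] g])
qed simp

lemma sum_right_translate: assumes h: "h \<in> G" shows "(\<Sum>g\<in>G. f (g * h)) = (\<Sum>g\<in>G. f g)"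
proof (rule sum.reindex_bij_witness[where i = "\<lambda>g. g * madj h" and j = "\<lambda>g. g * h"])
  fix g assume g: "g \<in> G"
  show "g * h * madj h = g"
    using assoc_mult_mat[OF G_carrier[OF g] G_carrier[OF h] madj_carrier[OF G_carrier[OF h]]] mult_madj_G[OF h] G_carrier[OF g] by simp
  show "g * h \<in> G" by (rule mult_G[OF g h])
  show "g * madj h * h = g"
    using assoc_mult_mat[OF G_carrier[OF g] madj_carrier[OF G_carrier[OF h]] G_carrier[OF h]] madj_mult_G[OF h] G_carrier[OF g] by simp
  show "g * madj h \<in> G" by (rule mult_G[OF g madj_G[OF h]])
qed simp

lemma msum_left_translate: "h \<in> G \<Longrightarrow> msum G (\<lambda>g. F (h * g)) n m = msum G F n m"
  unfolding msum_def by (intro eq_matI) (simp_all add: sum_left_translate[of h "\<lambda>g. F g $$ _"])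

lemma msum_right_translate: "h \<in> G \<Longrightarrow> msum G (\<lambda>g. F (g * h)) n m = msum G F n m"
  unfolding msum_def by (intro eq_matI) (simp_all add: sum_right_translate[of h "\<lambda>g. F g $$ _"])

lemma sum_double_madj_mult: "(\<Sum>h\<in>G. \<Sum>k\<in>G. f (madj h * k)) = of_nat (card G) * (\<Sum>g\<in>G. f g)"
  using sum_left_translate[OF madj_G, of _ f] by simp

lemma schur_eigen:
  assumes T: "T \<in> carrier_mat d d" and comm: "\<And>g. g \<in> G \<Longrightarrow> \<rho> g * T = T * \<rho> g"
  shows "\<exists>\<mu>. \<forall>v\<in>carrier_vec d. T *\<^sub>v v = \<mu> \<cdot>\<^sub>v v"
proof -
  have "spectrum T \<noteq> {}" using spectrum_non_empty[OF T] d_pos by simp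
  then obtain \<mu> where "\<mu> \<in> spectrum T" by auto
  then obtain v where v: "v \<in> carrier_vec d" and v0: "v \<noteq> 0\<^sub>v d" and Tv: "T *\<^sub>v v = \<mu> \<cdot>\<^sub>v v"
    unfolding spectrum_def eigenvalue_def eigenvector_def using T by auto
  define E where "E = {v \<in> carrier_vec d. T *\<^sub>v v = \<mu> \<cdot>\<^sub>v v}"
  have sub: "is_subspace d E" unfolding is_subspace_def E_def
  proof (intro conjI ballI allI)
    show "0\<^sub>v d \<in> {v \<in> carrier_vec d. T *\<^sub>v v = \<mu> \<cdot>\<^sub>v v}" using T by (auto intro!: eq_vecI simp: scalar_prod_def)
    fix x y assume x: "x \<in> {v \<in> carrier_vec d. T *\<^sub>v v = \<mu> \<cdot>\<^sub>v v}" and y: "y \<in> {v \<in> carrier_vec d. T *\<^sub>v v = \<mu> \<cdot>\<^sub>v v}"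
    have "T *\<^sub>v (x + y) = T *\<^sub>v x + T *\<^sub>v y" using x y by (intro mult_add_distrib_mat_vec[OF T], auto)
    also have "\<dots> = \<mu> \<cdot>\<^sub>v (x + y)" using x y by (auto simp: smult_add_distrib_vec)
    finally show "x + y \<in> {v \<in> carrier_vec d. T *\<^sub>v v = \<mu> \<cdot>\<^sub>v v}" using x y by auto
  next
    fix c :: complex and x assume x: "x \<in> {v \<in> carrier_vec d. T *\<^sub>v v = \<mu> \<cdot>\<^sub>v v}"
    have "T *\<^sub>v (c \<cdot>\<^sub>v x) = c \<cdot>\<^sub>v (T *\<^sub>v x)" using x by (intro mult_mat_vec[OF T], auto)
    also have "\<dots> = \<mu> \<cdot>\<^sub>v (c \<cdot>\<^sub>v x)" using x by (auto intro!: eq_vecI)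
    finally show "c \<cdot>\<^sub>v x \<in> {v \<in> carrier_vec d. T *\<^sub>v v = \<mu> \<cdot>\<^sub>v v}" using x by auto
  qed auto
  have inv: "\<forall>g\<in>G. \<forall>x\<in>E. \<rho> g *\<^sub>v x \<in> E"
  proof (intro ballI)
    fix g x assume g: "g \<in> G" and x: "x \<in> E"
    have xc: "x \<in> carrier_vec d" and conj_avg: "T *\<^sub>v x = \<mu> \<cdot>\<^sub>v x" using x unfolding E_def by auto
    have R: "\<rho> g \<in> carrier_mat d d" by (rule rho_carrier[OF g])
    have "T *\<^sub>v (\<rho> g *\<^sub>v x) = (T * \<rho> g) *\<^sub>v x" using assoc_mult_mat_vec[OF T R xc] by simp
    also have "\<dots> = (\<rho> g * T) *\<^sub>v x" using comm[OF g] by simp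
    also have "\<dots> = \<rho> g *\<^sub>v (\<mu> \<cdot>\<^sub>v x)" using assoc_mult_mat_vec[OF R T xc] conj_avg by simp
    also have "\<dots> = \<mu> \<cdot>\<^sub>v (\<rho> g *\<^sub>v x)" by (rule mult_mat_vec[OF R xc])
    finally show "\<rho> g *\<^sub>v x \<in> E" unfolding E_def using R xc by simp
  qed
  have "E \<noteq> {0\<^sub>v d}" using v v0 Tv unfolding E_def by auto
  hence "E = carrier_vec d" using rho_irreducible[OF sub inv] by auto
  thus ?thesis unfolding E_def by auto
qed

lemma schur_scalar:
  assumes T: "T \<in> carrier_mat d d" and comm: "\<And>g. g \<in> G \<Longrightarrow> \<rho> g * T = T * \<rho> g"
  shows "\<exists>\<mu>. T = \<mu> \<cdot>\<^sub>m 1\<^sub>m d"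
proof -
  obtain \<mu> where mu: "\<forall>v\<in>carrier_vec d. T *\<^sub>v v = \<mu> \<cdot>\<^sub>v v" using schur_eigen[OF T comm] by auto
  have "T = \<mu> \<cdot>\<^sub>m 1\<^sub>m d"
  proof (rule mat_eq_by_mult_vec[OF T], simp)
    fix x :: "complex vec" assume x: "x \<in> carrier_vec d"
    have "(\<mu> \<cdot>\<^sub>m 1\<^sub>m d) *\<^sub>v x = \<mu> \<cdot>\<^sub>v x"
    proof (rule eq_vecI)
      fix i assume "i < dim_vec (\<mu> \<cdot>\<^sub>v x)" hence i: "i < d" using x by simp
      have "((\<mu> \<cdot>\<^sub>m 1\<^sub>m d) *\<^sub>v x) $ i = (\<Sum>k<d. (\<mu> \<cdot>\<^sub>m 1\<^sub>m d) $$ (i,k) * x $ k)"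
        by (rule mult_mat_vec_index_sum[OF _ x i], simp)
      also have "\<dots> = (\<Sum>k<d. if k = i then \<mu> * x $ k else 0)" using i by (intro sum.cong refl, auto)
      also have "\<dots> = \<mu> * x $ i" using i by simp
      finally show "((\<mu> \<cdot>\<^sub>m 1\<^sub>m d) *\<^sub>v x) $ i = (\<mu> \<cdot>\<^sub>v x) $ i" using i x by simp
    qed (insert x, simp)
    thus "T *\<^sub>v x = (\<mu> \<cdot>\<^sub>m 1\<^sub>m d) *\<^sub>v x" using mu x by simp
  qed
  thus ?thesis by auto
qed

definition conj_avg :: "complex mat \<Rightarrow> complex mat" where
  "conj_avg X = msum G (\<lambda>g. \<rho> g * X * \<rho> (madj g)) d d"

lemma conj_avg_commute: assumes X: "X \<in> carrier_mat d d" and h: "h \<in> G" shows "\<rho> h * conj_avg X = conj_avg X * \<rho> h"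
proof -
  have R: "\<And>g. g \<in> G \<Longrightarrow> \<rho> g \<in> carrier_mat d d" by (rule rho_carrier)
  have Rh: "\<rho> h \<in> carrier_mat d d" by (rule R[OF h])
  have "\<rho> h * conj_avg X = msum G (\<lambda>g. \<rho> h * (\<rho> g * X * \<rho> (madj g))) d d"
    unfolding conj_avg_def by (rule msum_mult_left[OF Rh], insert X R madj_G, auto)
  also have "\<dots> = msum G (\<lambda>g. \<rho> (h * g) * X * \<rho> (madj g)) d d"
  proof (rule msum_cong)
    fix g assume g: "g \<in> G"
    have Rg: "\<rho> g \<in> carrier_mat d d" and Rg': "\<rho> (madj g) \<in> carrier_mat d d" using R g madj_G by auto
    show "\<rho> h * (\<rho> g * X * \<rho> (madj g)) = \<rho> (h * g) * X * \<rho> (madj g)"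
      using rho_mult[OF h g] Rh Rg Rg' X by (simp add: assoc_mult_mat[of _ d d _ d _ d])
  qed
  also have "\<dots> = msum G (\<lambda>g. \<rho> (h * (madj h * g)) * X * \<rho> (madj (madj h * g))) d d"
    by (rule msum_left_translate[OF madj_G[OF h], symmetric])
  also have "\<dots> = msum G (\<lambda>g. \<rho> g * X * \<rho> (madj g * h)) d d"
  proof (rule msum_cong)
    fix g assume g: "g \<in> G"
    have hc: "h \<in> carrier_mat q q" and gc: "g \<in> carrier_mat q q" using G_carrier h g by auto
    have "h * (madj h * g) = g"
      using assoc_mult_mat[OF hc madj_carrier[OF hc] gc] mult_madj_G[OF h] gc by simp
    moreover have "madj (madj h * g) = madj g * h" using madj_mult[OF madj_carrier[OF hc] gc] by simp
    ultimately show "\<rho> (h * (madj h * g)) * X * \<rho> (madj (madj h * g)) = \<rho> g * X * \<rho> (madj g * h)"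
      by simp
  qed
  also have "\<dots> = msum G (\<lambda>g. \<rho> g * X * \<rho> (madj g) * \<rho> h) d d"
  proof (rule msum_cong)
    fix g assume g: "g \<in> G"
    have Rg: "\<rho> g \<in> carrier_mat d d" and Rg': "\<rho> (madj g) \<in> carrier_mat d d" using R g madj_G by auto
    show "\<rho> g * X * \<rho> (madj g * h) = \<rho> g * X * \<rho> (madj g) * \<rho> h"
      using rho_mult[OF madj_G[OF g] h] Rh Rg Rg' X by (simp add: assoc_mult_mat[of _ d d _ d _ d])
  qed
  also have "\<dots> = conj_avg X * \<rho> h"
    unfolding conj_avg_def by (rule msum_mult_right[symmetric, OF _ Rh], insert X R madj_G, auto)
  finally show ?thesis .
qed

lemma mtrace_conj_avg: assumes X: "X \<in> carrier_mat d d" shows "mtrace (conj_avg X) = of_nat (card G) * mtrace X"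
proof -
  have R: "\<And>g. g \<in> G \<Longrightarrow> \<rho> g \<in> carrier_mat d d" by (rule rho_carrier)
  have "mtrace (conj_avg X) = (\<Sum>g\<in>G. mtrace (\<rho> g * X * \<rho> (madj g)))"
    unfolding conj_avg_def by (rule mtrace_msum, insert R X madj_G, auto)
  also have "\<dots> = (\<Sum>g\<in>G. mtrace X)"
  proof (intro sum.cong refl)
    fix g assume g: "g \<in> G"
    have Rg: "\<rho> g \<in> carrier_mat d d" and Rg': "\<rho> (madj g) \<in> carrier_mat d d" using R g madj_G by auto
    have "mtrace (\<rho> g * X * \<rho> (madj g)) = mtrace (\<rho> (madj g) * (\<rho> g * X))"
      by (rule mtrace_mult_comm, insert Rg Rg' X, auto)
    also have "\<rho> (madj g) * (\<rho> g * X) = (\<rho> (madj g) * \<rho> g) * X" using assoc_mult_mat[OF Rg' Rg X] by simp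
    also have "\<dots> = X" using rho_madj_mult[OF g] X by simp
    finally show "mtrace (\<rho> g * X * \<rho> (madj g)) = mtrace X" .
  qed
  finally show ?thesis by simp
qed

lemma schur_orthogonality_diag: assumes a: "a < d" and b: "b < d"
  shows "(\<Sum>g\<in>G. \<rho> g $$ (a,a) * \<rho> (madj g) $$ (b,b)) = (if a = b then of_nat (card G) / of_nat d else 0)"
proof -
  define X where "X = mat d d (\<lambda>(i,j). if i = a \<and> j = b then (1::complex) else 0)"
  have X: "X \<in> carrier_mat d d" unfolding X_def by simp
  have R: "\<And>g. g \<in> G \<Longrightarrow> \<rho> g \<in> carrier_mat d d" by (rule rho_carrier)
  obtain \<mu> where mu: "conj_avg X = \<mu> \<cdot>\<^sub>m 1\<^sub>m d"
    using schur_scalar[OF _ conj_avg_commute[OF X]] unfolding conj_avg_def by auto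
  have "mtrace (conj_avg X) = \<mu> * of_nat d" unfolding mu mtrace_def by simp
  moreover have "mtrace X = (if a = b then 1 else 0)" unfolding X_def mtrace_def using a b by (auto simp: if_distrib cong: if_cong)
  ultimately have mu_val: "\<mu> * of_nat d = of_nat (card G) * (if a = b then 1 else 0)" using mtrace_conj_avg[OF X] by simp
  have "(\<Sum>g\<in>G. \<rho> g $$ (a,a) * \<rho> (madj g) $$ (b,b)) = (\<Sum>g\<in>G. (\<rho> g * X * \<rho> (madj g)) $$ (a,b))"
    unfolding X_def by (intro sum.cong refl, rule mult_matrix_unit_mult_index[symmetric], insert R madj_G a b, auto)
  also have "\<dots> = conj_avg X $$ (a,b)" unfolding conj_avg_def using a b by (simp add: msum_index)
  also have "\<dots> = (if a = b then \<mu> else 0)" unfolding mu using a b by simp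
  also have "\<dots> = (if a = b then of_nat (card G) / of_nat d else 0)"
    using mu_val d_pos by (auto simp: field_simps)
  finally show ?thesis .
qed

lemma char_orthogonality: "(\<Sum>g\<in>G. mtrace (\<rho> g) * mtrace (\<rho> (madj g))) = of_nat (card G)"
proof -
  have R: "\<And>g. g \<in> G \<Longrightarrow> \<rho> g \<in> carrier_mat d d" by (rule rho_carrier)
  have tr: "mtrace (\<rho> g) = (\<Sum>a<d. \<rho> g $$ (a,a))" if g: "g \<in> G" for g
    unfolding mtrace_def using R[OF g] by simp
  have "(\<Sum>g\<in>G. mtrace (\<rho> g) * mtrace (\<rho> (madj g))) = (\<Sum>g\<in>G. \<Sum>a<d. \<Sum>b<d. \<rho> g $$ (a,a) * \<rho> (madj g) $$ (b,b))"
    by (intro sum.cong refl, simp add: tr madj_G sum_product)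
  also have "\<dots> = (\<Sum>a<d. \<Sum>b<d. \<Sum>g\<in>G. \<rho> g $$ (a,a) * \<rho> (madj g) $$ (b,b))"
    by (subst sum.swap, subst (2) sum.swap, rule refl)
  also have "\<dots> = (\<Sum>a<d. \<Sum>b<d. if a = b then of_nat (card G) / of_nat d else 0)"
    by (intro sum.cong refl, rule schur_orthogonality_diag, auto)
  also have "\<dots> = (\<Sum>a<d. of_nat (card G) / of_nat d)" by simp
  also have "\<dots> = of_nat (card G)" using d_pos by simp
  finally show ?thesis .
qed

definition weyl_form :: "complex mat" where "weyl_form = msum G (\<lambda>g. madj (\<rho> g) * \<rho> g) d d"

lemma weyl_form_carrier: "weyl_form \<in> carrier_mat d d" unfolding weyl_form_def by simp

lemma weyl_form_herm: "madj weyl_form = weyl_form"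
proof -
  have R: "\<And>g. g \<in> G \<Longrightarrow> \<rho> g \<in> carrier_mat d d" by (rule rho_carrier)
  have "madj weyl_form = msum G (\<lambda>g. madj (madj (\<rho> g) * \<rho> g)) d d"
    unfolding weyl_form_def by (rule madj_msum, insert R, auto)
  also have "\<dots> = weyl_form" unfolding weyl_form_def
  proof (rule msum_cong)
    fix g assume g: "g \<in> G"
    show "madj (madj (\<rho> g) * \<rho> g) = madj (\<rho> g) * \<rho> g"
      using madj_mult[OF madj_carrier[OF R[OF g]] R[OF g]] by simp
  qed
  finally show ?thesis .
qed

lemma weyl_form_pos: assumes x: "x \<in> carrier_vec d" and x0: "x \<noteq> 0\<^sub>v d" shows "Re (vinner x (weyl_form *\<^sub>v x)) > 0"
proof -
  have R: "\<And>g. g \<in> G \<Longrightarrow> \<rho> g \<in> carrier_mat d d" by (rule rho_carrier)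
  have "vinner x (weyl_form *\<^sub>v x) = (\<Sum>g\<in>G. vinner x ((madj (\<rho> g) * \<rho> g) *\<^sub>v x))"
    unfolding weyl_form_def by (rule vinner_msum[OF _ x x], insert R, auto)
  also have "\<dots> = (\<Sum>g\<in>G. vinner (\<rho> g *\<^sub>v x) (\<rho> g *\<^sub>v x))"
  proof (intro sum.cong refl)
    fix g assume g: "g \<in> G"
    have "vinner x ((madj (\<rho> g) * \<rho> g) *\<^sub>v x) = vinner x (madj (\<rho> g) *\<^sub>v (\<rho> g *\<^sub>v x))"
      using assoc_mult_mat_vec[OF madj_carrier[OF R[OF g]] R[OF g] x] by simp
    also have "\<dots> = vinner (\<rho> g *\<^sub>v x) (\<rho> g *\<^sub>v x)"
      using vinner_mult_mat_vec[OF madj_carrier[OF R[OF g]] x, of "\<rho> g *\<^sub>v x"] R[OF g] x by simp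
    finally show "vinner x ((madj (\<rho> g) * \<rho> g) *\<^sub>v x) = vinner (\<rho> g *\<^sub>v x) (\<rho> g *\<^sub>v x)" .
  qed
  finally have e: "Re (vinner x (weyl_form *\<^sub>v x)) = (\<Sum>g\<in>G. Re (vinner (\<rho> g *\<^sub>v x) (\<rho> g *\<^sub>v x)))" by simp
  have "Re (vinner (\<rho> (1\<^sub>m q) *\<^sub>v x) (\<rho> (1\<^sub>m q) *\<^sub>v x)) \<le> (\<Sum>g\<in>G. Re (vinner (\<rho> g *\<^sub>v x) (\<rho> g *\<^sub>v x)))"
    by (rule member_le_sum[OF one_G], insert vinner_self_nonneg finite_G, auto)
  moreover have "Re (vinner (\<rho> (1\<^sub>m q) *\<^sub>v x) (\<rho> (1\<^sub>m q) *\<^sub>v x)) > 0"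
    using pos_def_herm_one[of d] x x0 unfolding pos_def_herm_def rho_one by auto
  ultimately show ?thesis using e by simp
qed

lemma weyl_form_pos_def: "pos_def_herm weyl_form d" unfolding pos_def_herm_def using weyl_form_carrier weyl_form_herm weyl_form_pos by auto

lemma weyl_form_invariant: assumes h: "h \<in> G" shows "madj (\<rho> h) * weyl_form * \<rho> h = weyl_form"
proof -
  have R: "\<And>g. g \<in> G \<Longrightarrow> \<rho> g \<in> carrier_mat d d" by (rule rho_carrier)
  have Rh: "\<rho> h \<in> carrier_mat d d" by (rule R[OF h])
  have "madj (\<rho> h) * weyl_form = msum G (\<lambda>g. madj (\<rho> h) * (madj (\<rho> g) * \<rho> g)) d d"
    unfolding weyl_form_def by (rule msum_mult_left, insert R Rh, auto)
  also have "\<dots> * \<rho> h = msum G (\<lambda>g. madj (\<rho> h) * (madj (\<rho> g) * \<rho> g) * \<rho> h) d d"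
    by (rule msum_mult_right[OF _ Rh], insert R Rh, auto)
  also have "\<dots> = msum G (\<lambda>g. madj (\<rho> (g * h)) * \<rho> (g * h)) d d"
  proof (rule msum_cong)
    fix g assume g: "g \<in> G"
    have Rg: "\<rho> g \<in> carrier_mat d d" by (rule R[OF g])
    show "madj (\<rho> h) * (madj (\<rho> g) * \<rho> g) * \<rho> h = madj (\<rho> (g * h)) * \<rho> (g * h)"
      using Rg Rh rho_mult[OF g h] madj_mult[OF Rg Rh] by (simp add: assoc_mult_mat[of _ d d _ d _ d])
  qed
  also have "\<dots> = weyl_form" unfolding weyl_form_def by (rule msum_right_translate[OF h])
  finally show ?thesis .
qed

definition unitarizes :: "complex mat \<Rightarrow> complex mat \<Rightarrow> bool" where
  "unitarizes K J \<longleftrightarrow> K \<in> carrier_mat d d \<and> J \<in> carrier_mat d d \<and> K * J = 1\<^sub>m d \<and> J * K = 1\<^sub>m d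
     \<and> (\<forall>g\<in>G. madj (K * \<rho> g * J) * (K * \<rho> g * J) = 1\<^sub>m d)"

text \<open>Weyl's unitary trick: a \<open>weyl_form\<close>-orthonormal basis conjugates \<open>\<rho>\<close> into a unitary representation.\<close>

lemma unitarizer_exists: "\<exists>K J. unitarizes K J"
proof -
  have sub: "is_subspace d (carrier_vec d)" unfolding is_subspace_def by auto
  obtain e J where J: "J \<in> carrier_mat d e" and JHJ: "madj J * weyl_form * J = 1\<^sub>m e"
    and span: "\<forall>w\<in>carrier_vec d. J *\<^sub>v (madj J *\<^sub>v (weyl_form *\<^sub>v w)) = w"
    by (rule orthonormal_frame_exists[OF weyl_form_pos_def sub]) auto
  define K where "K = madj J * weyl_form"
  have K: "K \<in> carrier_mat e d" unfolding K_def using J weyl_form_carrier by (intro mult_carrier_mat, auto)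
  have KJ: "K * J = 1\<^sub>m e" unfolding K_def using JHJ .
  have JK: "J * K = 1\<^sub>m d"
  proof (rule mat_eq_by_mult_vec[OF mult_carrier_mat[OF J K]], simp)
    fix w :: "complex vec" assume w: "w \<in> carrier_vec d"
    have "(J * K) *\<^sub>v w = J *\<^sub>v (K *\<^sub>v w)" using assoc_mult_mat_vec[OF J K w] .
    also have "K *\<^sub>v w = madj J *\<^sub>v (weyl_form *\<^sub>v w)" unfolding K_def
      using assoc_mult_mat_vec[OF madj_carrier[OF J] weyl_form_carrier w] .
    finally show "(J * K) *\<^sub>v w = 1\<^sub>m d *\<^sub>v w" using span w by simp
  qed
  have ed: "e \<le> d" by (rule dim_le_if_mult_eq_one[OF K J KJ])
  have de: "d \<le> e" by (rule dim_le_if_mult_eq_one[OF J K JK])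
  hence e: "e = d" using ed by simp
  have J': "J \<in> carrier_mat d d" and K': "K \<in> carrier_mat d d" using J K e by auto
  have KJ': "K * J = 1\<^sub>m d" using KJ e by simp
  have aK: "madj K = weyl_form * J" unfolding K_def using madj_mult[OF madj_carrier[OF J] weyl_form_carrier] weyl_form_herm by simp
  have unit: "madj (K * \<rho> g * J) * (K * \<rho> g * J) = 1\<^sub>m d" if g: "g \<in> G" for g
    using unitary_conj_of_invariant_form[OF weyl_form_carrier J' K' JK _ aK rho_carrier[OF g]
        weyl_form_invariant[OF g]] JHJ e by simp
  show ?thesis unfolding unitarizes_def using K' J' KJ' JK unit by blast
qed

definition UK :: "complex mat" where "UK = fst (SOME p. unitarizes (fst p) (snd p))"

definition UJ :: "complex mat" where "UJ = snd (SOME p. unitarizes (fst p) (snd p))"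

lemma UK_UJ: "UK \<in> carrier_mat d d" "UJ \<in> carrier_mat d d" "UK * UJ = 1\<^sub>m d" "UJ * UK = 1\<^sub>m d"
  "\<And>g. g \<in> G \<Longrightarrow> madj (UK * \<rho> g * UJ) * (UK * \<rho> g * UJ) = 1\<^sub>m d"
  using someI_ex[of "\<lambda>p. unitarizes (fst p) (snd p)"] unitarizer_exists
  unfolding UK_def UJ_def unitarizes_def by auto

definition \<sigma> :: "complex mat \<Rightarrow> complex mat" where "\<sigma> g = UK * \<rho> g * UJ"

lemma sigma_carrier: "g \<in> G \<Longrightarrow> \<sigma> g \<in> carrier_mat d d"
  unfolding \<sigma>_def using UK_UJ rho_carrier by (intro mult_carrier_mat, auto)

lemma sigma_left: "g \<in> G \<Longrightarrow> madj (\<sigma> g) * \<sigma> g = 1\<^sub>m d"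
  unfolding \<sigma>_def using UK_UJ by simp

lemma sigma_right: "g \<in> G \<Longrightarrow> \<sigma> g * madj (\<sigma> g) = 1\<^sub>m d"
  using mat_mult_left_right_inverse[OF madj_carrier[OF sigma_carrier] sigma_carrier sigma_left] by blast

lemma sigma_mult: assumes g: "g \<in> G" and h: "h \<in> G" shows "\<sigma> (g * h) = \<sigma> g * \<sigma> h"
proof -
  have Rg: "\<rho> g \<in> carrier_mat d d" and Rh: "\<rho> h \<in> carrier_mat d d" using rho_carrier g h by auto
  have K: "UK \<in> carrier_mat d d" and J: "UJ \<in> carrier_mat d d" using UK_UJ by auto
  have "\<sigma> g * \<sigma> h = UK * (\<rho> g * ((UJ * UK) * (\<rho> h * UJ)))"
    unfolding \<sigma>_def using K J Rg Rh by (simp add: assoc_mult_mat[of _ d d _ d _ d])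
  also have "\<dots> = UK * (\<rho> g * (\<rho> h * UJ))" using UK_UJ(4) Rh J by simp
  also have "\<dots> = \<sigma> (g * h)" unfolding \<sigma>_def rho_mult[OF g h] using K J Rg Rh by (simp add: assoc_mult_mat[of _ d d _ d _ d])
  finally show ?thesis by simp
qed

lemma sigma_one: "\<sigma> (1\<^sub>m q) = 1\<^sub>m d"
  unfolding \<sigma>_def rho_one using UK_UJ by simp

lemma sigma_trace: assumes g: "g \<in> G" shows "mtrace (\<sigma> g) = mtrace (\<rho> g)"
proof -
  have Rg: "\<rho> g \<in> carrier_mat d d" using rho_carrier g by auto
  have K: "UK \<in> carrier_mat d d" and J: "UJ \<in> carrier_mat d d" using UK_UJ by auto
  have "mtrace (\<sigma> g) = mtrace (UJ * (UK * \<rho> g))" unfolding \<sigma>_def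
    by (rule mtrace_mult_comm[OF mult_carrier_mat[OF K Rg] J])
  also have "UJ * (UK * \<rho> g) = \<rho> g" using assoc_mult_mat[OF J K Rg] UK_UJ(4) Rg by simp
  finally show ?thesis .
qed

lemma sigma_adj: assumes g: "g \<in> G" shows "\<sigma> (madj g) = madj (\<sigma> g)"
proof -
  have S: "\<sigma> g \<in> carrier_mat d d" and S': "\<sigma> (madj g) \<in> carrier_mat d d" using sigma_carrier g madj_G by auto
  have l: "\<sigma> (madj g) * \<sigma> g = 1\<^sub>m d" using sigma_mult[OF madj_G[OF g] g] madj_mult_G[OF g] sigma_one by simp
  have "\<sigma> (madj g) = \<sigma> (madj g) * (\<sigma> g * madj (\<sigma> g))" using sigma_right[OF g] S' by simp
  also have "\<dots> = (\<sigma> (madj g) * \<sigma> g) * madj (\<sigma> g)" using assoc_mult_mat[OF S' S madj_carrier[OF S]] by simp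
  also have "\<dots> = madj (\<sigma> g)" using l S by simp
  finally show ?thesis .
qed

lemma char_madj: assumes g: "g \<in> G" shows "mtrace (\<rho> (madj g)) = cnj (mtrace (\<rho> g))"
  using sigma_trace[OF madj_G[OF g]] sigma_adj[OF g] sigma_trace[OF g] mtrace_madj[OF sigma_carrier[OF g]] by simp

lemma char_norm_sum: "(\<Sum>g\<in>G. cnj (mtrace (\<rho> g)) * mtrace (\<rho> g)) = of_nat (card G)"
  using char_orthogonality by (simp add: char_madj mult.commute)

lemma char_madj_mult: assumes h: "h \<in> G" and k: "k \<in> G"
  shows "mtrace (\<rho> (madj h * k)) = (\<Sum>a<d. \<Sum>b<d. cnj (\<sigma> h $$ (a,b)) * \<sigma> k $$ (a,b))"
proof -
  have Sh: "\<sigma> h \<in> carrier_mat d d" and Sk: "\<sigma> k \<in> carrier_mat d d" using sigma_carrier h k by auto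
  have "mtrace (\<rho> (madj h * k)) = mtrace (\<sigma> (madj h * k))" using sigma_trace[OF mult_G[OF madj_G[OF h] k]] by simp
  also have "\<dots> = mtrace (madj (\<sigma> h) * \<sigma> k)" using sigma_mult[OF madj_G[OF h] k] sigma_adj[OF h] by simp
  also have "\<dots> = (\<Sum>b<d. \<Sum>a<d. madj (\<sigma> h) $$ (b,a) * \<sigma> k $$ (a,b))"
  proof -
    have dr: "dim_row (madj (\<sigma> h) * \<sigma> k) = d" using Sh by simp
    have "(madj (\<sigma> h) * \<sigma> k) $$ (b,b) = (\<Sum>a<d. madj (\<sigma> h) $$ (b,a) * \<sigma> k $$ (a,b))" if b: "b \<in> {..<d}" for b
      using mult_mat_index_sum[OF madj_carrier[OF Sh] Sk, of b b] b by simp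
    thus ?thesis unfolding mtrace_def dr by (rule sum.cong[OF refl])
  qed
  also have "\<dots> = (\<Sum>b<d. \<Sum>a<d. cnj (\<sigma> h $$ (a,b)) * \<sigma> k $$ (a,b))" using Sh by (intro sum.cong refl, simp)
  also have "\<dots> = (\<Sum>a<d. \<Sum>b<d. cnj (\<sigma> h $$ (a,b)) * \<sigma> k $$ (a,b))" by (rule sum.swap)
  finally show ?thesis .
qed

end

section \<open>The twisted average\<close>

lemma gram_double_sum_expand:
  fixes s :: "'p \<Rightarrow> 'g \<Rightarrow> complex" and f g :: "'i \<Rightarrow> 'g \<Rightarrow> complex"
  assumes fX: "finite X" and fI: "finite I" and fL: "finite L"
  shows "(\<Sum>h\<in>X. \<Sum>k\<in>X. (\<Sum>p\<in>I. cnj (s p h) * s p k) * cnj (\<Sum>p\<in>I. cnj (s p h) * s p k) * (\<Sum>i\<in>L. cnj (f i h) * g i k))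
    = (\<Sum>c\<in>I \<times> I \<times> L. cnj (\<Sum>h\<in>X. s (fst c) h * cnj (s (fst (snd c)) h) * f (snd (snd c)) h) *
                         (\<Sum>k\<in>X. s (fst c) k * cnj (s (fst (snd c)) k) * g (snd (snd c)) k))"
proof -
  define w where "w c h = s (fst c) h * cnj (s (fst (snd c)) h) * f (snd (snd c)) h" for c h
  define w' where "w' c k = s (fst c) k * cnj (s (fst (snd c)) k) * g (snd (snd c)) k" for c k
  have tm: "(\<Sum>p\<in>I. cnj (s p h) * s p k) * cnj (\<Sum>p\<in>I. cnj (s p h) * s p k) * (\<Sum>i\<in>L. cnj (f i h) * g i k)
      = (\<Sum>c\<in>I \<times> I \<times> L. cnj (w c h) * w' c k)" for h k
  proof -
    define A where "A p = cnj (s p h) * s p k" for p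
    define C where "C i = cnj (f i h) * g i k" for i
    have s1: "(\<Sum>p\<in>I. A p) * cnj (\<Sum>p\<in>I. A p) = (\<Sum>p\<in>I. \<Sum>p'\<in>I. A p * cnj (A p'))"
      by (simp only: cnj_sum sum_product)
    have s2: "(\<Sum>p\<in>I. \<Sum>p'\<in>I. A p * cnj (A p')) * (\<Sum>i\<in>L. C i) = (\<Sum>p\<in>I. (\<Sum>p'\<in>I. A p * cnj (A p')) * (\<Sum>i\<in>L. C i))"
      by (rule sum_distrib_right)
    have s3: "(\<Sum>p'\<in>I. A p * cnj (A p')) * (\<Sum>i\<in>L. C i) = (\<Sum>p'\<in>I. \<Sum>i\<in>L. A p * cnj (A p') * C i)" for p
      by (rule sum_product)
    have "(\<Sum>p\<in>I. A p) * cnj (\<Sum>p\<in>I. A p) * (\<Sum>i\<in>L. C i) = (\<Sum>p\<in>I. \<Sum>p'\<in>I. \<Sum>i\<in>L. A p * cnj (A p') * C i)"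
      unfolding s1 s2 s3 ..
    also have "\<dots> = (\<Sum>p\<in>I. \<Sum>p'\<in>I. \<Sum>i\<in>L. cnj (w (p,p',i) h) * w' (p,p',i) k)"
      unfolding w_def w'_def A_def C_def by (intro sum.cong refl, simp add: ac_simps)
    also have "\<dots> = (\<Sum>c\<in>I \<times> I \<times> L. cnj (w c h) * w' c k)"
      using fI fL by (simp add: sum.cartesian_product split_def)
    finally show ?thesis unfolding A_def C_def .
  qed
  have "(\<Sum>h\<in>X. \<Sum>k\<in>X. (\<Sum>p\<in>I. cnj (s p h) * s p k) * cnj (\<Sum>p\<in>I. cnj (s p h) * s p k) * (\<Sum>i\<in>L. cnj (f i h) * g i k))
     = (\<Sum>h\<in>X. \<Sum>k\<in>X. \<Sum>c\<in>I \<times> I \<times> L. cnj (w c h) * w' c k)" unfolding tm ..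
  also have "\<dots> = (\<Sum>h\<in>X. \<Sum>c\<in>I \<times> I \<times> L. \<Sum>k\<in>X. cnj (w c h) * w' c k)"
    by (rule sum.cong[OF refl], rule sum.swap)
  also have "\<dots> = (\<Sum>c\<in>I \<times> I \<times> L. \<Sum>h\<in>X. \<Sum>k\<in>X. cnj (w c h) * w' c k)"
    by (rule sum.swap)
  also have "\<dots> = (\<Sum>c\<in>I \<times> I \<times> L. cnj (\<Sum>h\<in>X. w c h) * (\<Sum>k\<in>X. w' c k))"
    by (rule sum.cong[OF refl], simp only: cnj_sum sum_product)
  finally show ?thesis unfolding w_def w'_def .
qed

locale twisted_setting = haar_unitary q M + finite_irrep q G d \<rho> for q M G d \<rho> +
  fixes t :: nat
begin

abbreviation "N \<equiv> q^(2*t)"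

abbreviation "\<Phi> \<equiv> FFt t"

abbreviation "P \<equiv> haar_avg t"

definition char_rho :: "complex mat \<Rightarrow> complex" where "char_rho g = mtrace (\<rho> g)"

definition weight :: "complex mat \<Rightarrow> complex" where
  "weight g = complex_of_real ((cmod (char_rho g))^2) / of_nat (card G)"

definition twisted_avg :: "complex mat" where "twisted_avg = msum G (\<lambda>g. weight g \<cdot>\<^sub>m \<Phi> g) N N"

lemma FFt_G_carrier: "g \<in> G \<Longrightarrow> \<Phi> g \<in> carrier_mat N N"
  using FFt_carrier[OF G_carrier] by blast

lemma twisted_avg_carrier: "twisted_avg \<in> carrier_mat N N" unfolding twisted_avg_def by simp

lemma twisted_avg_as_mat: "mat N N (\<lambda>(i, j). (1 / of_nat (card G)) * (\<Sum>g\<in>G. of_real ((cmod (char_rho g))\<^sup>2) * \<Phi> g $$ (i, j))) = twisted_avg"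
proof (rule eq_matI)
  fix i j assume "i < dim_row twisted_avg" "j < dim_col twisted_avg" hence i: "i < N" and j: "j < N" unfolding twisted_avg_def by auto
  have "(weight g \<cdot>\<^sub>m \<Phi> g) $$ (i,j) = weight g * \<Phi> g $$ (i,j)" if g: "g \<in> G" for g
    using FFt_G_carrier[OF g] i j by simp
  hence "twisted_avg $$ (i,j) = (\<Sum>g\<in>G. weight g * \<Phi> g $$ (i,j))"
    unfolding twisted_avg_def using i j by (simp add: msum_index)
  also have "\<dots> = (1 / of_nat (card G)) * (\<Sum>g\<in>G. of_real ((cmod (char_rho g))\<^sup>2) * \<Phi> g $$ (i, j))"
    unfolding weight_def by (simp add: sum_distrib_left)
  finally show "mat N N (\<lambda>(i, j). (1 / of_nat (card G)) * (\<Sum>g\<in>G. of_real ((cmod (char_rho g))\<^sup>2) * \<Phi> g $$ (i, j))) $$ (i,j) = twisted_avg $$ (i,j)"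
    using i j by simp
qed (auto simp: twisted_avg_def)

lemma weight_sum: "(\<Sum>g\<in>G. weight g) = 1"
proof -
  have "(\<Sum>g\<in>G. weight g) = (\<Sum>g\<in>G. cnj (char_rho g) * char_rho g) / of_nat (card G)"
    unfolding weight_def by (simp add: sum_divide_distrib cnj_self_mult)
  also have "\<dots> = 1" unfolding char_rho_def char_norm_sum using card_G_pos by simp
  finally show ?thesis .
qed

lemma mtrace_twisted_avg: "mtrace twisted_avg = cnorm G (\<lambda>g. char_rho g * (mtrace g) ^ t)"
proof -
  have "mtrace twisted_avg = (\<Sum>g\<in>G. mtrace (weight g \<cdot>\<^sub>m \<Phi> g))"
    unfolding twisted_avg_def by (rule mtrace_msum, insert FFt_G_carrier, auto)
  also have "\<dots> = (\<Sum>g\<in>G. weight g * complex_of_real ((cmod (mtrace g)) ^ (2*t)))"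
  proof (intro sum.cong refl)
    fix g assume g: "g \<in> G"
    have "mtrace (weight g \<cdot>\<^sub>m \<Phi> g) = weight g * mtrace (\<Phi> g)"
      unfolding mtrace_def using FFt_G_carrier[OF g] by (simp add: sum_distrib_left)
    thus "mtrace (weight g \<cdot>\<^sub>m \<Phi> g) = weight g * complex_of_real ((cmod (mtrace g)) ^ (2*t))"
      using FFt_trace[OF G_carrier[OF g]] by simp
  qed
  also have "\<dots> = cnorm G (\<lambda>g. char_rho g * (mtrace g) ^ t)"
    unfolding cnorm_def cinner_def sum_distrib_left
  proof (intro sum.cong refl)
    fix g
    have p: "(cmod (mtrace g) ^ t)^2 = cmod (mtrace g) ^ (2*t)" by (simp add: power_mult[symmetric] mult.commute)
    have "cnj (char_rho g * mtrace g ^ t) * (char_rho g * mtrace g ^ t) = complex_of_real ((cmod (char_rho g * mtrace g ^ t))^2)"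
      by (rule cnj_self_mult)
    also have "(cmod (char_rho g * mtrace g ^ t))^2 = (cmod (char_rho g))^2 * cmod (mtrace g) ^ (2*t)"
      by (simp add: norm_mult norm_power power_mult_distrib p)
    finally show "weight g * complex_of_real (cmod (mtrace g) ^ (2 * t)) = 1 / of_nat (card G) * (cnj (char_rho g * mtrace g ^ t) * (char_rho g * mtrace g ^ t))"
      unfolding weight_def by simp
  qed
  finally show ?thesis .
qed

lemma P_carrier: "P \<in> carrier_mat N N" by simp

lemma FFt_G_mult_haar_avg: "g \<in> G \<Longrightarrow> \<Phi> g * P = P" using FFt_mult_haar_avg G_unitary by blast

lemma haar_avg_mult_FFt_G: "g \<in> G \<Longrightarrow> P * \<Phi> g = P" using haar_avg_mult_FFt G_unitary by blast

lemma msum_weight_const: assumes X: "X \<in> carrier_mat N N"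
  shows "msum G (\<lambda>g. weight g \<cdot>\<^sub>m X) N N = X"
proof (rule eq_matI)
  fix i j assume "i < dim_row X" "j < dim_col X" hence i: "i < N" and j: "j < N" using X by auto
  have "msum G (\<lambda>g. weight g \<cdot>\<^sub>m X) N N $$ (i,j) = (\<Sum>g\<in>G. weight g * X $$ (i,j))"
    using i j X by (simp add: msum_index)
  also have "\<dots> = X $$ (i,j)" using weight_sum by (simp add: sum_distrib_right[symmetric])
  finally show "msum G (\<lambda>g. weight g \<cdot>\<^sub>m X) N N $$ (i,j) = X $$ (i,j)" .
qed (insert X, auto)

lemma twisted_avg_mult_haar_avg: "twisted_avg * P = P"
proof -
  have "twisted_avg * P = msum G (\<lambda>g. (weight g \<cdot>\<^sub>m \<Phi> g) * P) N N"
    unfolding twisted_avg_def by (rule msum_mult_right, insert FFt_G_carrier, auto)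
  also have "\<dots> = msum G (\<lambda>g. weight g \<cdot>\<^sub>m P) N N"
    by (rule msum_cong, subst mult_smult_assoc_mat[OF FFt_G_carrier P_carrier], auto simp: FFt_G_mult_haar_avg)
  also have "\<dots> = P" by (rule msum_weight_const[OF P_carrier])
  finally show ?thesis .
qed

lemma haar_avg_mult_twisted_avg: "P * twisted_avg = P"
proof -
  have "P * twisted_avg = msum G (\<lambda>g. P * (weight g \<cdot>\<^sub>m \<Phi> g)) N N"
    unfolding twisted_avg_def by (rule msum_mult_left[OF P_carrier], insert FFt_G_carrier, auto)
  also have "\<dots> = msum G (\<lambda>g. weight g \<cdot>\<^sub>m P) N N"
    by (rule msum_cong, subst mult_smult_distrib[OF P_carrier FFt_G_carrier], auto simp: haar_avg_mult_FFt_G)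
  also have "\<dots> = P" by (rule msum_weight_const[OF P_carrier])
  finally show ?thesis .
qed

lemma twisted_avg_dims[simp]: "dim_row twisted_avg = N" "dim_col twisted_avg = N" unfolding twisted_avg_def by simp_all

lemma twisted_avg_mult_vec_carrier: "x \<in> carrier_vec N \<Longrightarrow> twisted_avg *\<^sub>v x \<in> carrier_vec N"
  using mult_mat_vec_carrier[OF twisted_avg_carrier] by blast

lemma twisted_avg_haar_avg_vec: "x \<in> carrier_vec N \<Longrightarrow> twisted_avg *\<^sub>v (P *\<^sub>v x) = P *\<^sub>v x"
  using assoc_mult_mat_vec[OF twisted_avg_carrier P_carrier, of x] twisted_avg_mult_haar_avg by simp

lemma haar_avg_twisted_avg_vec: "x \<in> carrier_vec N \<Longrightarrow> P *\<^sub>v (twisted_avg *\<^sub>v x) = P *\<^sub>v x"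
  using assoc_mult_mat_vec[OF P_carrier twisted_avg_carrier, of x] haar_avg_mult_twisted_avg by simp

lemma haar_avg_idem_vec: "x \<in> carrier_vec N \<Longrightarrow> P *\<^sub>v (P *\<^sub>v x) = P *\<^sub>v x"
  using assoc_mult_mat_vec[OF P_carrier P_carrier, of x] haar_avg_idem by simp

lemma vinner_twisted_avg: assumes x: "x \<in> carrier_vec N" and y: "y \<in> carrier_vec N"
  shows "vinner y (twisted_avg *\<^sub>v x) = (\<Sum>g\<in>G. weight g * vinner y (\<Phi> g *\<^sub>v x))"
proof -
  have "vinner y (twisted_avg *\<^sub>v x) = (\<Sum>g\<in>G. vinner y ((weight g \<cdot>\<^sub>m \<Phi> g) *\<^sub>v x))"
    unfolding twisted_avg_def by (rule vinner_msum[OF _ x y], insert FFt_G_carrier, auto)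
  also have "\<dots> = (\<Sum>g\<in>G. weight g * vinner y (\<Phi> g *\<^sub>v x))"
  proof (intro sum.cong refl)
    fix g assume g: "g \<in> G"
    show "vinner y ((weight g \<cdot>\<^sub>m \<Phi> g) *\<^sub>v x) = weight g * vinner y (\<Phi> g *\<^sub>v x)"
      unfolding smult_mult_mat_vec[OF FFt_G_carrier[OF g] x] by (rule vinner_smult_right, insert FFt_G_carrier[OF g] y, simp)
  qed
  finally show ?thesis .
qed

definition \<Gamma> :: "((nat \<times> nat) \<times> (nat \<times> nat) \<times> nat) set" where
  "\<Gamma> = ({..<d} \<times> {..<d}) \<times> ({..<d} \<times> {..<d}) \<times> {..<N}"

definition \<beta> :: "((nat \<times> nat) \<times> (nat \<times> nat) \<times> nat) \<Rightarrow> complex vec \<Rightarrow> complex" where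
  "\<beta> c z = (\<Sum>k\<in>G. \<sigma> k $$ (fst c) * cnj (\<sigma> k $$ (fst (snd c))) * (\<Phi> k *\<^sub>v z) $ (snd (snd c))) / of_nat (card G)"

lemma finite_Gamma: "finite \<Gamma>" unfolding \<Gamma>_def by simp

lemma vinner_FFt_madj_mult: assumes h: "h \<in> G" and k: "k \<in> G" and x: "x \<in> carrier_vec N" and y: "y \<in> carrier_vec N"
  shows "vinner y (\<Phi> (madj h * k) *\<^sub>v x) = (\<Sum>i\<in>{..<N}. cnj ((\<Phi> h *\<^sub>v y) $ i) * (\<Phi> k *\<^sub>v x) $ i)"
proof -
  have hc: "h \<in> carrier_mat q q" and kc: "k \<in> carrier_mat q q" using G_carrier h k by auto
  have Fh: "\<Phi> h \<in> carrier_mat N N" and Fk: "\<Phi> k \<in> carrier_mat N N" using FFt_G_carrier h k by auto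
  have "\<Phi> (madj h * k) = madj (\<Phi> h) * \<Phi> k" using FFt_mult[OF madj_carrier[OF hc] kc] FFt_madj by simp
  hence "vinner y (\<Phi> (madj h * k) *\<^sub>v x) = vinner y (madj (\<Phi> h) *\<^sub>v (\<Phi> k *\<^sub>v x))"
    using assoc_mult_mat_vec[OF madj_carrier[OF Fh] Fk x] by simp
  also have "\<dots> = vinner (\<Phi> h *\<^sub>v y) (\<Phi> k *\<^sub>v x)"
    using vinner_mult_mat_vec[OF madj_carrier[OF Fh] y, of "\<Phi> k *\<^sub>v x"] Fk x by simp
  also have "\<dots> = (\<Sum>i\<in>{..<N}. cnj ((\<Phi> h *\<^sub>v y) $ i) * (\<Phi> k *\<^sub>v x) $ i)" unfolding vinner_def using Fh by simp
  finally show ?thesis .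
qed

text \<open>Averaging over pairs \<open>(h, k)\<close> with \<open>g = h\<^sup>* k\<close> and expanding
  \<open>|\<lambda>(h\<^sup>* k)|\<^sup>2 = |\<Sum>\<^sub>p conj (\<sigma> h)\<^sub>p (\<sigma> k)\<^sub>p|\<^sup>2\<close> writes \<open>twisted_avg\<close> as a Gram matrix with coefficient
  functionals \<open>\<beta>\<close>.\<close>

lemma vinner_twisted_avg_gram: assumes x: "x \<in> carrier_vec N" and y: "y \<in> carrier_vec N"
  shows "vinner y (twisted_avg *\<^sub>v x) = (\<Sum>c\<in>\<Gamma>. cnj (\<beta> c y) * \<beta> c x)"
proof -
  let ?n = "of_nat (card G) :: complex"
  have n0: "?n \<noteq> 0" using card_G_pos by simp
  define W where "W c z = (\<Sum>k\<in>G. \<sigma> k $$ (fst c) * cnj (\<sigma> k $$ (fst (snd c))) * (\<Phi> k *\<^sub>v z) $ (snd (snd c)))" for c z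
  have bW: "\<beta> c z = W c z / ?n" for c z unfolding \<beta>_def W_def ..
  define T where "T g = char_rho g * cnj (char_rho g) * vinner y (\<Phi> g *\<^sub>v x)" for g
  have tg: "weight g * vinner y (\<Phi> g *\<^sub>v x) = T g / ?n" for g
    unfolding weight_def T_def complex_norm_square by simp
  have "vinner y (twisted_avg *\<^sub>v x) = (\<Sum>g\<in>G. T g) / ?n"
    unfolding vinner_twisted_avg[OF x y] tg sum_divide_distrib ..
  also have "(\<Sum>g\<in>G. T g) = (\<Sum>h\<in>G. \<Sum>k\<in>G. T (madj h * k)) / ?n"
    using sum_double_madj_mult[of T] n0 by (simp add: field_simps)
  also have "(\<Sum>h\<in>G. \<Sum>k\<in>G. T (madj h * k)) = (\<Sum>h\<in>G. \<Sum>k\<in>G.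
      (\<Sum>p\<in>{..<d} \<times> {..<d}. cnj (\<sigma> h $$ p) * \<sigma> k $$ p) * cnj (\<Sum>p\<in>{..<d} \<times> {..<d}. cnj (\<sigma> h $$ p) * \<sigma> k $$ p)
       * (\<Sum>i\<in>{..<N}. cnj ((\<Phi> h *\<^sub>v y) $ i) * (\<Phi> k *\<^sub>v x) $ i))"
  proof (intro sum.cong refl)
    fix h k assume h: "h \<in> G" and k: "k \<in> G"
    have "char_rho (madj h * k) = (\<Sum>p\<in>{..<d} \<times> {..<d}. cnj (\<sigma> h $$ p) * \<sigma> k $$ p)"
      unfolding char_rho_def char_madj_mult[OF h k] by (simp add: sum.cartesian_product)
    thus "T (madj h * k) = (\<Sum>p\<in>{..<d} \<times> {..<d}. cnj (\<sigma> h $$ p) * \<sigma> k $$ p) * cnj (\<Sum>p\<in>{..<d} \<times> {..<d}. cnj (\<sigma> h $$ p) * \<sigma> k $$ p)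
       * (\<Sum>i\<in>{..<N}. cnj ((\<Phi> h *\<^sub>v y) $ i) * (\<Phi> k *\<^sub>v x) $ i)"
      unfolding T_def vinner_FFt_madj_mult[OF h k x y] by simp
  qed
  also have "\<dots> = (\<Sum>c\<in>({..<d} \<times> {..<d}) \<times> ({..<d} \<times> {..<d}) \<times> {..<N}.
       cnj (\<Sum>h\<in>G. \<sigma> h $$ (fst c) * cnj (\<sigma> h $$ (fst (snd c))) * (\<Phi> h *\<^sub>v y) $ (snd (snd c))) *
           (\<Sum>k\<in>G. \<sigma> k $$ (fst c) * cnj (\<sigma> k $$ (fst (snd c))) * (\<Phi> k *\<^sub>v x) $ (snd (snd c))))"
    by (rule gram_double_sum_expand[OF finite_G], auto)
  also have "\<dots> = (\<Sum>c\<in>\<Gamma>. cnj (W c y) * W c x)" unfolding \<Gamma>_def W_def ..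
  also have "\<dots> / ?n / ?n = (\<Sum>c\<in>\<Gamma>. cnj (\<beta> c y) * \<beta> c x)"
  proof -
    have "cnj (\<beta> c y) * \<beta> c x = cnj (W c y) * W c x / ?n / ?n" for c unfolding bW by simp
    thus ?thesis by (simp only: sum_divide_distrib)
  qed
  finally show ?thesis .
qed

text \<open>The \<open>P\<close>-terms cancel because \<open>twisted_avg P = P twisted_avg = P\<close> and \<open>P\<close> is an orthogonal projection.\<close>

lemma vinner_defect: assumes x: "x \<in> carrier_vec N" and y: "y \<in> carrier_vec N"
  shows "vinner y (twisted_avg *\<^sub>v x) - vinner y (P *\<^sub>v x) = vinner (y - P *\<^sub>v y) (twisted_avg *\<^sub>v (x - P *\<^sub>v x))"
proof -
  have Px: "P *\<^sub>v x \<in> carrier_vec N" and Py: "P *\<^sub>v y \<in> carrier_vec N" using x y by auto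
  have Ax: "twisted_avg *\<^sub>v x \<in> carrier_vec N" using twisted_avg_mult_vec_carrier[OF x] .
  have "twisted_avg *\<^sub>v (x - P *\<^sub>v x) = twisted_avg *\<^sub>v x - P *\<^sub>v x"
    using mult_minus_distrib_mat_vec[OF twisted_avg_carrier x Px] twisted_avg_haar_avg_vec[OF x] by simp
  hence "vinner (y - P *\<^sub>v y) (twisted_avg *\<^sub>v (x - P *\<^sub>v x)) = vinner (y - P *\<^sub>v y) (twisted_avg *\<^sub>v x - P *\<^sub>v x)" by simp
  also have "\<dots> = vinner y (twisted_avg *\<^sub>v x - P *\<^sub>v x) - vinner (P *\<^sub>v y) (twisted_avg *\<^sub>v x - P *\<^sub>v x)"
    by (rule vinner_minus_left, insert y Py, simp)
  also have "vinner y (twisted_avg *\<^sub>v x - P *\<^sub>v x) = vinner y (twisted_avg *\<^sub>v x) - vinner y (P *\<^sub>v x)"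
    by (rule vinner_minus_right, insert y Ax Px, auto)
  also have "vinner (P *\<^sub>v y) (twisted_avg *\<^sub>v x - P *\<^sub>v x) = vinner (P *\<^sub>v y) (twisted_avg *\<^sub>v x) - vinner (P *\<^sub>v y) (P *\<^sub>v x)"
    by (rule vinner_minus_right, insert Py Ax Px, auto)
  also have "vinner (P *\<^sub>v y) (twisted_avg *\<^sub>v x) = vinner y (P *\<^sub>v x)"
    using vinner_haar_avg_swap[OF Ax y] haar_avg_twisted_avg_vec[OF x] by simp
  also have "vinner (P *\<^sub>v y) (P *\<^sub>v x) = vinner y (P *\<^sub>v x)"
    using vinner_haar_avg_swap[OF Px y] haar_avg_idem_vec[OF x] by simp
  finally show ?thesis by simp
qed

lemma vinner_defect_gram: assumes x: "x \<in> carrier_vec N" and y: "y \<in> carrier_vec N"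
  shows "vinner y (twisted_avg *\<^sub>v x) - vinner y (P *\<^sub>v x) = (\<Sum>c\<in>\<Gamma>. cnj (\<beta> c (y - P *\<^sub>v y)) * \<beta> c (x - P *\<^sub>v x))"
  unfolding vinner_defect[OF x y] by (rule vinner_twisted_avg_gram, insert x y, auto)

lemma vinner_defect_nonneg: assumes x: "x \<in> carrier_vec N"
  shows "Im (vinner x (twisted_avg *\<^sub>v x) - vinner x (P *\<^sub>v x)) = 0" "Re (vinner x (twisted_avg *\<^sub>v x) - vinner x (P *\<^sub>v x)) \<ge> 0"
  unfolding vinner_defect_gram[OF x x] by (rule sum_cnj_mult_self(1)[OF finite_Gamma], rule sum_cnj_mult_self(2)[OF finite_Gamma])

lemma defect_vanishing: assumes x: "x \<in> carrier_vec N" and z: "vinner x (twisted_avg *\<^sub>v x) - vinner x (P *\<^sub>v x) = 0"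
  shows "twisted_avg *\<^sub>v x = P *\<^sub>v x"
proof -
  have b0: "\<forall>c\<in>\<Gamma>. \<beta> c (x - P *\<^sub>v x) = 0"
    by (rule sum_cnj_mult_self(3)[OF finite_Gamma], insert z, unfold vinner_defect_gram[OF x x])
  show ?thesis
  proof (rule vec_eq_by_vinner[of _ N])
    fix y :: "complex vec" assume y: "y \<in> carrier_vec N"
    have "vinner y (twisted_avg *\<^sub>v x) - vinner y (P *\<^sub>v x) = 0" unfolding vinner_defect_gram[OF x y] using b0 by simp
    thus "vinner y (twisted_avg *\<^sub>v x) = vinner y (P *\<^sub>v x)" by simp
  qed (insert x twisted_avg_mult_vec_carrier[OF x], simp_all)
qed

lemma vinner_haar_avg_nonneg: assumes x: "x \<in> carrier_vec N"
  shows "Im (vinner x (P *\<^sub>v x)) = 0 \<and> Re (vinner x (P *\<^sub>v x)) \<ge> 0"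
proof -
  have "vinner x (P *\<^sub>v x) = vinner (P *\<^sub>v x) (P *\<^sub>v x)" using vinner_haar_avg_swap[OF haar_avg_mult_vec_carrier[OF x] x] haar_avg_idem_vec[OF x] by simp
  thus ?thesis using vinner_self_nonneg by simp
qed

lemma twisted_design_iff: "twisted_unitary_design q M G char_rho t \<longleftrightarrow> twisted_avg = P"
  unfolding twisted_unitary_design_def twisted_avg_as_mat haar_avg_def ..

lemma norm_condition_iff:
  "cnorm G (\<lambda>g. char_rho g * (mtrace g) ^ t) = of_real (LINT U|M. (cmod (mtrace U)) ^ (2 * t))
     \<longleftrightarrow> mtrace twisted_avg = mtrace P"
  unfolding mtrace_twisted_avg mtrace_haar_avg ..

lemma twisted_avg_eq_iff_trace: "twisted_avg = P \<longleftrightarrow> mtrace twisted_avg = mtrace P"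
proof
  assume tr: "mtrace twisted_avg = mtrace P"
  let ?f = "\<lambda>i. vinner (unit_vec N i) (twisted_avg *\<^sub>v unit_vec N i) - vinner (unit_vec N i) (P *\<^sub>v unit_vec N i)"
  have "sum ?f {..<N} = mtrace twisted_avg - mtrace P"
    unfolding mtrace_eq_sum_vinner[OF twisted_avg_carrier] mtrace_eq_sum_vinner[OF P_carrier] by (simp add: sum_subtractf)
  hence "\<forall>i\<in>{..<N}. ?f i = 0"
    using tr vinner_defect_nonneg[OF unit_vec_carrier] by (intro sum_nonneg_complex_eq_0) auto
  hence "\<And>j. j < N \<Longrightarrow> twisted_avg *\<^sub>v unit_vec N j = P *\<^sub>v unit_vec N j" by (intro defect_vanishing) auto
  thus "twisted_avg = P" by (rule mat_eq_by_unit_vec[OF twisted_avg_carrier P_carrier])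
qed simp

lemma cinner_abs_sq_char: "cinner G (\<lambda>g. cnj (char_rho g) * char_rho g) R' = (\<Sum>g\<in>G. weight g * R' g)"
  unfolding cinner_def weight_def by (simp add: sum_distrib_left cnj_self_mult)

lemma twisted_avg_intertwiner:
  assumes J: "J \<in> carrier_mat N e" and R: "\<And>U. U \<in> unitary_group q \<Longrightarrow> R U \<in> carrier_mat e e"
    and JR: "\<And>U. U \<in> unitary_group q \<Longrightarrow> \<Phi> U * J = J * R U"
  shows "twisted_avg * J = J * msum G (\<lambda>g. weight g \<cdot>\<^sub>m R g) e e"
proof -
  have "twisted_avg * J = msum G (\<lambda>g. (weight g \<cdot>\<^sub>m \<Phi> g) * J) N e"
    unfolding twisted_avg_def by (rule msum_mult_right[OF _ J], insert FFt_G_carrier, auto)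
  also have "\<dots> = msum G (\<lambda>g. J * (weight g \<cdot>\<^sub>m R g)) N e"
    using mult_smult_assoc_mat[OF FFt_G_carrier J] mult_smult_distrib[OF J R[OF G_unitary]] JR[OF G_unitary]
    by (intro msum_cong) simp
  also have "\<dots> = J * msum G (\<lambda>g. weight g \<cdot>\<^sub>m R g) e e"
    by (rule msum_mult_left[symmetric, OF J], insert R G_unitary, auto)
  finally show ?thesis .
qed

text \<open>The \<open>|\<lambda>|\<^sup>2\<close>-weighted average \<open>B\<close> of \<open>R\<close> is fixed by every \<open>R U\<close> since \<open>P\<close> is, hence vanishes
  for nontrivial \<open>R\<close>; and \<open>tr B\<close> is the inner product in question.\<close>

lemma design_imp_char_orth:
  assumes AP: "twisted_avg = P" and E: "in_E q t e R" and nt: "\<not> trivial_rep (unitary_group q) e R"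
  shows "cinner G (\<lambda>g. cnj (char_rho g) * char_rho g) (\<lambda>g. mtrace (R g)) = 0"
proof -
  have irr: "irreducible_rep (unitary_group q) e R" using E unfolding in_E_def by simp
  have R: "\<And>U. U \<in> unitary_group q \<Longrightarrow> R U \<in> carrier_mat e e" by (rule irreducible_rep_carrier[OF irr])
  obtain J where J: "J \<in> carrier_mat N e" and J0: "J \<noteq> 0\<^sub>m N e"
    and JR: "\<And>U. U \<in> unitary_group q \<Longrightarrow> \<Phi> U * J = J * R U"
    using E unfolding in_E_def occurs_in_def by auto
  define B where "B = msum G (\<lambda>g. weight g \<cdot>\<^sub>m R g) e e"
  have B: "B \<in> carrier_mat e e" unfolding B_def by simp
  have AJ: "twisted_avg * J = J * B" unfolding B_def by (rule twisted_avg_intertwiner[OF J R JR])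
  have "R V * B = B" if V: "V \<in> unitary_group q" for V
  proof -
    have F: "\<Phi> V \<in> carrier_mat N N" using FFt_carrier[OF unitary_carrier[OF V]] .
    have "J * (R V * B) = \<Phi> V * (P * J)" using assoc_mult_mat[OF J R[OF V] B] JR[OF V]
        assoc_mult_mat[OF F J B] AJ AP by simp
    also have "\<dots> = J * B" using assoc_mult_mat[OF F P_carrier J] FFt_mult_haar_avg[OF V] AJ AP by simp
    finally have eq: "J * (R V * B) = J * B" .
    show ?thesis
    proof (rule mat_eq_by_mult_vec[OF mult_carrier_mat[OF R[OF V] B] B])
      fix x :: "complex vec" assume x: "x \<in> carrier_vec e"
      have c: "(R V * B) *\<^sub>v x \<in> carrier_vec e" "B *\<^sub>v x \<in> carrier_vec e" using R[OF V] B x by auto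
      have "J *\<^sub>v ((R V * B) *\<^sub>v x) = J *\<^sub>v (B *\<^sub>v x)"
        using assoc_mult_mat_vec[OF J mult_carrier_mat[OF R[OF V] B] x] assoc_mult_mat_vec[OF J B x] eq by simp
      hence "J *\<^sub>v ((R V * B) *\<^sub>v x - B *\<^sub>v x) = 0\<^sub>v N"
        using mult_minus_distrib_mat_vec[OF J c] minus_cancel_vec[OF mult_mat_vec_carrier[OF J c(2)]] by simp
      hence "(R V * B) *\<^sub>v x - B *\<^sub>v x = 0\<^sub>v e"
        using intertwiner_injective[OF irr J J0 FFt_carrier[OF unitary_carrier] JR] c by simp
      thus "(R V * B) *\<^sub>v x = B *\<^sub>v x" using minus_vec_eq_0_iff[OF c] by simp
    qed
  qed
  hence "B = 0\<^sub>m e e" by (rule irreducible_fixed_image_zero[OF irr nt B])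
  hence "mtrace B = 0" unfolding mtrace_def by simp
  moreover have "mtrace B = (\<Sum>g\<in>G. weight g * mtrace (R g))"
    unfolding B_def using R G_unitary by (subst mtrace_msum) (auto intro!: sum.cong mtrace_smult)
  ultimately show ?thesis unfolding cinner_abs_sq_char by simp
qed

sublocale F: unitary_rep "unitary_group q" N \<Phi> by (rule unitary_rep_FFt)

lemma twisted_avg_fixed_vec:
  assumes x: "x \<in> carrier_vec N" and fixed: "\<And>U. U \<in> unitary_group q \<Longrightarrow> \<Phi> U *\<^sub>v x = x"
  shows "twisted_avg *\<^sub>v x = P *\<^sub>v x"
  using haar_avg_invariant_vec[OF x fixed] twisted_avg_haar_avg_vec[OF x] by simp

lemma sum_vinner_twisted_avg_frame:
  assumes J: "F.invariant_frame J e"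
  shows "(\<Sum>a<e. vinner (col J a) (twisted_avg *\<^sub>v col J a))
    = cinner G (\<lambda>g. cnj (char_rho g) * char_rho g) (\<lambda>g. mtrace (F.compress J g))"
proof -
  have Jc: "J \<in> carrier_mat N e" using J unfolding F.invariant_frame_def by simp
  have colc: "col J a \<in> carrier_vec N" for a by (rule col_carrier[OF Jc])
  have tr: "mtrace (F.compress J g) = (\<Sum>a<e. vinner (col J a) (\<Phi> g *\<^sub>v col J a))" if g: "g \<in> G" for g
  proof -
    have "mtrace (F.compress J g) = (\<Sum>a<e. F.compress J g $$ (a,a))"
      unfolding mtrace_def F.compress_def using Jc FFt_G_carrier[OF g] by simp
    also have "\<dots> = (\<Sum>a<e. vinner (col J a) (\<Phi> g *\<^sub>v col J a))"
      unfolding F.compress_def by (intro sum.cong refl, rule madj_mult_mult_index[OF Jc FFt_G_carrier[OF g] Jc]) auto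
    finally show ?thesis .
  qed
  have "(\<Sum>a<e. vinner (col J a) (twisted_avg *\<^sub>v col J a)) = (\<Sum>a<e. \<Sum>g\<in>G. weight g * vinner (col J a) (\<Phi> g *\<^sub>v col J a))"
    by (intro sum.cong refl, rule vinner_twisted_avg[OF colc colc])
  also have "\<dots> = (\<Sum>g\<in>G. weight g * mtrace (F.compress J g))"
    by (subst sum.swap, intro sum.cong refl, simp add: tr sum_distrib_left)
  finally show ?thesis unfolding cinner_abs_sq_char .
qed

text \<open>Uses that both \<open>twisted_avg - P\<close> and \<open>P\<close> are positive semidefinite.\<close>

lemma twisted_avg_eq_on_frame:
  assumes J: "J \<in> carrier_mat N e" and z: "(\<Sum>a<e. vinner (col J a) (twisted_avg *\<^sub>v col J a)) = 0"
  shows "(twisted_avg - P) * J = 0\<^sub>m N e"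
proof -
  have colc: "col J a \<in> carrier_vec N" for a by (rule col_carrier[OF J])
  have "Im (vinner (col J a) (twisted_avg *\<^sub>v col J a)) = 0 \<and> Re (vinner (col J a) (twisted_avg *\<^sub>v col J a)) \<ge> 0" for a
    using vinner_defect_nonneg[OF colc, of a] vinner_haar_avg_nonneg[OF colc, of a] by auto
  hence "\<forall>a\<in>{..<e}. vinner (col J a) (twisted_avg *\<^sub>v col J a) = 0" using z by (intro sum_nonneg_complex_eq_0) auto
  hence "vinner (col J a) (twisted_avg *\<^sub>v col J a) - vinner (col J a) (P *\<^sub>v col J a) = 0" if "a < e" for a
    using that vinner_defect_nonneg[OF colc, of a] vinner_haar_avg_nonneg[OF colc, of a] by (auto simp: complex_eq_iff)
  hence "twisted_avg *\<^sub>v col J a = P *\<^sub>v col J a" if "a < e" for a using defect_vanishing[OF colc] that by simp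
  thus ?thesis by (rule minus_mult_eq_0_if_cols[OF twisted_avg_carrier P_carrier J])
qed

lemma char_orth_imp_design:
  assumes C: "\<forall>e R. in_E q t e R \<and> \<not> trivial_rep (unitary_group q) e R
                 \<longrightarrow> cinner G (\<lambda>g. cnj (char_rho g) * char_rho g) (\<lambda>g. mtrace (R g)) = 0"
  shows "twisted_avg = P"
proof -
  have "twisted_avg - P = 0\<^sub>m N N"
  proof (rule F.zero_if_zero_on_irreducible_frames)
    fix e J assume J: "F.invariant_frame J e" and irr: "irreducible_rep (unitary_group q) e (F.compress J)"
    have Jc: "J \<in> carrier_mat N e" and JJ: "madj J * J = 1\<^sub>m e"
      and JR: "\<And>U. U \<in> unitary_group q \<Longrightarrow> \<Phi> U * J = J * F.compress J U"
      using J unfolding F.invariant_frame_def F.compress_def by auto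
    show "(twisted_avg - P) * J = 0\<^sub>m N e"
    proof (cases "trivial_rep (unitary_group q) e (F.compress J)")
      case True
      hence e: "e = 1" and JU: "\<And>U. U \<in> unitary_group q \<Longrightarrow> \<Phi> U * J = J"
        using JR Jc unfolding trivial_rep_def by auto
      have "\<Phi> U *\<^sub>v col J 0 = col J 0" if "U \<in> unitary_group q" for U
        using col_mult2[OF FFt_carrier[OF unitary_carrier[OF that]] Jc, of 0] JU[OF that] e by simp
      hence "twisted_avg *\<^sub>v col J 0 = P *\<^sub>v col J 0"
        using twisted_avg_fixed_vec[OF col_carrier[OF Jc]] by simp
      thus ?thesis using e by (intro minus_mult_eq_0_if_cols[OF twisted_avg_carrier P_carrier Jc]) auto
    next
      case False
      have "J \<noteq> 0\<^sub>m N e"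
      proof
        assume "J = 0\<^sub>m N e"
        hence "(1\<^sub>m e :: complex mat) $$ (0, 0) = (0\<^sub>m e e :: complex mat) $$ (0, 0)" using JJ by simp
        thus False using irr unfolding irreducible_rep_def by simp
      qed
      hence "in_E q t e (F.compress J)" unfolding in_E_def occurs_in_def using irr Jc JR by blast
      hence "(\<Sum>a<e. vinner (col J a) (twisted_avg *\<^sub>v col J a)) = 0"
        using C False sum_vinner_twisted_avg_frame[OF J] by simp
      thus ?thesis by (rule twisted_avg_eq_on_frame[OF Jc])
    qed
  qed (rule minus_carrier_mat[OF P_carrier])
  thus ?thesis using minus_mat_eq_0_iff[OF twisted_avg_carrier P_carrier] by simp
qed

end

theorem lemma3:
  fixes q t d :: nat and G :: "complex mat set" and M :: "complex mat measure"
    and \<rho> :: "complex mat \<Rightarrow> complex mat"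
  assumes "q \<ge> 1"
    and "haar_measure q M"
    and "finite_subgroup_unitary q G"
    and "irreducible_rep G d \<rho>"
  defines "lam \<equiv> (\<lambda>g. mtrace (\<rho> g))"
  shows "(twisted_unitary_design q M G lam t
          \<longleftrightarrow> cnorm G (\<lambda>g. lam g * (mtrace g) ^ t)
              = of_real (LINT U|M. (cmod (mtrace U)) ^ (2 * t)))
       \<and> (twisted_unitary_design q M G lam t
          \<longleftrightarrow> (\<forall>e R. in_E q t e R \<and> \<not> trivial_rep (unitary_group q) e R
                 \<longrightarrow> cinner G (\<lambda>g. cnj (lam g) * lam g) (\<lambda>g. mtrace (R g)) = 0))"
proof -
  interpret twisted_setting q M G d \<rho> t
    using assms(2-4) by unfold_locales (auto simp: haar_unitary_def finite_irrep_def)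
  have lam: "lam = char_rho" unfolding lam_def char_rho_def ..
  show ?thesis unfolding lam twisted_design_iff norm_condition_iff twisted_avg_eq_iff_trace[symmetric]
    using design_imp_char_orth char_orth_imp_design by blast
qed

end
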